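(* Let $\mathcal{P}=\langle\,\Sigma\mid\mathcal{R}\,\rangle$ be a semigroup presentation and let $M$ be the monoid presented by $\mathcal{P}$. Let $u,v$ be words over $\Sigma$ and let $\Delta$ be a $(uv,uv)$-diagram over $\mathcal{P}$. Let $o_1$ (resp. $o_2$) be the vertex of the top (resp. bottom) path of $\Delta$ that subdivides this path into a product of two paths labeled $u$ and $v$. Suppose $o$ is a vertex of $\Delta$ with $o\le o_1$ and $o\le o_2$. If $\Delta$ is equivalent to a sum of a $(u,u)$-diagram and a $(v,v)$-diagram, then $\mu(o,o_1)=\mu(o,o_2)$ in $M$.
   Context: A diagram over a semigroup presentation $\mathcal{P}=\langle\,\Sigma\mid\mathcal{R}\,\rangle$ is a planar labeled oriented graph obtained from a horizontal positive path labeled by a word $w$ by repeatedly attaching cells: for a relation $u=v$ (or $v=u$) in $\mathcal{R}$ and a subpath of the current bottom path labeled $u$, attach below it a positive path with the same endpoints labeled $v$, the two paths bounding a cell. A $(w,w')$-diagram has top path labeled $w$ and bottom path labeled $w'$; diagrams are considered up to planar isotopy. A dipole is a pair of cells where the bottom path of one coincides with the top path of the other and the cells are mirror images; removing dipoles gives the (unique) reduced form, and two diagrams are equivalent if they have the same reduced form. For vertices $o',o''$ of a diagram $\Delta$, write $o'\le o''$ if there is a positive (directed) path in $\Delta$ from $o'$ to $o''$; then the labels of all positive paths from $o'$ to $o''$ represent the same element of $M$, denoted $\mu(o',o'')$. The sum $\Delta+\Delta'$ of a $(u,v)$-diagram $\Delta$ and a $(u',v')$-diagram $\Delta'$ is the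 $(uu',vv')$-diagram obtained by identifying the terminal vertex of the top path of $\Delta$ with the initial vertex of the top path of $\Delta'$ (placing $\Delta'$ to the right of $\Delta$). A diagram is spherical if it is a $(w,w)$-diagram for some $w$. *)

theory Defs
  imports Main "HOL-Library.Nat_Bijection"
begin

definition rewr1 :: "('a list \<times> 'a list) set \<Rightarrow> ('a list \<times> 'a list) set" where
  "rewr1 R = {(s @ x @ t, s @ y @ t) | s x y t. (x, y) \<in> R \<or> (y, x) \<in> R}"

text \<open>Element of the presented monoid M represented by a word: its congruence class.\<close>
definition pres_class :: "('a list \<times> 'a list) set \<Rightarrow> 'a list \<Rightarrow> 'a list set" where
  "pres_class R w = {w'. (w, w') \<in> (rewr1 R)\<^sup>*}"

text \<open>A path is given by its list of vertices (length n+1) and its list of edges (length n).\<close>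
type_synonym dpath = "nat list \<times> nat list"

record 'a dgm =
  verts :: "nat set"
  edges :: "nat set"
  esrc  :: "nat \<Rightarrow> nat"
  etgt  :: "nat \<Rightarrow> nat"
  elab  :: "nat \<Rightarrow> 'a"
  cells :: "nat set"
  ctop  :: "nat \<Rightarrow> dpath"
  cbot  :: "nat \<Rightarrow> dpath"
  tpath :: dpath
  bpath :: dpath

definition map_dpath :: "(nat \<Rightarrow> nat) \<Rightarrow> (nat \<Rightarrow> nat) \<Rightarrow> dpath \<Rightarrow> dpath" where
  "map_dpath fv fe p = (map fv (fst p), map fe (snd p))"

text \<open>A derivation step (p, x, y): at position p of the current bottom path a
 subpath labelled x is found and a cell with bottom path labelled y is attached below it.\<close>
type_synonym 'a dstep = "nat \<times> 'a list \<times> 'a list"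

definition init_dgm :: "'a list \<Rightarrow> 'a dgm" where
  "init_dgm w = (let vs = map (\<lambda>j. prod_encode (0, j)) [0..<Suc (length w)];
                    es = map (\<lambda>j. prod_encode (0, j)) [0..<length w] in
   \<lparr> verts = set vs, edges = set es,
     esrc = (\<lambda>e. prod_encode (0, snd (prod_decode e))),
     etgt = (\<lambda>e. prod_encode (0, Suc (snd (prod_decode e)))),
     elab = (\<lambda>e. w ! snd (prod_decode e)),
     cells = {}, ctop = (\<lambda>_. ([], [])), cbot = (\<lambda>_. ([], [])),
     tpath = (vs, es), bpath = (vs, es) \<rparr>)"

definition apply_step :: "nat \<Rightarrow> 'a dstep \<Rightarrow> 'a dgm \<Rightarrow> 'a dgm" where
  "apply_step k s D = (case s of (p, x, y) \<Rightarrow>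
     (let bv = fst (bpath D); be = snd (bpath D);
          nv = [bv ! p] @ map (\<lambda>j. prod_encode (Suc k, j)) [1..<length y] @ [bv ! (p + length x)];
          ne = map (\<lambda>j. prod_encode (Suc k, j)) [0..<length y];
          isnew = (\<lambda>e. fst (prod_decode e) = Suc k \<and> snd (prod_decode e) < length y) in
      D\<lparr> verts := verts D \<union> set nv,
         edges := edges D \<union> set ne,
         esrc := (\<lambda>e. if isnew e then nv ! snd (prod_decode e) else esrc D e),
         etgt := (\<lambda>e. if isnew e then nv ! Suc (snd (prod_decode e)) else etgt D e),
         elab := (\<lambda>e. if isnew e then y ! snd (prod_decode e) else elab D e),
         cells := insert k (cells D),
         ctop := (ctop D)(k := (take (Suc (length x)) (drop p bv), take (length x) (drop p be))),
         cbot := (cbot D)(k := (nv, ne)),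
         bpath := (take p bv @ nv @ drop (Suc (p + length x)) bv,
                   take p be @ ne @ drop (p + length x) be) \<rparr>))"

fun build_aux :: "nat \<Rightarrow> 'a dgm \<Rightarrow> 'a dstep list \<Rightarrow> 'a dgm" where
  "build_aux k D [] = D"
| "build_aux k D (s # ss) = build_aux (Suc k) (apply_step k s D) ss"

definition build :: "'a list \<Rightarrow> 'a dstep list \<Rightarrow> 'a dgm" where
  "build w ss = build_aux 0 (init_dgm w) ss"

fun final_word :: "'a list \<Rightarrow> 'a dstep list \<Rightarrow> 'a list" where
  "final_word x [] = x"
| "final_word x ((p, a, b) # ss) = final_word (take p x @ b @ drop (p + length a) x) ss"

fun valid_steps :: "('a list \<times> 'a list) set \<Rightarrow> 'a list \<Rightarrow> 'a dstep list \<Rightarrow> bool" where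
  "valid_steps R x [] = True"
| "valid_steps R x ((p, a, b) # ss) =
     (((a, b) \<in> R \<or> (b, a) \<in> R) \<and> p + length a \<le> length x \<and>
      take (length a) (drop p x) = a \<and>
      valid_steps R (take p x @ b @ drop (p + length a) x) ss)"

definition is_diagram :: "('a list \<times> 'a list) set \<Rightarrow> 'a list \<Rightarrow> 'a dstep list \<Rightarrow> 'a list \<Rightarrow> bool" where
  "is_diagram R w ss w' \<longleftrightarrow> valid_steps R w ss \<and> final_word w ss = w'"

text \<open>Sum of diagrams: the second diagram is placed to the right of the first one.\<close>
definition sum_steps :: "'a list \<Rightarrow> 'a dstep list \<Rightarrow> 'a dstep list \<Rightarrow> 'a dstep list" where
  "sum_steps w1 ss1 ss2 =
     ss1 @ map (\<lambda>(p, a, b). (p + length (final_word w1 ss1), a, b)) ss2"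

subsection \<open>Planar isotopy (isomorphism of the labelled cell complexes)\<close>

definition dgm_iso :: "'a dgm \<Rightarrow> 'a dgm \<Rightarrow> bool" where
  "dgm_iso D D' \<longleftrightarrow> (\<exists>fV fE fC.
     bij_betw fV (verts D) (verts D') \<and> bij_betw fE (edges D) (edges D') \<and>
     bij_betw fC (cells D) (cells D') \<and>
     (\<forall>e\<in>edges D. esrc D' (fE e) = fV (esrc D e) \<and> etgt D' (fE e) = fV (etgt D e)
                   \<and> elab D' (fE e) = elab D e) \<and>
     (\<forall>c\<in>cells D. ctop D' (fC c) = map_dpath fV fE (ctop D c)
                   \<and> cbot D' (fC c) = map_dpath fV fE (cbot D c)) \<and>
     tpath D' = map_dpath fV fE (tpath D) \<and> bpath D' = map_dpath fV fE (bpath D))"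

definition is_dipole :: "'a dgm \<Rightarrow> nat \<Rightarrow> nat \<Rightarrow> bool" where
  "is_dipole D c1 c2 \<longleftrightarrow> c1 \<in> cells D \<and> c2 \<in> cells D \<and> c1 \<noteq> c2 \<and>
     cbot D c1 = ctop D c2 \<and>
     map (elab D) (snd (ctop D c1)) = map (elab D) (snd (cbot D c2))"

definition inner :: "'b list \<Rightarrow> 'b list" where
  "inner xs = butlast (tl xs)"

text \<open>Removing a dipole: delete both cells and the middle path, and glue the
 bottom path of c2 onto the top path of c1.\<close>
definition remove_dipole :: "'a dgm \<Rightarrow> nat \<Rightarrow> nat \<Rightarrow> 'a dgm" where
  "remove_dipole D c1 c2 =
    (let tv = fst (ctop D c1); te = snd (ctop D c1);
         mv = fst (cbot D c1); me = snd (cbot D c1);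
         bv = fst (cbot D c2); be = snd (cbot D c2);
         fv = (\<lambda>x. if x \<in> set (inner bv) then tv ! (LEAST i. bv ! i = x) else x);
         fe = (\<lambda>e. if e \<in> set be then te ! (LEAST i. be ! i = e) else e) in
     \<lparr> verts = fv ` (verts D - set (inner mv)),
       edges = fe ` (edges D - set me),
       esrc = (\<lambda>e. fv (esrc D e)), etgt = (\<lambda>e. fv (etgt D e)), elab = elab D,
       cells = cells D - {c1, c2},
       ctop = (\<lambda>c. map_dpath fv fe (ctop D c)),
       cbot = (\<lambda>c. map_dpath fv fe (cbot D c)),
       tpath = map_dpath fv fe (tpath D),
       bpath = map_dpath fv fe (bpath D) \<rparr>)"

definition dipole_red :: "'a dgm \<Rightarrow> 'a dgm \<Rightarrow> bool" where
  "dipole_red D D' \<longleftrightarrow> (\<exists>c1 c2. is_dipole D c1 c2 \<and> D' = remove_dipole D c1 c2)"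

definition reduced :: "'a dgm \<Rightarrow> bool" where
  "reduced D \<longleftrightarrow> \<not> (\<exists>c1 c2. is_dipole D c1 c2)"

definition dgm_equiv :: "'a dgm \<Rightarrow> 'a dgm \<Rightarrow> bool" where
  "dgm_equiv D D' \<longleftrightarrow> (\<exists>D1 D2. dipole_red\<^sup>*\<^sup>* D D1 \<and> reduced D1 \<and>
                                 dipole_red\<^sup>*\<^sup>* D' D2 \<and> reduced D2 \<and> dgm_iso D1 D2)"

definition is_pos_path :: "'a dgm \<Rightarrow> nat \<Rightarrow> nat \<Rightarrow> nat list \<Rightarrow> bool" where
  "is_pos_path D a b es \<longleftrightarrow> a \<in> verts D \<and> set es \<subseteq> edges D \<and>
     (es = [] \<longrightarrow> a = b) \<and>
     (es \<noteq> [] \<longrightarrow> esrc D (hd es) = a \<and> etgt D (last es) = b \<and>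
        (\<forall>i. Suc i < length es \<longrightarrow> etgt D (es ! i) = esrc D (es ! Suc i)))"

definition vle :: "'a dgm \<Rightarrow> nat \<Rightarrow> nat \<Rightarrow> bool" where
  "vle D a b \<longleftrightarrow> (\<exists>es. is_pos_path D a b es)"

definition mu :: "('a list \<times> 'a list) set \<Rightarrow> 'a dgm \<Rightarrow> nat \<Rightarrow> nat \<Rightarrow> 'a list set" where
  "mu R D a b = pres_class R (map (elab D) (SOME es. is_pos_path D a b es))"

end

theory Submission
  imports Defs
begin

(* Positive paths of a diagram with common endpoints have labels that are equal in M:
   attaching a cell replaces a subpath by one whose label differs by a relation, and since
   relators are nonempty no positive cycles arise.  So the claim is immediate when the two
   junction vertices coincide.  They coincide in a sum of diagrams, and this is preserved by
   dipole removal and by isomorphism, hence holds in the reduced form of Delta.  Two facts about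
   removing a dipole carry the claim back to Delta: the result is again a diagram (cells are
   tracked through a stacking, a sequence of paths from the top to the bottom path, each obtained
   from the previous one by crossing a single cell), and every positive path of the old diagram
   folds to a positive path of the new one with an equal label (a passage along the middle path
   of the dipole becomes a passage along the top of its upper cell). *)

section \<open>Equality in the presented monoid\<close>

definition pres_eq :: "('a list \<times> 'a list) set \<Rightarrow> 'a list \<Rightarrow> 'a list \<Rightarrow> bool" where
  "pres_eq R x y \<longleftrightarrow> (x, y) \<in> (rewr1 R)\<^sup>*"

definition sym_rel :: "('a list \<times> 'a list) set \<Rightarrow> 'a list \<Rightarrow> 'a list \<Rightarrow> bool" where
  "sym_rel R x y \<longleftrightarrow> (x, y) \<in> R \<or> (y, x) \<in> R"

lemma rewr1_sym: "(x, y) \<in> rewr1 R \<Longrightarrow> (y, x) \<in> rewr1 R"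
  unfolding rewr1_def by blast

lemma pres_eq_refl[simp]: "pres_eq R x x"
  by (simp add: pres_eq_def)

lemma pres_eq_sym: "pres_eq R x y \<Longrightarrow> pres_eq R y x"
  unfolding pres_eq_def
proof (induction rule: rtrancl_induct)
  case base then show ?case by simp
next
  case (step y z)
  then show ?case using rewr1_sym
    by (meson converse_rtrancl_into_rtrancl)
qed

lemma pres_eq_trans: "pres_eq R x y \<Longrightarrow> pres_eq R y z \<Longrightarrow> pres_eq R x z"
  unfolding pres_eq_def by (meson rtrancl_trans)

lemma rewr1I: "(x, y) \<in> R \<or> (y, x) \<in> R \<Longrightarrow>
  (s @ x @ t, s @ y @ t) \<in> rewr1 R"
  unfolding rewr1_def by blast

lemma rewr1_context: "(x, y) \<in> rewr1 R \<Longrightarrow> (s @ x @ t, s @ y @ t) \<in> rewr1 R"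
proof -
  assume "(x, y) \<in> rewr1 R"
  then obtain s' x' y' t' where "x = s' @ x' @ t'" "y = s' @ y' @ t'" "(x', y') \<in> R \<or> (y', x') \<in> R"
    unfolding rewr1_def by blast
  then show ?thesis using rewr1I[of x' y' R "s @ s'" "t' @ t"] by simp
qed

lemma pres_eq_context: "pres_eq R x y \<Longrightarrow> pres_eq R (s @ x @ t) (s @ y @ t)"
  unfolding pres_eq_def
proof (induction rule: rtrancl_induct)
  case base then show ?case by simp
next
  case (step y z)
  then show ?case using rewr1_context by (meson rtrancl.simps)
qed

lemma pres_eq_append: "pres_eq R x y \<Longrightarrow> pres_eq R x' y' \<Longrightarrow>
  pres_eq R (x @ x') (y @ y')"
proof -
  assume a: "pres_eq R x y" "pres_eq R x' y'"
  have "pres_eq R ([] @ x @ x') ([] @ y @ x')" using pres_eq_context[OF a(1)] .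
  moreover have "pres_eq R (y @ x' @ []) (y @ y' @ [])" using pres_eq_context[OF a(2)] .
  ultimately show ?thesis using pres_eq_trans by fastforce
qed

lemma pres_eq_Cons: "pres_eq R x y \<Longrightarrow> pres_eq R (a # x) (a # y)"
  using pres_eq_context[of R x y "[a]" "[]"] by simp

lemma sym_rel_pres_eq: "sym_rel R x y \<Longrightarrow> pres_eq R x y"
proof -
  assume "sym_rel R x y"
  then have "(x, y) \<in> rewr1 R" unfolding sym_rel_def using rewr1I[of x y R "[]" "[]"] by simp
  then show ?thesis unfolding pres_eq_def by simp
qed

lemma pres_eq_Nil:
  assumes nonempty_rel: "\<forall>(x, y) \<in> R. x \<noteq> [] \<and> y \<noteq> []" and e: "pres_eq R [] y"
  shows "y = []"
proof -
  have "(x, y) \<in> (rewr1 R)\<^sup>* \<Longrightarrow> x = [] \<Longrightarrow> y = []" for x y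
  proof (induction rule: rtrancl_induct)
    case base then show ?case by simp
  next
    case (step y z)
    then have "([], z) \<in> rewr1 R" by simp
    then show ?case using nonempty_rel unfolding rewr1_def by auto
  qed
  then show ?thesis using e unfolding pres_eq_def by blast
qed

lemma pres_class_eq: "pres_eq R x y \<Longrightarrow> pres_class R x = pres_class R y"
  unfolding pres_class_def
  by (auto dest: pres_eq_sym simp: pres_eq_def[symmetric] intro: pres_eq_trans)

fun walk :: "'a dgm \<Rightarrow> nat \<Rightarrow> nat \<Rightarrow> nat list \<Rightarrow> bool" where
  "walk E a b [] = (a = b)"
| "walk E a b (e # es) = (esrc E e = a \<and> walk E (etgt E e) b es)"

lemma walk_append: "walk E a b (xs @ ys) \<longleftrightarrow> (\<exists>m. walk E a m xs \<and> walk E m b ys)"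
  by (induction xs arbitrary: a) auto

lemma walk_snoc: "walk E a b (xs @ [e]) \<longleftrightarrow> walk E a (esrc E e) xs \<and> etgt E e = b"
  by (auto simp: walk_append)

lemma walk_iff_nth:
  "walk E a b es \<longleftrightarrow> (es = [] \<longrightarrow> a = b) \<and>
     (es \<noteq> [] \<longrightarrow> esrc E (hd es) = a \<and> etgt E (last es) = b \<and>
        (\<forall>i. Suc i < length es \<longrightarrow> etgt E (es ! i) = esrc E (es ! Suc i)))"
proof (induction es arbitrary: a rule: induct_list012)
  case (3 e e' es)
  let ?P = "\<lambda>es i. Suc i < length es \<longrightarrow> etgt E (es ! i) = esrc E (es ! Suc i)"
  have "(\<forall>i. ?P (e # e' # es) i) \<longleftrightarrow> ?P (e # e' # es) 0 \<and> (\<forall>i. ?P (e # e' # es) (Suc i))"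
    by (metis not0_implies_Suc)
  then show ?case using "3.IH"(2) by auto
qed auto

lemma is_pos_path_walk:
  "is_pos_path E a b es \<longleftrightarrow> a \<in> verts E \<and> set es \<subseteq> edges E \<and> walk E a b es"
  unfolding is_pos_path_def walk_iff_nth by auto

definition label :: "'a dgm \<Rightarrow> nat list \<Rightarrow> 'a list" where
  "label E es = map (elab E) es"

definition simple_path :: "'a dgm \<Rightarrow> dpath \<Rightarrow> bool" where
  "simple_path E P \<longleftrightarrow> length (fst P) = Suc (length (snd P)) \<and> distinct (fst P) \<and>
     set (fst P) \<subseteq> verts E \<and> set (snd P) \<subseteq> edges E \<and>
     (\<forall>k < length (snd P). esrc E (snd P ! k) = fst P ! k \<and> etgt E (snd P ! k) = fst P ! Suc k)"

definition subpath :: "nat \<Rightarrow> nat \<Rightarrow> dpath \<Rightarrow> dpath" where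
  "subpath p n P = (take (Suc n) (drop p (fst P)), take n (drop p (snd P)))"

definition replace_subpath :: "nat \<Rightarrow> nat \<Rightarrow> dpath \<Rightarrow> dpath \<Rightarrow> dpath" where
  "replace_subpath p n P Q = (take p (fst P) @ fst Q @ drop (Suc (p + n)) (fst P),
                     take p (snd P) @ snd Q @ drop (p + n) (snd P))"

lemma nth_in_inner:
  assumes "0 < r" "Suc r < length xs"
  shows "xs ! r \<in> set (inner xs)"
proof -
  have "inner xs ! (r - 1) = xs ! r" using assms
    by (simp add: inner_def nth_butlast nth_tl)
  moreover have "r - 1 < length (inner xs)" using assms by (simp add: inner_def)
  ultimately show ?thesis by (metis nth_mem)
qed

lemma in_inner_nth:
  assumes "x \<in> set (inner xs)"
  shows "\<exists>r. 0 < r \<and> Suc r < length xs \<and> xs ! r = x"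
proof -
  obtain j where j: "j < length (inner xs)" "inner xs ! j = x"
    using assms by (metis in_set_conv_nth)
  then have "xs ! Suc j = x" "Suc (Suc j) < length xs"
    by (auto simp: inner_def nth_butlast nth_tl)
  then show ?thesis by (intro exI[of _ "Suc j"]) auto
qed

lemma in_inner_iff_nth: "length xs = Suc k \<Longrightarrow>
  x \<in> set (inner xs) \<longleftrightarrow> (\<exists>r. 0 < r \<and> r < k \<and> x = xs ! r)"
  using nth_in_inner in_inner_nth by (metis Suc_less_eq)

lemma set_inner_subset: "set (inner xs) \<subseteq> set xs"
  by (cases xs) (auto simp: inner_def dest: in_set_butlastD)

lemma set_hd_last_inner:
  assumes "2 \<le> length xs"
  shows "set xs = {hd xs, last xs} \<union> set (inner xs)"
proof -
  obtain a ys where xs: "xs = a # ys" using assms by (cases xs) auto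
  then have "ys \<noteq> []" using assms by auto
  then have "ys = butlast ys @ [last ys]" by simp
  then have "set ys = set (butlast ys) \<union> {last ys}"
    by (metis Un_insert_right set_append set_simps(2) sup_bot.right_neutral list.set(1))
  then show ?thesis using xs \<open>ys \<noteq> []\<close> by (auto simp: inner_def)
qed

lemma inner_map: "inner (map f xs) = map f (inner xs)"
  by (simp add: inner_def map_butlast map_tl)

lemma inner_append_singletons: "inner (a # xs @ [b]) = xs" by (simp add: inner_def)

lemma nth_in_take_iff:
  assumes "distinct xs" "a < length xs"
  shows "xs ! a \<in> set (take p xs) \<longleftrightarrow> a < p"
proof
  assume "xs ! a \<in> set (take p xs)"
  then obtain k where k: "k < length (take p xs)" "take p xs ! k = xs ! a"
    by (metis in_set_conv_nth)
  then have "xs ! k = xs ! a" "k < length xs" "k < p" by auto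
  then have "k = a" using nth_eq_iff_index_eq[OF assms(1)] assms(2) by blast
  then show "a < p" using k by simp
next
  assume "a < p"
  then show "xs ! a \<in> set (take p xs)"
    using assms by (metis in_set_conv_nth length_take min_less_iff_conj nth_take)
qed

lemma nth_in_drop_iff:
  assumes "distinct xs" "a < length xs"
  shows "xs ! a \<in> set (drop q xs) \<longleftrightarrow> q \<le> a"
proof
  assume "xs ! a \<in> set (drop q xs)"
  then obtain k where k: "k < length (drop q xs)" "drop q xs ! k = xs ! a"
    by (metis in_set_conv_nth)
  then have "xs ! (q + k) = xs ! a" "q + k < length xs" by auto
  then have "q + k = a" using nth_eq_iff_index_eq[OF assms(1)] assms(2) by blast
  then show "q \<le> a" by simp
next
  assume "q \<le> a"
  then have "drop q xs ! (a - q) = xs ! a" "a - q < length (drop q xs)" using assms by auto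
  then show "xs ! a \<in> set (drop q xs)" by (metis nth_mem)
qed

lemma Least_nth_distinct:
  assumes "distinct xs" "r < length xs"
  shows "(LEAST i. xs ! i = xs ! r) = r"
proof (rule Least_equality)
  show "xs ! r = xs ! r" by simp
  fix y assume "xs ! y = xs ! r"
  show "r \<le> y"
  proof (rule ccontr)
    assume "\<not> r \<le> y"
    then have "y < length xs" "y \<noteq> r" using assms by auto
    then show False using \<open>xs ! y = xs ! r\<close> nth_eq_iff_index_eq[OF assms(1)] assms(2) by blast
  qed
qed

lemma subpath_nth:
  assumes "length (fst P) = Suc (length (snd P))" "p + n \<le> length (snd P)"
  shows "length (fst (subpath p n P)) = Suc n" "length (snd (subpath p n P)) = n"
    "\<And>r. r \<le> n \<Longrightarrow> fst (subpath p n P) ! r = fst P ! (p + r)"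
    "\<And>r. r < n \<Longrightarrow> snd (subpath p n P) ! r = snd P ! (p + r)"
  using assms by (auto simp: subpath_def)

lemma set_subpath: "set (fst (subpath p n P)) \<subseteq> set (fst P)" "set (snd (subpath p n P)) \<subseteq> set (snd P)"
  unfolding subpath_def by (auto dest: in_set_takeD in_set_dropD)

lemma simple_path_distinct_edges:
  assumes g: "simple_path E P"
  shows "distinct (snd P)"
proof -
  have l: "length (fst P) = Suc (length (snd P))" "distinct (fst P)"
    and c: "\<forall>k < length (snd P). esrc E (snd P ! k) = fst P ! k"
    using g by (auto simp: simple_path_def)
  show ?thesis unfolding distinct_conv_nth
  proof (intro allI impI)
    fix i j assume ij: "i < length (snd P)" "j < length (snd P)" "i \<noteq> j"
    show "snd P ! i \<noteq> snd P ! j"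
    proof
      assume "snd P ! i = snd P ! j"
      then have "fst P ! i = fst P ! j" using c ij by metis
      then show False using nth_eq_iff_index_eq[OF l(2)] ij l(1) by simp
    qed
  qed
qed

lemma simple_path_subpath:
  assumes g: "simple_path E P" and pn: "p + n \<le> length (snd P)"
  shows "simple_path E (subpath p n P)"
proof -
  have l: "length (fst P) = Suc (length (snd P))" using g by (simp add: simple_path_def)
  note sf = subpath_nth[OF l pn]
  have sv: "set (fst (subpath p n P)) \<subseteq> set (fst P)"
    unfolding subpath_def by (auto dest: in_set_takeD in_set_dropD)
  have se: "set (snd (subpath p n P)) \<subseteq> set (snd P)"
    unfolding subpath_def by (auto dest: in_set_takeD in_set_dropD)
  have c: "\<forall>k < length (snd P). esrc E (snd P ! k) = fst P ! k \<and> etgt E (snd P ! k) = fst P ! Suc k"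
    using g by (simp add: simple_path_def)
  show ?thesis unfolding simple_path_def
  proof (intro conjI allI impI)
    show "length (fst (subpath p n P)) = Suc (length (snd (subpath p n P)))" using sf by simp
    show "distinct (fst (subpath p n P))" using g by (simp add: simple_path_def subpath_def)
    show "set (fst (subpath p n P)) \<subseteq> verts E"
      using g sv unfolding simple_path_def by blast
    show "set (snd (subpath p n P)) \<subseteq> edges E"
      using g se unfolding simple_path_def by blast
    fix k assume k: "k < length (snd (subpath p n P))"
    then have kn: "k < n" using sf by simp
    then have pk: "p + k < length (snd P)" using pn by simp
    have "snd (subpath p n P) ! k = snd P ! (p + k)" using sf(4)[OF kn] .
    moreover have "fst (subpath p n P) ! k = fst P ! (p + k)" using sf(3)[of k] kn by simp
    moreover have "fst (subpath p n P) ! Suc k = fst P ! Suc (p + k)"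
      using sf(3)[of "Suc k"] kn by simp
    ultimately have X: "esrc E (snd (subpath p n P) ! k) = fst (subpath p n P) ! k \<and>
          etgt E (snd (subpath p n P) ! k) = fst (subpath p n P) ! Suc k"
      using c pk by simp
    then show "esrc E (snd (subpath p n P) ! k) = fst (subpath p n P) ! k" by simp
    show "etgt E (snd (subpath p n P) ! k) = fst (subpath p n P) ! Suc k" using X by simp
  qed
qed

lemma length_replace_subpath:
  assumes "length (fst P) = Suc (length (snd P))" "p + n \<le> length (snd P)"
    "length (fst Q) = Suc (length (snd Q))"
  shows "length (fst (replace_subpath p n P Q)) = Suc (length (snd (replace_subpath p n P Q)))"
  using assms by (simp add: replace_subpath_def)

lemma subpath_replace_subpath:
  assumes "length (fst P) = Suc (length (snd P))" "p + n \<le> length (snd P)"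
    "length (fst Q) = Suc (length (snd Q))"
  shows "subpath p (length (snd Q)) (replace_subpath p n P Q) = Q"
  using assms by (simp add: replace_subpath_def subpath_def prod_eq_iff)

lemma replace_subpath_nth_vert:
  assumes lP: "length (fst P) = Suc (length (snd P))" and pn: "p + n \<le> length (snd P)"
    and lQ: "length (fst Q) = Suc (length (snd Q))"
    and endQ: "fst Q ! length (snd Q) = fst P ! (p + n)"
    and t: "t < length (fst (replace_subpath p n P Q))"
  shows "t < p \<Longrightarrow> fst (replace_subpath p n P Q) ! t = fst P ! t"
    "p \<le> t \<Longrightarrow> t \<le> p + length (snd Q) \<Longrightarrow>
      fst (replace_subpath p n P Q) ! t = fst Q ! (t - p)"
    "p + length (snd Q) \<le> t \<Longrightarrow>
      fst (replace_subpath p n P Q) ! t = fst P ! (t - length (snd Q) + n)"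
proof -
  let ?V = "fst P" and ?VQ = "fst Q" and ?k = "length (snd Q)"
  have sp: "fst (replace_subpath p n P Q) = take p ?V @ ?VQ @ drop (Suc (p + n)) ?V"
    by (simp add: replace_subpath_def)
  have ltp: "length (take p ?V) = p" using lP pn by simp
  show "t < p \<Longrightarrow> fst (replace_subpath p n P Q) ! t = fst P ! t"
    using sp ltp by (simp add: nth_append)
  show "p \<le> t \<Longrightarrow> t \<le> p + ?k \<Longrightarrow> fst (replace_subpath p n P Q) ! t = ?VQ ! (t - p)"
  proof -
    assume "p \<le> t" "t \<le> p + ?k"
    then have "t - p < length ?VQ" using lQ by simp
    then show ?thesis using sp ltp \<open>p \<le> t\<close> by (simp add: nth_append)
  qed
  assume a: "p + ?k \<le> t"
  show "fst (replace_subpath p n P Q) ! t = ?V ! (t - ?k + n)"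
  proof (cases "t = p + ?k")
    case True
    then show ?thesis using sp ltp lQ endQ by (simp add: nth_append)
  next
    case False
    then have "t > p + ?k" using a by simp
    then have "\<not> t < p" "\<not> (t - p < length ?VQ)" using lQ by simp_all
    then have "fst (replace_subpath p n P Q) ! t = drop (Suc (p + n)) ?V ! (t - p - Suc ?k)"
      using sp ltp lQ by (simp add: nth_append)
    also have "\<dots> = ?V ! (Suc (p + n) + (t - p - Suc ?k))"
      using t sp lP pn by (auto simp: nth_drop)
    also have "Suc (p + n) + (t - p - Suc ?k) = t - ?k + n" using \<open>t > p + ?k\<close> by simp
    finally show ?thesis .
  qed
qed

lemma replace_subpath_nth_edge:
  assumes pn: "p + n \<le> length (snd P)"
    and t: "t < length (snd (replace_subpath p n P Q))"
  shows "t < p \<Longrightarrow> snd (replace_subpath p n P Q) ! t = snd P ! t"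
    "p \<le> t \<Longrightarrow> t < p + length (snd Q) \<Longrightarrow>
      snd (replace_subpath p n P Q) ! t = snd Q ! (t - p)"
    "p + length (snd Q) \<le> t \<Longrightarrow>
      snd (replace_subpath p n P Q) ! t = snd P ! (t - length (snd Q) + n)"
proof -
  let ?Es = "snd P" and ?k = "length (snd Q)"
  have sp: "snd (replace_subpath p n P Q) = take p ?Es @ snd Q @ drop (p + n) ?Es"
    by (simp add: replace_subpath_def)
  have ltp: "length (take p ?Es) = p" using pn by simp
  show "t < p \<Longrightarrow> snd (replace_subpath p n P Q) ! t = ?Es ! t"
    using sp ltp by (simp add: nth_append)
  show "p \<le> t \<Longrightarrow> t < p + ?k \<Longrightarrow> snd (replace_subpath p n P Q) ! t = snd Q ! (t - p)"
  proof -
    assume "p \<le> t" "t < p + ?k"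
    then have "t - p < length (snd Q)" by simp
    then show ?thesis using sp ltp \<open>p \<le> t\<close> by (simp add: nth_append)
  qed
  assume a: "p + ?k \<le> t"
  then have "\<not> t < p" "\<not> (t - p < ?k)" by simp_all
  then have "snd (replace_subpath p n P Q) ! t = drop (p + n) ?Es ! (t - p - ?k)"
    using sp ltp by (simp add: nth_append)
  also have "\<dots> = ?Es ! (p + n + (t - p - ?k))"
    using t sp pn by (auto simp: nth_drop)
  also have "p + n + (t - p - ?k) = t - ?k + n" using a by simp
  finally show "snd (replace_subpath p n P Q) ! t = ?Es ! (t - ?k + n)" .
qed

lemma distinct_replace_subpath:
  assumes dP: "distinct (fst P)" and dQ: "distinct (fst Q)" and pl: "p + n < length (fst P)"
    and setQ: "set (fst Q) \<subseteq> {fst P ! p, fst P ! (p + n)} \<union> set (inner (fst Q))"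
    and disj: "set (inner (fst Q)) \<inter> set (fst P) = {}"
  shows "distinct (fst (replace_subpath p n P Q))"
proof -
  let ?V = "fst P"
  have "?V ! p \<notin> set (take p ?V)" "?V ! (p + n) \<notin> set (take p ?V)"
    "?V ! p \<notin> set (drop (Suc (p + n)) ?V)" "?V ! (p + n) \<notin> set (drop (Suc (p + n)) ?V)"
    using nth_in_take_iff[OF dP] nth_in_drop_iff[OF dP] pl by auto
  then have "set (fst Q) \<inter> set (take p ?V) = {}" "set (fst Q) \<inter> set (drop (Suc (p + n)) ?V) = {}"
    using setQ disj set_take_subset[of p ?V] set_drop_subset[of "Suc (p + n)" ?V] by blast+
  moreover have "set (take p ?V) \<inter> set (drop (Suc (p + n)) ?V) = {}"
    using dP by (simp add: set_take_disj_set_drop_if_distinct)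
  ultimately show ?thesis using dP dQ by (auto simp: replace_subpath_def)
qed

lemma replace_subpath_edge_ends:
  assumes gP: "simple_path E P" and pn: "p + n \<le> length (snd P)" and gQ: "simple_path E Q"
    and s0: "fst Q ! 0 = fst P ! p" and sk: "fst Q ! length (snd Q) = fst P ! (p + n)"
    and t: "t < length (snd (replace_subpath p n P Q))"
  shows "esrc E (snd (replace_subpath p n P Q) ! t) = fst (replace_subpath p n P Q) ! t \<and>
    etgt E (snd (replace_subpath p n P Q) ! t) = fst (replace_subpath p n P Q) ! Suc t"
proof -
  let ?V = "fst P" and ?Es = "snd P" and ?VQ = "fst Q" and ?EQ = "snd Q" and ?k = "length (snd Q)"
  have lP: "length ?V = Suc (length ?Es)" using gP by (simp add: simple_path_def)
  have lQ: "length ?VQ = Suc ?k" using gQ by (simp add: simple_path_def)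
  have len: "length (fst (replace_subpath p n P Q)) = Suc (length (snd (replace_subpath p n P Q)))"
    using length_replace_subpath[OF lP pn lQ] .
  have cP: "\<forall>t < length ?Es. esrc E (?Es ! t) = ?V ! t \<and> etgt E (?Es ! t) = ?V ! Suc t"
    using gP by (simp add: simple_path_def)
  have cQ: "\<forall>t < ?k. esrc E (?EQ ! t) = ?VQ ! t \<and> etgt E (?EQ ! t) = ?VQ ! Suc t"
    using gQ by (simp add: simple_path_def)
  have t1: "t < length (fst (replace_subpath p n P Q))" "Suc t < length (fst (replace_subpath p n P Q))" using t len by auto
  note nV = replace_subpath_nth_vert[OF lP pn lQ sk] and nE = replace_subpath_nth_edge[OF pn t]
  have lsp: "length (snd (replace_subpath p n P Q)) = length ?Es - n + ?k"
    using pn by (simp add: replace_subpath_def)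
  consider (a) "t < p" | (b) "p \<le> t" "t < p + ?k" | (c) "p + ?k \<le> t" by linarith
  then show ?thesis
  proof cases
    case a
    have "fst (replace_subpath p n P Q) ! Suc t = ?V ! Suc t"
    proof (cases "Suc t < p")
      case True then show ?thesis using nV(1)[OF t1(2)] by simp
    next
      case False
      then have "Suc t = p" using a by simp
      then show ?thesis using nV(2)[OF t1(2)] s0 by simp
    qed
    then show ?thesis using nE(1) a nV(1)[OF t1(1)] cP pn by simp
  next
    case b
    then show ?thesis using nE(2) nV(2)[OF t1(1)] nV(2)[OF t1(2)] cQ
      by (simp add: Suc_diff_le)
  next
    case c
    have tk: "t - ?k + n < length ?Es" using t lsp c by simp
    have "fst (replace_subpath p n P Q) ! Suc t = ?V ! (Suc t - ?k + n)"
      using nV(3)[OF t1(2)] c by simp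
    moreover have "Suc t - ?k + n = Suc (t - ?k + n)" using c by simp
    ultimately show ?thesis using nE(3) c nV(3)[OF t1(1)] cP tk by simp
  qed
qed

lemma simple_path_replace_subpath:
  assumes gP: "simple_path E P" and pn: "p + n \<le> length (snd P)" and gQ: "simple_path E Q"
    and neQ: "snd Q \<noteq> []"
    and s0: "fst Q ! 0 = fst P ! p" and sk: "fst Q ! length (snd Q) = fst P ! (p + n)"
    and disj: "set (inner (fst Q)) \<inter> set (fst P) = {}"
  shows "simple_path E (replace_subpath p n P Q)"
proof -
  have lP: "length (fst P) = Suc (length (snd P))" using gP by (simp add: simple_path_def)
  have lQ: "length (fst Q) = Suc (length (snd Q))" using gQ by (simp add: simple_path_def)
  have "set (fst Q) = {fst P ! p, fst P ! (p + n)} \<union> set (inner (fst Q))"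
  proof -
    have "2 \<le> length (fst Q)" using lQ neQ by (cases "snd Q") auto
    moreover have "fst Q \<noteq> []" using lQ by auto
    then have "hd (fst Q) = fst Q ! 0" "last (fst Q) = fst Q ! length (snd Q)"
      using lQ by (simp_all add: hd_conv_nth last_conv_nth)
    ultimately show ?thesis using set_hd_last_inner[of "fst Q"] s0 sk by simp
  qed
  moreover have "p + n < length (fst P)" using lP pn by simp
  ultimately have "distinct (fst (replace_subpath p n P Q))"
    using distinct_replace_subpath[of P Q p n] disj gP gQ by (simp add: simple_path_def)
  moreover have "set (fst (replace_subpath p n P Q)) \<subseteq> verts E" "set (snd (replace_subpath p n P Q)) \<subseteq> edges E"
    using gP gQ unfolding simple_path_def replace_subpath_def
      by (auto dest: in_set_takeD in_set_dropD)
  ultimately show ?thesis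
    using length_replace_subpath[OF lP pn lQ] replace_subpath_edge_ends[OF gP pn gQ s0 sk] unfolding simple_path_def by blast
qed

lemma simple_path_eqI:
  assumes g1: "simple_path E P" and g2: "simple_path E P'" and e: "snd P = snd P'" and ne: "snd P \<noteq> []"
  shows "P = P'"
proof -
  have l: "length (fst P) = length (fst P')" using g1 g2 e by (simp add: simple_path_def)
  have "fst P ! t = fst P' ! t" if t: "t < length (fst P)" for t
  proof (cases "t < length (snd P)")
    case True
    then show ?thesis using g1 g2 e unfolding simple_path_def by metis
  next
    case False
    have "0 < length (snd P)" using ne by simp
    moreover have "t < Suc (length (snd P))" using t g1 by (simp add: simple_path_def)
    ultimately have t': "t = Suc (t - 1)" "t - 1 < length (snd P)" using False by arith+
    then show ?thesis using g1 g2 e unfolding simple_path_def by metis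
  qed
  then have "fst P = fst P'" using l by (simp add: nth_equalityI)
  then show ?thesis using e by (simp add: prod_eq_iff)
qed

lemma map_dpath_replace_subpath: "map_dpath f g (replace_subpath p n P Q) = replace_subpath p n (map_dpath f g P) (map_dpath f g Q)"
  by (simp add: map_dpath_def replace_subpath_def take_map drop_map)

lemma map_dpath_subpath: "map_dpath f g (subpath p n P) = subpath p n (map_dpath f g P)"
  by (simp add: map_dpath_def subpath_def take_map drop_map)

lemma split5:
  assumes "p + n \<le> q" "q + m \<le> length es"
  obtains a b c d g where "es = a @ b @ c @ d @ g" "length a = p" "length b = n"
    "length c = q - p - n" "length d = m"
proof -
  have split: "\<exists>a r. xs = a @ r \<and> length a = k" if "k \<le> length xs" for k and xs :: "'a list"
    using that by (intro exI[of _ "take k xs"] exI[of _ "drop k xs"]) simp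
  obtain a r1 where 1: "es = a @ r1" "length a = p" using split[of p es] assms by auto
  obtain b r2 where 2: "r1 = b @ r2" "length b = n" using split[of n r1] assms 1 by auto
  have "q - p - n \<le> length r2" using assms 1 2 by simp
  then obtain c r3 where 3: "r2 = c @ r3" "length c = q - p - n" using split by blast
  have "m \<le> length r3" using assms 1 2 3 by simp
  then obtain d g where 4: "r3 = d @ g" "length d = m" using split by blast
  show ?thesis using that[of a b c d g] 1 2 3 4 by simp
qed

lemma take_drop_replace_after:
  assumes "p + n \<le> q" "q + m \<le> length es"
  shows "take n (drop p (take q es @ ys @ drop (q + m) es)) = take n (drop p es)"
proof -
  obtain a b c d g where es: "es = a @ b @ c @ d @ g" and l: "length a = p" "length b = n"
    "length c = q - p - n" "length d = m" using split5[OF assms] .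
  have q: "q = length a + length b + length c" using l assms by simp
  show ?thesis unfolding es q using l by simp
qed

lemma take_drop_replace_before:
  assumes "p + n \<le> q" "q + m \<le> length es"
  shows "take m (drop (q - n + length xs) (take p es @ xs @ drop (p + n) es)) = take m (drop q es)"
proof -
  obtain a b c d g where es: "es = a @ b @ c @ d @ g" and l: "length a = p" "length b = n"
    "length c = q - p - n" "length d = m" using split5[OF assms] .
  have q: "q = length a + length b + length c" using l assms by simp
  show ?thesis unfolding es q using l by simp
qed

lemma replace_replace_commute:
  assumes "p + n \<le> q" "q + m \<le> length es"
  shows "take (q - n + length xs) (take p es @ xs @ drop (p + n) es) @ ys @
          drop (q - n + length xs + m) (take p es @ xs @ drop (p + n) es)
       = take p (take q es @ ys @ drop (q + m) es) @ xs @ drop (p + n) (take q es @ ys @ drop (q + m) es)"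
proof -
  obtain a b c d g where es: "es = a @ b @ c @ d @ g" and l: "length a = p" "length b = n"
    "length c = q - p - n" "length d = m" using split5[OF assms] .
  have q: "q = length a + length b + length c" using l assms by simp
  show ?thesis unfolding es q using l by simp
qed

lemma replace_undo:
  assumes "p + m \<le> length es" "length em = mm"
  shows "take p (take p es @ em @ drop (p + m) es) @ take m (drop p es) @
         drop (p + mm) (take p es @ em @ drop (p + m) es) = es"
proof -
  have "take p (take p es @ em @ drop (p + m) es) = take p es" using assms by simp
  moreover have "drop (p + mm) (take p es @ em @ drop (p + m) es) = drop (p + m) es"
    using assms by (simp add: drop_append)
  ultimately show ?thesis using assms
    by (metis append_take_drop_id drop_drop take_add add.commute)
qed

lemma walk_of_nth:
  assumes "length vs = Suc (length es)"
    "\<forall>k<length es. esrc E (es ! k) = vs ! k \<and> etgt E (es ! k) = vs ! Suc k"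
  shows "walk E (vs ! 0) (vs ! length es) es"
  using assms
proof (induction es arbitrary: vs)
  case Nil then show ?case by simp
next
  case (Cons e es)
  then obtain v vs' where vs: "vs = v # vs'" by (cases vs) auto
  have "walk E (vs' ! 0) (vs' ! length es) es"
    using Cons.prems vs by (intro Cons.IH) auto
  moreover have "esrc E e = v" "etgt E e = vs' ! 0"
    using Cons.prems(2)[rule_format, of 0] vs by auto
  ultimately show ?case using vs by simp
qed

lemma simple_path_walk:
  assumes "simple_path E P"
  shows "walk E (fst P ! 0) (fst P ! length (snd P)) (snd P)"
  using assms walk_of_nth unfolding simple_path_def by blast

lemma simple_path_edge:
  assumes "simple_path E P" "e \<in> set (snd P)"
  shows "\<exists>k < length (snd P). snd P ! k = e \<and> esrc E e = fst P ! k \<and> etgt E e = fst P ! Suc k"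
proof -
  obtain k where k: "k < length (snd P)" "snd P ! k = e"
    using assms(2) by (auto simp: in_set_conv_nth)
  then show ?thesis using assms(1) unfolding simple_path_def by blast
qed

lemma walk_along_simple_path:
  assumes g: "simple_path E P" and w: "walk E a b es" and s: "set es \<subseteq> set (snd P)"
    and k: "k < length (fst P)" "a = fst P ! k"
  shows "k + length es < length (fst P) \<and> es = take (length es) (drop k (snd P)) \<and>
         b = fst P ! (k + length es)"
  using w s k
proof (induction es arbitrary: a k)
  case Nil then show ?case by simp
next
  case (Cons e es)
  have "e \<in> set (snd P)" using Cons.prems by simp
  then obtain j where j: "j < length (snd P)" "snd P ! j = e" "esrc E e = fst P ! j" "etgt E e = fst P ! Suc j"
    using simple_path_edge[OF g] by blast
  have l: "length (fst P) = Suc (length (snd P))" "distinct (fst P)"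
    using g by (auto simp: simple_path_def)
  have jl: "j < length (fst P)" using j(1) l(1) by simp
  have "fst P ! j = fst P ! k" using j Cons.prems by simp
  then have "j = k" using nth_eq_iff_index_eq[OF l(2) jl Cons.prems(3)] by simp
  have ih: "Suc k + length es < length (fst P) \<and> es = take (length es) (drop (Suc k) (snd P)) \<and>
         b = fst P ! (Suc k + length es)"
    using Cons.prems j \<open>j = k\<close> l by (intro Cons.IH[of "etgt E e"]) auto
  have "drop k (snd P) = snd P ! k # drop (Suc k) (snd P)"
    using j \<open>j = k\<close> Cons_nth_drop_Suc by metis
  then show ?case using j \<open>j = k\<close> l ih by simp
qed

lemma walk_from_inner:
  assumes lengths: "length vs = Suc (length es0)"
    and cons: "\<forall>r<length es0. esrc E (es0 ! r) = vs ! r \<and> etgt E (es0 ! r) = vs ! Suc r"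
    and out: "\<forall>e\<in>G. \<forall>r. 0 < r \<longrightarrow> r < length es0 \<longrightarrow> esrc E e = vs ! r \<longrightarrow> e = es0 ! r"
    and b: "b \<notin> set (inner vs)"
  shows "0 < r \<Longrightarrow> r \<le> length es0 \<Longrightarrow> walk E (vs ! r) b es \<Longrightarrow> set es \<subseteq> G \<Longrightarrow>
    \<exists>es'. es = drop r es0 @ es' \<and> walk E (vs ! length es0) b es'"
proof (induction "length es0 - r" arbitrary: r es)
  case 0
  then have "r = length es0" by simp
  then show ?case using 0 by auto
next
  case (Suc m)
  then have rl: "r < length es0" by simp
  then have "vs ! r \<in> set (inner vs)" using nth_in_inner[of r vs] Suc.prems lengths by simp
  then have "es \<noteq> []" using Suc.prems b by auto
  then obtain e es1 where es: "es = e # es1" by (cases es) auto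
  have "e \<in> G" "esrc E e = vs ! r" using es Suc.prems by auto
  then have e: "e = es0 ! r" using out Suc.prems rl by blast
  then have w: "walk E (vs ! Suc r) b es1" using Suc.prems es cons rl by auto
  have m: "m = length es0 - Suc r" using Suc.hyps(2) by arith
  have "set es1 \<subseteq> G" using Suc.prems es by simp
  then obtain es' where "es1 = drop (Suc r) es0 @ es'" "walk E (vs ! length es0) b es'"
    using Suc.hyps(1)[OF m, of es1] rl w by auto
  moreover have "drop r es0 = es0 ! r # drop (Suc r) es0" using rl Cons_nth_drop_Suc by metis
  ultimately show ?case using es e by auto
qed

lemma walk_enter_path:
  assumes lengths: "length vs = Suc (length es0)" and ne: "es0 \<noteq> []"
    and cons: "\<forall>r<length es0. esrc E (es0 ! r) = vs ! r \<and> etgt E (es0 ! r) = vs ! Suc r"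
    and out: "\<forall>e\<in>G. \<forall>r. 0 < r \<longrightarrow> r < length es0 \<longrightarrow> esrc E e = vs ! r \<longrightarrow> e = es0 ! r"
    and b: "b \<notin> set (inner vs)"
    and w: "walk E (vs ! 0) b (es0 ! 0 # es)" and es: "set es \<subseteq> G"
  shows "\<exists>es'. es0 ! 0 # es = es0 @ es' \<and> walk E (vs ! length es0) b es'"
proof -
  have "walk E (vs ! 1) b es" using w cons ne by auto
  then obtain es' where "es = drop 1 es0 @ es'" "walk E (vs ! length es0) b es'"
    using walk_from_inner[OF lengths cons out b, of 1] es ne by (auto simp: Suc_le_eq)
  moreover have "es0 = es0 ! 0 # drop 1 es0" using ne by (cases es0) auto
  ultimately show ?thesis by (metis append_Cons)
qed

section \<open>Attaching a cell\<close>

definition walks_agree :: "('a list \<times> 'a list) set \<Rightarrow> 'a dgm \<Rightarrow> nat set \<Rightarrow> bool" where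
  "walks_agree R E F \<longleftrightarrow> (\<forall>a b es1 es2. walk E a b es1 \<longrightarrow> set es1 \<subseteq> F \<longrightarrow> walk E a b es2 \<longrightarrow>
      set es2 \<subseteq> F \<longrightarrow> pres_eq R (label E es1) (label E es2))"

lemma walk_start_on_path:
  assumes g: "simple_path E P" and w: "walk E a b es" and s: "set es \<subseteq> set (snd P)" and ne: "es \<noteq> []"
  shows "\<exists>k < length (fst P). a = fst P ! k"
proof -
  obtain e es' where es: "es = e # es'" using ne by (cases es) auto
  then obtain j where j: "j < length (snd P)" "esrc E e = fst P ! j"
    using simple_path_edge[OF g, of e] s by auto
  have "a = fst P ! j" using w es j by simp
  then show ?thesis using j(1) g by (intro exI[of _ j]) (auto simp: simple_path_def)
qed

lemma walks_agree_simple_path: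
  assumes g: "simple_path E P"
  shows "walks_agree R E (set (snd P))"
  unfolding walks_agree_def
proof (intro allI impI)
  fix a b es1 es2
  assume w1: "walk E a b es1" and es1_in: "set es1 \<subseteq> set (snd P)"
     and w2: "walk E a b es2" and es2_in: "set es2 \<subseteq> set (snd P)"
  have d: "distinct (fst P)" using g by (simp add: simple_path_def)
  show "pres_eq R (label E es1) (label E es2)"
  proof (cases "es1 = [] \<and> es2 = []")
    case True then show ?thesis by simp
  next
    case False
    then obtain k where k: "k < length (fst P)" "a = fst P ! k"
      using walk_start_on_path[OF g w1 es1_in] walk_start_on_path[OF g w2 es2_in] by blast
    note r1 = walk_along_simple_path[OF g w1 es1_in k] and r2 = walk_along_simple_path[OF g w2 es2_in k]
    have "fst P ! (k + length es1) = fst P ! (k + length es2)" using r1 r2 by simp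
    then have "k + length es1 = k + length es2"
      using nth_eq_iff_index_eq[OF d] r1 r2 by blast
    then have "length es1 = length es2" by simp
    then have "es1 = es2" using r1 r2 by metis
    then show ?thesis by simp
  qed
qed

(* A cell with bottom path (bv, be) is attached along the walk te of old edges F with vertices
   in V; G is the enlarged edge set and N the set of new vertices. *)
locale cell_attach =
  fixes R :: "('a list \<times> 'a list) set" and E :: "'a dgm" and F V :: "nat set"
    and bv be te :: "nat list"
  assumes nonempty_rel: "\<forall>(x, y) \<in> R. x \<noteq> [] \<and> y \<noteq> []"
    and agree_F: "walks_agree R E F"
    and lengths: "length bv = Suc (length be)" and be_nonempty: "be \<noteq> []"
    and distinct_bv: "distinct bv"
    and be_ends: "\<forall>r<length be. esrc E (be ! r) = bv ! r \<and> etgt E (be ! r) = bv ! Suc r"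
    and fresh_inner: "set (inner bv) \<inter> V = {}"
    and F_in_V: "\<forall>e\<in>F. esrc E e \<in> V \<and> etgt E e \<in> V"
    and ends_in_V: "bv ! 0 \<in> V" "bv ! length be \<in> V"
    and top: "walk E (bv ! 0) (bv ! length be) te" "set te \<subseteq> F"
    and top_bot_rel: "sym_rel R (label E te) (label E be)"
begin

abbreviation "G \<equiv> F \<union> set be"
abbreviation "N \<equiv> set (inner bv)"

lemma in_inner_iff: "x \<in> N \<longleftrightarrow> (\<exists>r. 0 < r \<and> r < length be \<and> x = bv ! r)"
  using in_inner_iff_nth[OF lengths] .

lemma old_not_inner: "x \<in> V \<Longrightarrow> x \<notin> N" using fresh_inner by blast

lemma out_edge_inner:
  assumes "e \<in> G" "esrc E e = bv ! r" "0 < r" "r < length be"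
  shows "e = be ! r"
proof -
  have "bv ! r \<in> N" using in_inner_iff assms by blast
  then have "e \<notin> F" using F_in_V assms old_not_inner by metis
  then obtain s where s: "s < length be" "e = be ! s" using assms by (metis UnE in_set_conv_nth)
  then have "bv ! s = bv ! r" using be_ends assms by auto
  moreover have "s < length bv" "r < length bv" using s assms lengths by auto
  ultimately show ?thesis using s nth_eq_iff_index_eq[OF distinct_bv] by blast
qed

lemma in_edge_inner:
  assumes "e \<in> G" "etgt E e = bv ! r" "0 < r" "r < length be"
  shows "e = be ! (r - 1)"
proof -
  have "bv ! r \<in> N" using in_inner_iff assms by blast
  then have "e \<notin> F" using F_in_V assms old_not_inner by metis
  then obtain s where s: "s < length be" "e = be ! s" using assms by (metis UnE in_set_conv_nth)
  then have "bv ! Suc s = bv ! r" using be_ends assms by auto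
  moreover have "Suc s < length bv" "r < length bv" using s assms lengths by auto
  ultimately have "Suc s = r" using nth_eq_iff_index_eq[OF distinct_bv] by blast
  then show ?thesis using s by (metis diff_Suc_1)
qed

lemma walk_enter_cell:
  assumes "walk E (bv ! 0) b (be ! 0 # es)" "set es \<subseteq> G" "b \<notin> N"
  shows "\<exists>es'. be ! 0 # es = be @ es' \<and> walk E (bv ! length be) b es'"
  using walk_enter_path[OF lengths be_nonempty be_ends _ assms(3,1,2)] out_edge_inner by blast

lemma top_nonempty: "te \<noteq> []"
proof
  assume "te = []"
  then have "bv ! 0 = bv ! length be" using top by simp
  moreover have "0 < length bv" "length be < length bv" using lengths by auto
  ultimately have "0 = length be" using nth_eq_iff_index_eq[OF distinct_bv] by blast
  then show False using be_nonempty by simp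
qed

lemma walk_avoid_cell:
  assumes "walk E a b es" "set es \<subseteq> G" "a \<notin> N" "b \<notin> N"
  shows "\<exists>es'. walk E a b es' \<and> set es' \<subseteq> F \<and> pres_eq R (label E es) (label E es') \<and> (es \<noteq> [] \<longrightarrow> es' \<noteq> [])"
  using assms
proof (induction "length es" arbitrary: a es rule: less_induct)
  case less
  show ?case
  proof (cases es)
    case Nil then show ?thesis using less.prems by (intro exI[of _ "[]"]) auto
  next
    case (Cons e rest)
    show ?thesis
    proof (cases "e \<in> F")
      case True
      then have "etgt E e \<notin> N" using F_in_V old_not_inner by blast
      then obtain rest' where r: "walk E (etgt E e) b rest'" "set rest' \<subseteq> F"
        "pres_eq R (label E rest) (label E rest')"
        using less.hyps[of rest "etgt E e"] less.prems Cons by auto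
      then show ?thesis using r Cons less.prems True pres_eq_Cons
        by (intro exI[of _ "e # rest'"]) (auto simp: label_def)
    next
      case False
      then obtain r where r: "r < length be" "e = be ! r" using less.prems Cons
        by (metis UnE in_set_conv_nth insert_subset list.simps(15))
      have "esrc E e = a" using less.prems Cons by simp
      then have a: "a = bv ! r" using be_ends r by auto
      then have "r = 0" using less.prems in_inner_iff r by auto
      then have "es = be ! 0 # rest" "walk E (bv ! 0) b (be ! 0 # rest)"
        using less.prems Cons r a by auto
      then obtain es'' where es'': "es = be @ es''" "walk E (bv ! length be) b es''"
        using walk_enter_cell[of b rest] less.prems Cons by auto
      have lt: "length es'' < length es" using es'' be_nonempty by simp
      have "bv ! length be \<notin> N" using ends_in_V old_not_inner by blast
      then obtain es3 where e3: "walk E (bv ! length be) b es3" "set es3 \<subseteq> F"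
        "pres_eq R (label E es'') (label E es3)"
        using less.hyps[OF lt, of "bv ! length be"] less.prems es'' es''(2) by auto
      have "pres_eq R (label E be @ label E es'') (label E te @ label E es3)"
        using pres_eq_append[OF pres_eq_sym[OF sym_rel_pres_eq[OF top_bot_rel]] e3(3)] .
      moreover have "walk E a b (te @ es3)"
        using top e3 a \<open>r = 0\<close> walk_append by fastforce
      ultimately show ?thesis using e3 top top_nonempty es''
        by (intro exI[of _ "te @ es3"]) (auto simp: label_def)
    qed
  qed
qed

lemma no_cycle_old:
  assumes "walk E a a es" "set es \<subseteq> G" "es \<noteq> []" "a \<notin> N"
  shows False
proof -
  obtain es' where e: "walk E a a es'" "set es' \<subseteq> F" "pres_eq R (label E es) (label E es')" "es' \<noteq> []"
    using walk_avoid_cell assms by blast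
  have "pres_eq R (label E []) (label E es')" using agree_F e unfolding walks_agree_def by force
  then have "label E es' = []"
    using pres_eq_Nil[OF nonempty_rel, of "label E es'"] by (simp add: label_def)
  then show False using e by (simp add: label_def)
qed

lemma no_cycle_inner:
  "walk E (bv ! r) (bv ! r) es \<Longrightarrow> set es \<subseteq> G \<Longrightarrow>
    es \<noteq> [] \<Longrightarrow> 0 < r \<Longrightarrow> r \<le> length be \<Longrightarrow> False"
  proof (induction "length be - r" arbitrary: r es)
    case 0
    then have "bv ! r \<notin> N" using ends_in_V old_not_inner by auto
    then show ?case using no_cycle_old 0 by blast
  next
    case (Suc m)
    then have top_bot_rel: "r < length be" by simp
    obtain e es1 where es: "es = e # es1" using Suc.prems by (cases es) auto
    then have e: "e = be ! r" using out_edge_inner Suc.prems top_bot_rel by auto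
    have w2: "walk E (bv ! Suc r) (bv ! Suc r) (es1 @ [e])"
      using Suc.prems es e be_ends top_bot_rel by (auto simp: walk_snoc)
    have m: "m = length be - Suc r" using Suc.hyps(2) by arith
    have es2_in: "set (es1 @ [e]) \<subseteq> G" using Suc.prems es by auto
    show ?case using Suc.hyps(1)[OF m w2 es2_in] top_bot_rel by simp
  qed

lemma no_cycle:
  assumes "walk E a a es" "set es \<subseteq> G" "es \<noteq> []"
  shows False
proof (cases "a \<in> N")
  case False then show ?thesis using no_cycle_old assms by blast
next
  case True
  then obtain r where r: "0 < r" "r < length be" "a = bv ! r" using in_inner_iff by blast
  have wr: "walk E (bv ! r) (bv ! r) es" using assms r by simp
  show False using no_cycle_inner[OF wr assms(2,3) r(1)] r(2) by simp
qed

lemma walks_agree_attach_aux: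
  "length es1 + length es2 \<le> n \<Longrightarrow> walk E a b es1 \<Longrightarrow>
    set es1 \<subseteq> G \<Longrightarrow>
   walk E a b es2 \<Longrightarrow> set es2 \<subseteq> G \<Longrightarrow> pres_eq R (label E es1) (label E es2)"
proof (induction n arbitrary: a b es1 es2)
  case (Suc n)
  note w1 = Suc.prems(2) and es1_in = Suc.prems(3) and w2 = Suc.prems(4) and es2_in = Suc.prems(5)
  consider (empty) "es1 = [] \<or> es2 = []" | (start) "a \<in> N" "es1 \<noteq> []" "es2 \<noteq> []"
    | (stop) "b \<in> N" "es1 \<noteq> []" "es2 \<noteq> []" | (outside) "a \<notin> N" "b \<notin> N"
    by blast
  then show ?case
  proof cases
    case empty
    then have "es1 = [] \<and> es2 = []" using w1 w2 es1_in es2_in no_cycle by fastforce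
    then show ?thesis by simp
  next
    case start
    then obtain r e1 r1 e2 r2 where r: "0 < r" "r < length be" "a = bv ! r"
      and es: "es1 = e1 # r1" "es2 = e2 # r2"
      using in_inner_iff by (meson list.exhaust)
    have e: "e1 = be ! r" "e2 = be ! r" using es w1 w2 es1_in es2_in r out_edge_inner by auto
    then have "pres_eq R (label E r1) (label E r2)"
      using Suc.IH[of r1 r2 "etgt E (be ! r)" b] Suc.prems(1) es w1 w2 es1_in es2_in by auto
    then show ?thesis using es e pres_eq_Cons by (simp add: label_def)
  next
    case stop
    then obtain r e1 r1 e2 r2 where r: "0 < r" "r < length be" "b = bv ! r"
      and es: "es1 = r1 @ [e1]" "es2 = r2 @ [e2]"
      using in_inner_iff by (metis rev_exhaust)
    have e: "e1 = be ! (r - 1)" "e2 = be ! (r - 1)"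
      using es w1 w2 es1_in es2_in r in_edge_inner by (auto simp: walk_snoc)
    then have "pres_eq R (label E r1) (label E r2)"
      using Suc.IH[of r1 r2 a "esrc E (be ! (r - 1))"] Suc.prems(1) es w1 w2 es1_in es2_in
      by (auto simp: walk_snoc)
    then show ?thesis using es e pres_eq_append[OF _ pres_eq_refl] by (simp add: label_def)
  next
    case outside
    obtain f1 where f1: "walk E a b f1" "set f1 \<subseteq> F" "pres_eq R (label E es1) (label E f1)"
      using walk_avoid_cell w1 es1_in outside by blast
    obtain f2 where f2: "walk E a b f2" "set f2 \<subseteq> F" "pres_eq R (label E es2) (label E f2)"
      using walk_avoid_cell w2 es2_in outside by blast
    have "pres_eq R (label E f1) (label E f2)"
      using agree_F f1 f2 unfolding walks_agree_def by blast
    then show ?thesis using f1 f2 pres_eq_trans pres_eq_sym by metis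
  qed
qed simp

lemma walks_agree_attach: "walks_agree R E G"
  unfolding walks_agree_def using walks_agree_attach_aux by blast

end

section \<open>Stackings\<close>

definition verts_upto :: "dpath list \<Rightarrow> nat \<Rightarrow> nat set" where
  "verts_upto Ps i = (\<Union>j\<in>{..i}. set (fst (Ps ! j)))"

definition edges_upto :: "dpath list \<Rightarrow> nat \<Rightarrow> nat set" where
  "edges_upto Ps i = (\<Union>j\<in>{..i}. set (snd (Ps ! j)))"

lemma edges_upto_Suc: "edges_upto Ps (Suc i) = edges_upto Ps i \<union> set (snd (Ps ! Suc i))"
  unfolding edges_upto_def by (auto simp: atMost_Suc)
lemma verts_upto_Suc: "verts_upto Ps (Suc i) = verts_upto Ps i \<union> set (fst (Ps ! Suc i))"
  unfolding verts_upto_def by (auto simp: atMost_Suc)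

definition cell_step :: "('a list \<times> 'a list) set \<Rightarrow> 'a dgm \<Rightarrow> nat \<Rightarrow> nat \<Rightarrow> dpath \<Rightarrow> dpath \<Rightarrow> bool" where
  "cell_step R E c p P P' \<longleftrightarrow> 0 < length (snd (ctop E c)) \<and> p + length (snd (ctop E c)) \<le> length (snd P) \<and>
     ctop E c = subpath p (length (snd (ctop E c))) P \<and>
     P' = replace_subpath p (length (snd (ctop E c))) P (cbot E c) \<and>
     snd (cbot E c) \<noteq> [] \<and> length (fst (cbot E c)) = Suc (length (snd (cbot E c))) \<and>
     hd (fst (cbot E c)) = fst P ! p \<and> last (fst (cbot E c)) = fst P ! (p + length (snd (ctop E c))) \<and>
     sym_rel R (label E (snd (ctop E c))) (label E (snd (cbot E c)))"

lemma cell_step_map_dpath: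
  assumes cs: "cell_step R E c p P P'" and lP: "length (fst P) = Suc (length (snd P))"
    and top: "ctop E' c = map_dpath f g (ctop E c)" and bot: "cbot E' c = map_dpath f g (cbot E c)"
    and lab: "\<And>e. elab E' (g e) = elab E e"
  shows "cell_step R E' c p (map_dpath f g P) (map_dpath f g P')"
proof -
  let ?n = "length (snd (ctop E c))"
  have l: "length (snd (ctop E' c)) = ?n" using top by (simp add: map_dpath_def)
  have c: "0 < ?n" "p + ?n \<le> length (snd P)" "ctop E c = subpath p ?n P"
    "P' = replace_subpath p ?n P (cbot E c)" "snd (cbot E c) \<noteq> []"
    "length (fst (cbot E c)) = Suc (length (snd (cbot E c)))"
    "hd (fst (cbot E c)) = fst P ! p" "last (fst (cbot E c)) = fst P ! (p + ?n)"
    "sym_rel R (label E (snd (ctop E c))) (label E (snd (cbot E c)))"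
    using cs unfolding cell_step_def by blast+
  have ne: "fst (cbot E c) \<noteq> []" and pl: "p < length (fst P)" "p + ?n < length (fst P)"
    using c(2,6) lP by auto
  have lab': "label E' (map g es) = label E es" for es using lab by (simp add: label_def)
  show ?thesis unfolding cell_step_def l
  proof (intro conjI)
    show "ctop E' c = subpath p ?n (map_dpath f g P)" using top c(3) map_dpath_subpath by metis
    show "map_dpath f g P' = replace_subpath p ?n (map_dpath f g P) (cbot E' c)"
      using bot c(4) map_dpath_replace_subpath by metis
    show "hd (fst (cbot E' c)) = fst (map_dpath f g P) ! p"
      using bot c(7) ne pl by (simp add: map_dpath_def hd_map)
    show "last (fst (cbot E' c)) = fst (map_dpath f g P) ! (p + ?n)"
      using bot c(8) ne pl by (simp add: map_dpath_def last_map)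
    show "sym_rel R (label E' (snd (ctop E' c))) (label E' (snd (cbot E' c)))"
      using top bot c(9) lab' by (simp add: map_dpath_def)
  qed (use c bot in \<open>simp_all add: map_dpath_def\<close>)
qed

(* Stage i+1 arises from stage i by crossing the cell cs ! i, whose inner vertices and edges are
   new at that point; None marks an idle step, left behind when a cell is deleted. *)
definition stacking :: "('a list \<times> 'a list) set \<Rightarrow> 'a dgm \<Rightarrow> nat option list \<Rightarrow> dpath list \<Rightarrow> bool" where
  "stacking R E cs Ps \<longleftrightarrow> length Ps = Suc (length cs) \<and> Ps ! 0 = tpath E \<and> Ps ! length cs = bpath E \<and>
     (\<forall>j \<le> length cs. simple_path E (Ps ! j)) \<and>
     cells E = {c. Some c \<in> set cs} \<and>
     (\<forall>i < length cs. \<forall>j < length cs. \<forall>c. cs ! i = Some c \<longrightarrow> cs ! j = Some c \<longrightarrow> i = j) \<and>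
     (\<forall>i < length cs. cs ! i = None \<longrightarrow> Ps ! Suc i = Ps ! i) \<and>
     (\<forall>i < length cs. \<forall>c. cs ! i = Some c \<longrightarrow> (\<exists>p. cell_step R E c p (Ps ! i) (Ps ! Suc i)) \<and>
        set (inner (fst (cbot E c))) \<inter> verts_upto Ps i = {} \<and> set (snd (cbot E c)) \<inter> edges_upto Ps i = {}) \<and>
     verts E = verts_upto Ps (length cs) \<and> edges E = edges_upto Ps (length cs)"

lemma stackingD:
  assumes "stacking R E cs Ps"
  shows "length Ps = Suc (length cs)" "Ps ! 0 = tpath E" "Ps ! length cs = bpath E"
     "\<forall>j \<le> length cs. simple_path E (Ps ! j)"
     "cells E = {c. Some c \<in> set cs}"
     "\<forall>i < length cs. \<forall>j < length cs. \<forall>c. cs ! i = Some c \<longrightarrow> cs ! j = Some c \<longrightarrow> i = j"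
     "\<forall>i < length cs. cs ! i = None \<longrightarrow> Ps ! Suc i = Ps ! i"
     "\<forall>i < length cs. \<forall>c. cs ! i = Some c \<longrightarrow> (\<exists>p. cell_step R E c p (Ps ! i) (Ps ! Suc i)) \<and>
        set (inner (fst (cbot E c))) \<inter> verts_upto Ps i = {} \<and> set (snd (cbot E c)) \<inter> edges_upto Ps i = {}"
     "verts E = verts_upto Ps (length cs)" "edges E = edges_upto Ps (length cs)"
  using assms unfolding stacking_def by blast+

locale stacked =
  fixes R :: "('a list \<times> 'a list) set" and E :: "'a dgm" and cs :: "nat option list" and Ps :: "dpath list"
  assumes st: "stacking R E cs Ps"
begin

lemma length_stages: "length Ps = Suc (length cs)" using stackingD(1)[OF st] .
lemma stage_0: "Ps ! 0 = tpath E" using stackingD(2)[OF st] .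
lemma stage_last: "Ps ! length cs = bpath E" using stackingD(3)[OF st] .
lemma simple_stage: "j \<le> length cs \<Longrightarrow> simple_path E (Ps ! j)"
  using stackingD(4)[OF st] by blast
lemma cells_iff: "c \<in> cells E \<longleftrightarrow> (\<exists>i<length cs. cs ! i = Some c)"
  using stackingD(5)[OF st] by (auto simp: in_set_conv_nth)
lemma cell_index_unique: "i < length cs \<Longrightarrow> j < length cs \<Longrightarrow>
  cs ! i = Some c \<Longrightarrow> cs ! j = Some c \<Longrightarrow> i = j"
  using stackingD(6)[OF st] by blast
lemma idle_stage: "i < length cs \<Longrightarrow> cs ! i = None \<Longrightarrow>
  Ps ! Suc i = Ps ! i"
  using stackingD(7)[OF st] by blast
lemma cell_stage: "i < length cs \<Longrightarrow> cs ! i = Some c \<Longrightarrow>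
  \<exists>p. cell_step R E c p (Ps ! i) (Ps ! Suc i)"
  using stackingD(8)[OF st] by blast
lemma fresh_verts_upto: "i < length cs \<Longrightarrow> cs ! i = Some c \<Longrightarrow>
  set (inner (fst (cbot E c))) \<inter> verts_upto Ps i = {}"
  using stackingD(8)[OF st] by blast
lemma fresh_edges_upto: "i < length cs \<Longrightarrow> cs ! i = Some c \<Longrightarrow>
  set (snd (cbot E c)) \<inter> edges_upto Ps i = {}"
  using stackingD(8)[OF st] by blast
lemma fresh_vert: "i < length cs \<Longrightarrow> cs ! i = Some c \<Longrightarrow>
  x \<in> set (inner (fst (cbot E c))) \<Longrightarrow> j \<le> i \<Longrightarrow>
   x \<notin> set (fst (Ps ! j))"
  using fresh_verts_upto unfolding verts_upto_def by blast
lemma fresh_edge: "i < length cs \<Longrightarrow> cs ! i = Some c \<Longrightarrow>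
  e \<in> set (snd (cbot E c)) \<Longrightarrow> j \<le> i \<Longrightarrow>
   e \<notin> set (snd (Ps ! j))"
  using fresh_edges_upto unfolding edges_upto_def by blast
lemma verts_eq: "verts E = verts_upto Ps (length cs)" using stackingD(9)[OF st] .
lemma edges_eq: "edges E = edges_upto Ps (length cs)" using stackingD(10)[OF st] .
lemma verts_iff: "x \<in> verts E \<longleftrightarrow> (\<exists>j \<le> length cs. x \<in> set (fst (Ps ! j)))"
  using verts_eq unfolding verts_upto_def by auto
lemma edges_iff: "e \<in> edges E \<longleftrightarrow> (\<exists>j \<le> length cs. e \<in> set (snd (Ps ! j)))"
  using edges_eq unfolding edges_upto_def by auto

lemma length_stage: "j \<le> length cs \<Longrightarrow>
  length (fst (Ps ! j)) = Suc (length (snd (Ps ! j)))"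
  using simple_stage by (simp add: simple_path_def)
lemma distinct_stage_verts: "j \<le> length cs \<Longrightarrow> distinct (fst (Ps ! j))"
  using simple_stage by (simp add: simple_path_def)
lemma distinct_stage_edges: "j \<le> length cs \<Longrightarrow> distinct (snd (Ps ! j))"
  using simple_stage simple_path_distinct_edges by blast

context
  fixes i c p
  assumes i: "i < length cs" and ci: "cs ! i = Some c" and cp: "cell_step R E c p (Ps ! i) (Ps ! Suc i)"
begin

abbreviation "tlen \<equiv> length (snd (ctop E c))"
abbreviation "blen \<equiv> length (snd (cbot E c))"

lemma c_top_bounds: "0 < tlen" "p + tlen \<le> length (snd (Ps ! i))"
  using cp by (auto simp: cell_step_def)
lemma c_top: "ctop E c = subpath p tlen (Ps ! i)" using cp by (simp add: cell_step_def)
lemma c_next: "Ps ! Suc i = replace_subpath p tlen (Ps ! i) (cbot E c)"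
  using cp by (simp add: cell_step_def)
lemma c_bot_length: "0 < blen" "length (fst (cbot E c)) = Suc blen"
  using cp by (auto simp: cell_step_def)
lemma c_hd_bot: "hd (fst (cbot E c)) = fst (Ps ! i) ! p" using cp by (simp add: cell_step_def)
lemma c_last_bot: "last (fst (cbot E c)) = fst (Ps ! i) ! (p + tlen)"
  using cp by (simp add: cell_step_def)
lemma c_rel: "sym_rel R (label E (snd (ctop E c))) (label E (snd (cbot E c)))"
  using cp by (simp add: cell_step_def)

lemma c_simple_top: "simple_path E (ctop E c)"
  using simple_stage[of i] i c_top_bounds c_top simple_path_subpath by (metis less_imp_le)

lemma c_length_stage: "length (fst (Ps ! i)) = Suc (length (snd (Ps ! i)))"
  using length_stage i by simp

lemma c_bot_subpath: "cbot E c = subpath p blen (Ps ! Suc i)"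
  using subpath_replace_subpath[OF c_length_stage c_top_bounds(2) c_bot_length(2)] c_next by simp

lemma c_length_next: "length (snd (Ps ! Suc i)) = length (snd (Ps ! i)) - tlen + blen"
  using c_next c_top_bounds c_bot_length by (simp add: replace_subpath_def)

lemma c_bot_bound: "p + blen \<le> length (snd (Ps ! Suc i))"
  using c_length_next c_top_bounds by simp

lemma c_simple_bot: "simple_path E (cbot E c)"
  using simple_stage[of "Suc i"] i c_bot_subpath c_bot_bound simple_path_subpath by (metis Suc_leI)

lemma c_top_nth: "r \<le> tlen \<Longrightarrow> fst (ctop E c) ! r = fst (Ps ! i) ! (p + r)"
  "r < tlen \<Longrightarrow> snd (ctop E c) ! r = snd (Ps ! i) ! (p + r)"
  using subpath_nth[OF c_length_stage c_top_bounds(2)] c_top by auto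

lemma c_length_top: "length (fst (ctop E c)) = Suc tlen"
  using c_simple_top by (simp add: simple_path_def)

lemma c_bot_nth: "r \<le> blen \<Longrightarrow> fst (cbot E c) ! r = fst (Ps ! Suc i) ! (p + r)"
  "r < blen \<Longrightarrow> snd (cbot E c) ! r = snd (Ps ! Suc i) ! (p + r)"
  using subpath_nth[OF length_stage[of "Suc i"] c_bot_bound] c_bot_subpath i by auto

lemma c_bot_first: "fst (cbot E c) ! 0 = fst (Ps ! i) ! p"
  using c_hd_bot c_bot_length by (metis hd_conv_nth length_greater_0_conv zero_less_Suc)

lemma c_bot_last: "fst (cbot E c) ! blen = fst (Ps ! i) ! (p + tlen)"
  using c_last_bot c_bot_length
    by (metis diff_Suc_1 last_conv_nth length_greater_0_conv zero_less_Suc)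

lemma c_top_first: "fst (ctop E c) ! 0 = fst (Ps ! i) ! p" using c_top_nth(1)[of 0] by simp
lemma c_top_last: "fst (ctop E c) ! tlen = fst (Ps ! i) ! (p + tlen)"
  using c_top_nth(1)[of tlen] by simp

lemma c_top_in_stage: "set (fst (ctop E c)) \<subseteq> set (fst (Ps ! i))" "set (snd (ctop E c)) \<subseteq> set (snd (Ps ! i))"
  by (subst c_top, rule set_subpath)+

lemma c_bot_in_next: "set (fst (cbot E c)) \<subseteq> set (fst (Ps ! Suc i))" "set (snd (cbot E c)) \<subseteq> set (snd (Ps ! Suc i))"
  by (subst c_bot_subpath, rule set_subpath)+

lemma c_next_subset: "set (fst (Ps ! Suc i)) \<subseteq> set (fst (Ps ! i)) \<union> set (fst (cbot E c))"
  "set (snd (Ps ! Suc i)) \<subseteq> set (snd (Ps ! i)) \<union> set (snd (cbot E c))"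
  using c_next unfolding replace_subpath_def by (auto dest: in_set_takeD in_set_dropD)

lemma c_set_bot: "set (fst (cbot E c)) = {fst (Ps ! i) ! p, fst (Ps ! i) ! (p + tlen)} \<union> set (inner (fst (cbot E c)))"
  using set_hd_last_inner[of "fst (cbot E c)"] c_bot_length c_hd_bot c_last_bot by simp

lemma c_born_vert: "x \<in> set (fst (Ps ! Suc i)) \<Longrightarrow>
  x \<notin> set (fst (Ps ! i)) \<Longrightarrow> x \<in> set (inner (fst (cbot E c)))"
proof -
  assume a: "x \<in> set (fst (Ps ! Suc i))" "x \<notin> set (fst (Ps ! i))"
  then have "x \<in> set (fst (cbot E c))" using c_next_subset by blast
  moreover have "fst (Ps ! i) ! p \<in> set (fst (Ps ! i))" "fst (Ps ! i) ! (p + tlen) \<in> set (fst (Ps ! i))"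
    using c_length_stage c_top_bounds by auto
  ultimately show ?thesis using a c_set_bot by auto
qed

lemma c_born_edge: "e \<in> set (snd (Ps ! Suc i)) \<Longrightarrow>
  e \<notin> set (snd (Ps ! i)) \<Longrightarrow> e \<in> set (snd (cbot E c))"
  using c_next_subset by blast

lemma c_dies_vert: "x \<in> set (inner (fst (ctop E c))) \<Longrightarrow>
  x \<notin> set (fst (Ps ! Suc i))"
proof
  assume x: "x \<in> set (inner (fst (ctop E c)))" and x': "x \<in> set (fst (Ps ! Suc i))"
  obtain r where r: "0 < r" "Suc r < length (fst (ctop E c))" "fst (ctop E c) ! r = x"
    using in_inner_nth[OF x] by blast
  have rm: "r < tlen" using r c_length_top by simp
  let ?V = "fst (Ps ! i)"
  have xv: "x = ?V ! (p + r)" using c_top_nth(1)[of r] r rm by simp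
  have pr: "p + r < length ?V" using c_top_bounds rm c_length_stage by simp
  have d: "distinct ?V" using distinct_stage_verts i by simp
  have "x \<in> set (take p ?V) \<or> x \<in> set (fst (cbot E c)) \<or> x \<in> set (drop (Suc (p + tlen)) ?V)"
    using x' c_next by (simp add: replace_subpath_def)
  moreover have "x \<notin> set (take p ?V)" using nth_in_take_iff[OF d pr] xv by simp
  moreover have "x \<notin> set (drop (Suc (p + tlen)) ?V)"
    using nth_in_drop_iff[OF d pr] xv rm by simp
  moreover have "x \<notin> set (inner (fst (cbot E c)))"
    using fresh_vert[OF i ci, of x i] xv pr by auto
  moreover have "x \<noteq> ?V ! p" "x \<noteq> ?V ! (p + tlen)"
    using nth_eq_iff_index_eq[OF d] pr xv r rm c_top_bounds c_length_stage by auto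
  ultimately show False using c_set_bot by blast
qed

lemma c_dies_edge: "e \<in> set (snd (ctop E c)) \<Longrightarrow>
  e \<notin> set (snd (Ps ! Suc i))"
proof
  assume e: "e \<in> set (snd (ctop E c))" and e': "e \<in> set (snd (Ps ! Suc i))"
  obtain r where r: "r < tlen" "snd (ctop E c) ! r = e" using e by (metis in_set_conv_nth)
  let ?Es = "snd (Ps ! i)"
  have xv: "e = ?Es ! (p + r)" using c_top_nth(2)[of r] r by simp
  have pr: "p + r < length ?Es" using c_top_bounds r by simp
  have d: "distinct ?Es" using distinct_stage_edges i by simp
  have "e \<in> set (take p ?Es) \<or> e \<in> set (snd (cbot E c)) \<or> e \<in> set (drop (p + tlen) ?Es)"
    using e' c_next by (simp add: replace_subpath_def)
  moreover have "e \<notin> set (take p ?Es)" using nth_in_take_iff[OF d pr] xv by simp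
  moreover have "e \<notin> set (drop (p + tlen) ?Es)" using nth_in_drop_iff[OF d pr] xv r by simp
  moreover have "e \<notin> set (snd (cbot E c))" using fresh_edge[OF i ci, of e i] xv pr by auto
  ultimately show False by blast
qed

end

lemma born_vert:
  assumes "i < length cs" "x \<in> set (fst (Ps ! Suc i))" "x \<notin> set (fst (Ps ! i))"
  shows "\<exists>c. cs ! i = Some c \<and> x \<in> set (inner (fst (cbot E c)))"
proof (cases "cs ! i")
  case None then show ?thesis using idle_stage assms by simp
next
  case (Some c)
  then obtain p where "cell_step R E c p (Ps ! i) (Ps ! Suc i)" using cell_stage assms by blast
  then show ?thesis using c_born_vert[OF assms(1) Some] assms Some by blast
qed

lemma born_edge:
  assumes "i < length cs" "e \<in> set (snd (Ps ! Suc i))" "e \<notin> set (snd (Ps ! i))"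
  shows "\<exists>c. cs ! i = Some c \<and> e \<in> set (snd (cbot E c))"
proof (cases "cs ! i")
  case None then show ?thesis using idle_stage assms by simp
next
  case (Some c)
  then obtain p where "cell_step R E c p (Ps ! i) (Ps ! Suc i)" using cell_stage assms by blast
  then show ?thesis using c_born_edge[OF assms(1) Some] assms Some by blast
qed

lemma vert_absent_later:
  assumes "x \<in> set (fst (Ps ! a))" "x \<notin> set (fst (Ps ! m))" "a \<le> m" "m \<le> b" "b \<le> length cs"
  shows "x \<notin> set (fst (Ps ! b))"
  using assms(4,5)
proof (induction b rule: dec_induct)
  case base then show ?case using assms(2) by simp
next
  case (step b)
  show ?case
  proof
    assume xb: "x \<in> set (fst (Ps ! Suc b))"
    have "x \<notin> set (fst (Ps ! b))" using step by simp
    then obtain c where "cs ! b = Some c" "x \<in> set (inner (fst (cbot E c)))"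
      using born_vert[of b x] step xb by auto
    then show False using fresh_vert[of b c x a] assms step by auto
  qed
qed

lemma edge_absent_later:
  assumes "x \<in> set (snd (Ps ! a))" "x \<notin> set (snd (Ps ! m))" "a \<le> m" "m \<le> b" "b \<le> length cs"
  shows "x \<notin> set (snd (Ps ! b))"
  using assms(4,5)
proof (induction b rule: dec_induct)
  case base then show ?case using assms(2) by simp
next
  case (step b)
  show ?case
  proof
    assume xb: "x \<in> set (snd (Ps ! Suc b))"
    have "x \<notin> set (snd (Ps ! b))" using step by simp
    then obtain c where "cs ! b = Some c" "x \<in> set (snd (cbot E c))"
      using born_edge[of b x] step xb by auto
    then show False using fresh_edge[of b c x a] assms step by auto
  qed
qed

lemma edge_persists:
  assumes "x \<in> set (snd (Ps ! a))" "x \<in> set (snd (Ps ! b))" "a \<le> m" "m \<le> b" "b \<le> length cs"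
  shows "x \<in> set (snd (Ps ! m))"
  using edge_absent_later assms by blast

section \<open>Parallel positive paths have equal labels\<close>

lemma cell_step_edges:
  assumes "i < length cs" "cs ! i = Some c" "cell_step R E c p (Ps ! i) (Ps ! Suc i)"
  shows "snd (ctop E c) = take (tlen c) (drop p (snd (Ps ! i)))"
    "snd (Ps ! Suc i) = take p (snd (Ps ! i)) @ snd (cbot E c) @ drop (p + tlen c) (snd (Ps ! i))"
proof -
  show "snd (ctop E c) = take (tlen c) (drop p (snd (Ps ! i)))"
    using c_top[OF assms] by (metis snd_conv subpath_def)
  show "snd (Ps ! Suc i) = take p (snd (Ps ! i)) @ snd (cbot E c) @ drop (p + tlen c) (snd (Ps ! i))"
    using c_next[OF assms] by (simp add: replace_subpath_def)
qed

lemma edge_ends_verts_upto: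
  assumes "i \<le> length cs" "e \<in> edges_upto Ps i"
  shows "esrc E e \<in> verts_upto Ps i" "etgt E e \<in> verts_upto Ps i"
proof -
  obtain j where j: "j \<le> i" "e \<in> set (snd (Ps ! j))"
    using assms(2) unfolding edges_upto_def by blast
  have jl: "j \<le> length cs" using j assms(1) by simp
  obtain q where q: "q < length (snd (Ps ! j))" "esrc E e = fst (Ps ! j) ! q" "etgt E e = fst (Ps ! j) ! Suc q"
    using simple_path_edge[OF simple_stage[OF jl] j(2)] by blast
  then have "esrc E e \<in> set (fst (Ps ! j))" "etgt E e \<in> set (fst (Ps ! j))"
    using length_stage[OF jl] by auto
  then show "esrc E e \<in> verts_upto Ps i" "etgt E e \<in> verts_upto Ps i"
    using j unfolding verts_upto_def by auto
qed

lemma cell_attach_stage: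
  assumes nonempty_rel: "\<forall>(x, y) \<in> R. x \<noteq> [] \<and> y \<noteq> []"
    and agree: "walks_agree R E (edges_upto Ps i)"
    and i: "i < length cs" and c: "cs ! i = Some c" and cp: "cell_step R E c p (Ps ! i) (Ps ! Suc i)"
  shows "cell_attach R E (edges_upto Ps i) (verts_upto Ps i) (fst (cbot E c)) (snd (cbot E c)) (snd (ctop E c))"
proof -
  note cc = c_top_bounds[OF i c cp] c_bot_length[OF i c cp] c_simple_bot[OF i c cp] c_simple_top[OF i c cp]
    c_bot_first[OF i c cp] c_bot_last[OF i c cp] c_top_first[OF i c cp] c_top_last[OF i c cp]
    c_rel[OF i c cp] c_top_in_stage[OF i c cp] c_length_stage[OF i c cp]
  let ?bv = "fst (cbot E c)" and ?be = "snd (cbot E c)" and ?te = "snd (ctop E c)"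
  show ?thesis
  proof (unfold_locales)
    show "\<forall>(x, y) \<in> R. x \<noteq> [] \<and> y \<noteq> []" using nonempty_rel .
    show "walks_agree R E (edges_upto Ps i)" using agree .
    show "length ?bv = Suc (length ?be)" using cc by simp
    show "?be \<noteq> []" using cc by auto
    show "distinct ?bv" using cc by (simp add: simple_path_def)
    show "\<forall>r<length ?be. esrc E (?be ! r) = ?bv ! r \<and> etgt E (?be ! r) = ?bv ! Suc r"
      using cc by (simp add: simple_path_def)
    show "set (inner ?bv) \<inter> verts_upto Ps i = {}"
      using fresh_vert[OF i c] unfolding verts_upto_def by blast
    show "\<forall>e\<in>edges_upto Ps i. esrc E e \<in> verts_upto Ps i \<and> etgt E e \<in> verts_upto Ps i"
      using edge_ends_verts_upto i by simp
    have "fst (Ps ! i) ! p \<in> set (fst (Ps ! i))" "fst (Ps ! i) ! (p + tlen c) \<in> set (fst (Ps ! i))"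
      using cc by simp_all
    then have "fst (Ps ! i) ! p \<in> verts_upto Ps i" "fst (Ps ! i) ! (p + tlen c) \<in> verts_upto Ps i"
      unfolding verts_upto_def by blast+
    then show "?bv ! 0 \<in> verts_upto Ps i" "?bv ! length ?be \<in> verts_upto Ps i"
      using cc by auto
    have "walk E (fst (ctop E c) ! 0) (fst (ctop E c) ! tlen c) ?te"
      using simple_path_walk[OF cc(6)] by simp
    then show "walk E (?bv ! 0) (?bv ! length ?be) ?te" using cc by simp
    show "set ?te \<subseteq> edges_upto Ps i" using cc unfolding edges_upto_def by auto
    show "sym_rel R (label E ?te) (label E ?be)" using cc by simp
  qed
qed

lemma walks_agree_upto:
  assumes nonempty_rel: "\<forall>(x, y) \<in> R. x \<noteq> [] \<and> y \<noteq> []"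
  shows "i \<le> length cs \<Longrightarrow> walks_agree R E (edges_upto Ps i)"
proof (induction i)
  case 0
  have "edges_upto Ps 0 = set (snd (Ps ! 0))" by (simp add: edges_upto_def)
  then show ?case using walks_agree_simple_path[OF simple_stage[of 0]] by simp
next
  case (Suc i)
  then have i: "i < length cs" by simp
  have IH: "walks_agree R E (edges_upto Ps i)" using Suc by simp
  show ?case
  proof (cases "cs ! i")
    case None
    have "set (snd (Ps ! Suc i)) \<subseteq> edges_upto Ps i"
      using idle_stage[OF i None] unfolding edges_upto_def by auto
    then have "edges_upto Ps (Suc i) = edges_upto Ps i" using edges_upto_Suc[of Ps i] by auto
    then show ?thesis using IH by simp
  next
    case (Some c)
    then obtain p where cp: "cell_step R E c p (Ps ! i) (Ps ! Suc i)" using cell_stage i by blast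
    let ?bv = "fst (cbot E c)" and ?be = "snd (cbot E c)" and ?te = "snd (ctop E c)"
    have "cell_attach R E (edges_upto Ps i) (verts_upto Ps i) ?bv ?be ?te"
      using cell_attach_stage[OF nonempty_rel IH i Some cp] .
    then have "walks_agree R E (edges_upto Ps i \<union> set ?be)"
      by (rule cell_attach.walks_agree_attach)
    moreover have "edges_upto Ps (Suc i) = edges_upto Ps i \<union> set ?be"
      using edges_upto_Suc[of Ps i] c_next_subset[OF i Some cp] c_bot_in_next[OF i Some cp] unfolding edges_upto_def by auto
    ultimately show ?thesis by simp
  qed
qed

lemma parallel_paths_pres_eq:
  assumes nonempty_rel: "\<forall>(x, y) \<in> R. x \<noteq> [] \<and> y \<noteq> []"
    and p1: "is_pos_path E a b es1" and p2: "is_pos_path E a b es2"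
  shows "pres_eq R (label E es1) (label E es2)"
proof -
  have "walks_agree R E (edges_upto Ps (length cs))" using walks_agree_upto[OF nonempty_rel] by simp
  moreover have "edges E = edges_upto Ps (length cs)" using edges_eq .
  ultimately show ?thesis using p1 p2 unfolding walks_agree_def is_pos_path_walk by metis
qed

end

section \<open>Removing a dipole\<close>

definition junction_agree :: "('a list \<times> 'a list) set \<Rightarrow> 'a dgm \<Rightarrow> nat \<Rightarrow> bool" where
  "junction_agree R D L \<longleftrightarrow> (\<forall>a es1 es2. is_pos_path D a (fst (tpath D) ! L) es1 \<longrightarrow>
      is_pos_path D a (fst (bpath D) ! L) es2 \<longrightarrow> pres_eq R (label D es1) (label D es2))"

(* In the abbreviations below
   t, m, b refer to the top path of c1, the middle path and the bottom path of c2, and v, e to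
   their vertices and edges. *)
locale stacked_dipole = stacked R E cs Ps
  for R :: "('a list \<times> 'a list) set" and E cs Ps +
  fixes c1 c2 i1 i2 p1 p2
  assumes i1: "i1 < length cs" "cs ! i1 = Some c1" "cell_step R E c1 p1 (Ps ! i1) (Ps ! Suc i1)"
    and i2: "i2 < length cs" "cs ! i2 = Some c2" "cell_step R E c2 p2 (Ps ! i2) (Ps ! Suc i2)"
    and dp: "is_dipole E c1 c2"
begin

abbreviation "tv \<equiv> fst (ctop E c1)"
abbreviation "te \<equiv> snd (ctop E c1)"
abbreviation "mv \<equiv> fst (cbot E c1)"
abbreviation "me \<equiv> snd (cbot E c1)"
abbreviation "bv \<equiv> fst (cbot E c2)"
abbreviation "be \<equiv> snd (cbot E c2)"
abbreviation "mlen \<equiv> length te"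
abbreviation "mmid \<equiv> length me"

lemma ctop_c2: "ctop E c2 = cbot E c1" using dp by (simp add: is_dipole_def)
lemma label_top_bot: "map (elab E) te = map (elab E) be" using dp by (simp add: is_dipole_def)
lemma length_be: "length be = mlen" using label_top_bot by (metis length_map)

lemmas c1_facts = c_top_bounds[OF i1] c_top[OF i1] c_next[OF i1] c_bot_length[OF i1] c_simple_top[OF i1] c_simple_bot[OF i1]
  c_bot_subpath[OF i1] c_top_nth[OF i1] c_bot_nth[OF i1] c_bot_first[OF i1] c_bot_last[OF i1]
  c_top_first[OF i1] c_top_last[OF i1] c_top_in_stage[OF i1] c_bot_in_next[OF i1] c_length_top[OF i1] c_rel[OF i1]
lemmas c2_facts = c_top_bounds[OF i2] c_top[OF i2] c_next[OF i2] c_bot_length[OF i2] c_simple_top[OF i2] c_simple_bot[OF i2]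
  c_bot_subpath[OF i2] c_top_nth[OF i2] c_bot_nth[OF i2] c_bot_first[OF i2] c_bot_last[OF i2]
  c_top_first[OF i2] c_top_last[OF i2] c_top_in_stage[OF i2] c_bot_in_next[OF i2] c_length_top[OF i2]

lemma lengths: "0 < mlen" "0 < mmid" "length tv = Suc mlen" "length mv = Suc mmid" "length bv = Suc mlen"
  using c1_facts c2_facts length_be ctop_c2 by auto

lemma i1_less_i2: "i1 < i2"
proof (rule ccontr)
  assume "\<not> i1 < i2"
  then have le: "i2 \<le> i1" by simp
  have "me ! 0 \<in> set me" using lengths by simp
  moreover have "set me \<subseteq> set (snd (Ps ! i2))" using c_top_in_stage[OF i2] ctop_c2 by simp
  ultimately show False using fresh_edge[OF i1(1,2), of "me ! 0" i2] le by blast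
qed

lemma simple_top: "simple_path E (ctop E c1)" using c1_facts by simp
lemma simple_mid: "simple_path E (cbot E c1)" using c1_facts by simp
lemma simple_bot: "simple_path E (cbot E c2)" using c2_facts by simp

lemma distinct_tv: "distinct tv" using simple_top by (simp add: simple_path_def)
lemma distinct_bv: "distinct bv" using simple_bot by (simp add: simple_path_def)
lemma distinct_be: "distinct be" using simple_bot simple_path_distinct_edges by fastforce

lemma top_edge_ends: "r < mlen \<Longrightarrow>
  esrc E (te ! r) = tv ! r \<and> etgt E (te ! r) = tv ! Suc r"
  using simple_top by (simp add: simple_path_def)
lemma mid_edge_ends: "r < mmid \<Longrightarrow>
  esrc E (me ! r) = mv ! r \<and> etgt E (me ! r) = mv ! Suc r"
  using simple_mid by (simp add: simple_path_def)
lemma bot_edge_ends: "r < mlen \<Longrightarrow>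
  esrc E (be ! r) = bv ! r \<and> etgt E (be ! r) = bv ! Suc r"
  using simple_bot length_be by (simp add: simple_path_def)

lemma dipole_ends: "tv ! 0 = mv ! 0" "bv ! 0 = mv ! 0" "tv ! mlen = mv ! mmid" "bv ! mlen = mv ! mmid"
proof -
  show "tv ! 0 = mv ! 0" using c1_facts by simp
  have "fst (ctop E c2) ! 0 = fst (Ps ! i2) ! p2" using c2_facts by simp
  then show "bv ! 0 = mv ! 0" using c2_facts ctop_c2 by simp
  show "tv ! mlen = mv ! mmid" using c1_facts by simp
  have "fst (ctop E c2) ! length (snd (ctop E c2)) = fst (Ps ! i2) ! (p2 + length (snd (ctop E c2)))"
    using c2_facts by simp
  then show "bv ! mlen = mv ! mmid" using c2_facts ctop_c2 length_be by simp
qed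

lemma inner_tv_stage: "x \<in> set (inner tv) \<Longrightarrow>
  x \<in> set (fst (Ps ! j)) \<Longrightarrow> j \<le> length cs \<Longrightarrow> j \<le> i1"
proof (rule ccontr)
  assume x: "x \<in> set (inner tv)" "x \<in> set (fst (Ps ! j))" "j \<le> length cs" "\<not> j \<le> i1"
  have "x \<in> set (fst (Ps ! i1))"
    using x(1) c_top_in_stage(1)[OF i1] set_inner_subset[of tv] by blast
  moreover have "x \<notin> set (fst (Ps ! Suc i1))" using c_dies_vert[OF i1] x(1) by blast
  ultimately have "x \<notin> set (fst (Ps ! j))"
    using vert_absent_later[of x i1 "Suc i1" j] x by simp
  then show False using x by simp
qed

lemma inner_mv_stage: "x \<in> set (inner mv) \<Longrightarrow>
  x \<in> set (fst (Ps ! j)) \<Longrightarrow> j \<le> length cs \<Longrightarrow> i1 < j \<and> j \<le> i2"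
proof -
  assume x: "x \<in> set (inner mv)" "x \<in> set (fst (Ps ! j))" "j \<le> length cs"
  have "\<not> j \<le> i1" using fresh_vert[OF i1(1,2) x(1)] x(2) by blast
  moreover have "j \<le> i2"
  proof (rule ccontr)
    assume "\<not> j \<le> i2"
    have "x \<in> set (fst (Ps ! i2))"
      using x(1) c_top_in_stage(1)[OF i2] ctop_c2 set_inner_subset[of mv] by auto
    moreover have "x \<notin> set (fst (Ps ! Suc i2))" using c_dies_vert[OF i2] x(1) ctop_c2 by simp
    ultimately have "x \<notin> set (fst (Ps ! j))"
      using vert_absent_later[of x i2 "Suc i2" j] x \<open>\<not> j \<le> i2\<close> by simp
    then show False using x by simp
  qed
  ultimately show ?thesis by simp
qed

lemma me_stage: "e \<in> set me \<Longrightarrow> e \<in> set (snd (Ps ! j)) \<Longrightarrow>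
  j \<le> length cs \<Longrightarrow> i1 < j \<and> j \<le> i2"
proof -
  assume x: "e \<in> set me" "e \<in> set (snd (Ps ! j))" "j \<le> length cs"
  have "\<not> j \<le> i1" using fresh_edge[OF i1(1,2) x(1)] x(2) by blast
  moreover have "j \<le> i2"
  proof (rule ccontr)
    assume "\<not> j \<le> i2"
    have "e \<in> set (snd (Ps ! i2))" using x(1) c_top_in_stage[OF i2] ctop_c2 by auto
    moreover have "e \<notin> set (snd (Ps ! Suc i2))" using c_dies_edge[OF i2] x(1) ctop_c2 by simp
    ultimately have "e \<notin> set (snd (Ps ! j))"
      using edge_absent_later[of e i2 "Suc i2" j] x \<open>\<not> j \<le> i2\<close> by simp
    then show False using x by simp
  qed
  ultimately show ?thesis by simp
qed

lemma me_in_stage: "e \<in> set me \<Longrightarrow> i1 < j \<Longrightarrow>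
  j \<le> i2 \<Longrightarrow> e \<in> set (snd (Ps ! j))"
proof -
  assume a: "e \<in> set me" "i1 < j" "j \<le> i2"
  have "e \<in> set (snd (Ps ! Suc i1))" using a c_bot_in_next[OF i1] by blast
  moreover have "e \<in> set (snd (Ps ! i2))" using a c_top_in_stage[OF i2] ctop_c2 by auto
  ultimately show ?thesis using edge_persists[of e "Suc i1" i2 j] a i2 by simp
qed

lemma inner_bv_stage: "x \<in> set (inner bv) \<Longrightarrow>
  x \<in> set (fst (Ps ! j)) \<Longrightarrow> i2 < j"
  using fresh_vert[OF i2(1,2)] by (meson not_le)

lemma be_stage: "e \<in> set be \<Longrightarrow> e \<in> set (snd (Ps ! j)) \<Longrightarrow>
  i2 < j"
  using fresh_edge[OF i2(1,2)] by (meson not_le)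

lemma tv_in_stage: "set tv \<subseteq> set (fst (Ps ! i1))" using c_top_in_stage[OF i1] by simp
lemma te_in_stage: "set te \<subseteq> set (snd (Ps ! i1))" using c_top_in_stage[OF i1] by simp

lemma tv_not_inner_bv: "x \<in> set tv \<Longrightarrow> x \<notin> set (inner bv)"
  using tv_in_stage inner_bv_stage i1_less_i2 by fastforce
lemma te_not_be: "e \<in> set te \<Longrightarrow> e \<notin> set be"
  using te_in_stage be_stage i1_less_i2 by fastforce
lemma tv_not_inner_mv: "x \<in> set tv \<Longrightarrow> x \<notin> set (inner mv)"
  using tv_in_stage inner_mv_stage i1 by fastforce
lemma te_not_me: "e \<in> set te \<Longrightarrow> e \<notin> set me"
  using te_in_stage me_stage i1 by fastforce

lemma me_unique_out:
  assumes e: "e \<in> edges E" "esrc E e = mv ! r" and r: "0 < r" "r < mmid"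
  shows "e = me ! r"
proof -
  obtain j where j: "j \<le> length cs" "e \<in> set (snd (Ps ! j))" using e edges_iff by blast
  obtain t where t: "t < length (snd (Ps ! j))" "snd (Ps ! j) ! t = e" "esrc E e = fst (Ps ! j) ! t"
    using simple_path_edge[OF simple_stage[OF j(1)] j(2)] by blast
  have inn: "mv ! r \<in> set (inner mv)" using nth_in_inner[of r mv] r lengths(4) by simp
  have "mv ! r \<in> set (fst (Ps ! j))"
    using t e length_stage[OF j(1)] by (metis Suc_less_eq less_SucI nth_mem)
  then have jj: "i1 < j" "j \<le> i2" using inner_mv_stage[OF inn _ j(1)] by auto
  have "me ! r \<in> set (snd (Ps ! j))" using me_in_stage[OF _ jj] r by simp
  then obtain t' where t': "t' < length (snd (Ps ! j))" "snd (Ps ! j) ! t' = me ! r"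
    "esrc E (me ! r) = fst (Ps ! j) ! t'"
    using simple_path_edge[OF simple_stage[OF j(1)]] by blast
  have "fst (Ps ! j) ! t = fst (Ps ! j) ! t'" using t t' e mid_edge_ends r by simp
  then have "t = t'" using nth_eq_iff_index_eq[OF distinct_stage_verts[OF j(1)]] t t' length_stage[OF j(1)] by simp
  then show ?thesis using t t' by simp
qed

lemma me_unique_in:
  assumes e: "e \<in> edges E" "etgt E e = mv ! r" and r: "0 < r" "r < mmid"
  shows "e = me ! (r - 1)"
proof -
  obtain j where j: "j \<le> length cs" "e \<in> set (snd (Ps ! j))" using e edges_iff by blast
  obtain t where t: "t < length (snd (Ps ! j))" "snd (Ps ! j) ! t = e" "etgt E e = fst (Ps ! j) ! Suc t"
    using simple_path_edge[OF simple_stage[OF j(1)] j(2)] by blast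
  have inn: "mv ! r \<in> set (inner mv)" using nth_in_inner[of r mv] r lengths(4) by simp
  have "mv ! r \<in> set (fst (Ps ! j))"
    using t e length_stage[OF j(1)] by (metis Suc_less_eq nth_mem)
  then have jj: "i1 < j" "j \<le> i2" using inner_mv_stage[OF inn _ j(1)] by auto
  have "me ! (r - 1) \<in> set (snd (Ps ! j))" using me_in_stage[OF _ jj] r by simp
  then obtain t' where t': "t' < length (snd (Ps ! j))" "snd (Ps ! j) ! t' = me ! (r - 1)"
    "etgt E (me ! (r - 1)) = fst (Ps ! j) ! Suc t'"
    using simple_path_edge[OF simple_stage[OF j(1)]] by blast
  have "etgt E (me ! (r - 1)) = mv ! r" using mid_edge_ends[of "r - 1"] r by simp
  then have "fst (Ps ! j) ! Suc t = fst (Ps ! j) ! Suc t'" using t t' e by simp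
  then have "t = t'" using nth_eq_iff_index_eq[OF distinct_stage_verts[OF j(1)]] t t' length_stage[OF j(1)] by simp
  then show ?thesis using t t' by simp
qed

lemma mid_pos_unique:
  assumes j: "j \<le> length cs"
    and q: "q + mmid \<le> length (snd (Ps ! j))" "subpath q mmid (Ps ! j) = cbot E c1"
    and q': "q' + mmid \<le> length (snd (Ps ! j))" "subpath q' mmid (Ps ! j) = cbot E c1"
  shows "q = q'"
proof -
  have l: "length (fst (Ps ! j)) = Suc (length (snd (Ps ! j)))" using length_stage[OF j] .
  have "fst (subpath q mmid (Ps ! j)) ! 0 = fst (Ps ! j) ! q"
    using subpath_nth(3)[OF l q(1), of 0] by simp
  moreover have "fst (subpath q' mmid (Ps ! j)) ! 0 = fst (Ps ! j) ! q'"
    using subpath_nth(3)[OF l q'(1), of 0] by simp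
  ultimately have "fst (Ps ! j) ! q = fst (Ps ! j) ! q'" using q q' by simp
  moreover have "q < length (fst (Ps ! j))" "q' < length (fst (Ps ! j))" using q q' l by auto
  ultimately show ?thesis using nth_eq_iff_index_eq[OF distinct_stage_verts[OF j]] by blast
qed

(* Position of the middle path in stage j, meaningful only for i1 < j \<le> i2 (mid_pos_spec). *)
definition mid_pos :: "nat \<Rightarrow> nat" where
  "mid_pos j = (SOME q. q + mmid \<le> length (snd (Ps ! j)) \<and> subpath q mmid (Ps ! j) = cbot E c1)"

lemma mid_pos_eq:
  assumes j: "j \<le> length cs"
    and q: "q + mmid \<le> length (snd (Ps ! j))" "subpath q mmid (Ps ! j) = cbot E c1"
  shows "mid_pos j = q"
proof -
  have "mid_pos j + mmid \<le> length (snd (Ps ! j)) \<and> subpath (mid_pos j) mmid (Ps ! j) = cbot E c1"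
    unfolding mid_pos_def using q by (rule someI[where x = q, OF conjI])
  then show ?thesis using mid_pos_unique[OF j] q by blast
qed

(* The edges of the middle path persist up to stage i2, whereas those of the top path of a
   crossed cell disappear at once. *)
lemma cell_apart_from_mid:
  assumes j: "i1 < j" "j < i2" and c: "cs ! j = Some c" and cp: "cell_step R E c p (Ps ! j) (Ps ! Suc j)"
    and q: "q + mmid \<le> length (snd (Ps ! j))" "subpath q mmid (Ps ! j) = cbot E c1"
  shows "p + tlen c \<le> q \<or> q + mmid \<le> p"
proof (rule ccontr)
  assume "\<not> (p + tlen c \<le> q \<or> q + mmid \<le> p)"
  have jl: "j < length cs" using j i2 by simp
  let ?n = "tlen c" and ?Es = "snd (Ps ! j)"
  have lP: "length (fst (Ps ! j)) = Suc (length ?Es)" using length_stage jl by simp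
  have pn: "0 < ?n" "p + ?n \<le> length ?Es" using c_top_bounds[OF jl c cp] by auto
  from \<open>\<not> (p + ?n \<le> q \<or> q + mmid \<le> p)\<close> have ov: "q < p + ?n" "p < q + mmid" by auto
  define t where "t = max p q"
  have t: "p \<le> t" "t < p + ?n" "q \<le> t" "t < q + mmid"
    using ov pn lengths unfolding t_def by auto
  have "snd (ctop E c) ! (t - p) = ?Es ! t" using c_top_nth(2)[OF jl c cp, of "t - p"] t by simp
  then have "?Es ! t \<in> set (snd (ctop E c))"
    using t by (metis diff_less_mono nth_mem add.commute less_diff_conv2)
  then have d: "?Es ! t \<notin> set (snd (Ps ! Suc j))" using c_dies_edge[OF jl c cp] by blast
  have "snd (subpath q mmid (Ps ! j)) ! (t - q) = ?Es ! t"
    using subpath_nth(4)[OF lP q(1), of "t - q"] t by simp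
  then have "me ! (t - q) = ?Es ! t" using q by simp
  moreover have "me ! (t - q) \<in> set me" using t by simp
  ultimately have "?Es ! t \<in> set (snd (Ps ! Suc j))" using me_in_stage[of _ "Suc j"] j by force
  then show False using d by simp
qed

lemma mid_survives_step:
  assumes j: "i1 < j" "j < i2" and c: "cs ! j = Some c" and cp: "cell_step R E c p (Ps ! j) (Ps ! Suc j)"
    and q: "q + mmid \<le> length (snd (Ps ! j))" "subpath q mmid (Ps ! j) = cbot E c1"
  shows "(p + tlen c \<le> q \<and> q - tlen c + blen c + mmid \<le> length (snd (Ps ! Suc j)) \<and>
           subpath (q - tlen c + blen c) mmid (Ps ! Suc j) = cbot E c1) \<or>
         (q + mmid \<le> p \<and> q + mmid \<le> length (snd (Ps ! Suc j)) \<and> subpath q mmid (Ps ! Suc j) = cbot E c1)"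
proof -
  have jl: "j < length cs" using j i2 by simp
  let ?n = "tlen c" and ?k = "blen c" and ?Es = "snd (Ps ! j)"
  have pn: "0 < ?n" "p + ?n \<le> length ?Es" using c_top_bounds[OF jl c cp] by auto
  have disj: "p + ?n \<le> q \<or> q + mmid \<le> p" using cell_apart_from_mid[OF j c cp q] .
  have lP': "length (snd (Ps ! Suc j)) = length ?Es - ?n + ?k" using c_length_next[OF jl c cp] .
  have nxt: "Ps ! Suc j = replace_subpath p ?n (Ps ! j) (cbot E c)" using c_next[OF jl c cp] .
  have gj': "simple_path E (Ps ! Suc j)" using simple_stage jl by simp
  have men: "me \<noteq> []" using lengths by auto
  show ?thesis using disj
  proof
    assume d1: "p + ?n \<le> q"
    let ?q' = "q - ?n + ?k"
    have b: "?q' + mmid \<le> length (snd (Ps ! Suc j))" using lP' d1 q by simp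
    have "snd (subpath ?q' mmid (Ps ! Suc j)) = take mmid (drop ?q' (take p ?Es @ snd (cbot E c) @ drop (p + ?n) ?Es))"
      using nxt by (simp add: subpath_def replace_subpath_def)
    also have "\<dots> = take mmid (drop q ?Es)" using take_drop_replace_before[OF d1 q(1)] by simp
    also have "\<dots> = me" using arg_cong[OF q(2), of snd] by (simp add: subpath_def)
    finally have "subpath ?q' mmid (Ps ! Suc j) = cbot E c1"
      using simple_path_eqI[OF simple_path_subpath[OF gj' b] simple_mid] men by simp
    then show ?thesis using d1 b by simp
  next
    assume d2: "q + mmid \<le> p"
    have b: "q + mmid \<le> length (snd (Ps ! Suc j))" using lP' d2 pn by simp
    have "snd (subpath q mmid (Ps ! Suc j)) = take mmid (drop q (take p ?Es @ snd (cbot E c) @ drop (p + ?n) ?Es))"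
      using nxt by (simp add: subpath_def replace_subpath_def)
    also have "\<dots> = take mmid (drop q ?Es)" using take_drop_replace_after[OF d2 pn(2)] by simp
    also have "\<dots> = me" using arg_cong[OF q(2), of snd] by (simp add: subpath_def)
    finally have "subpath q mmid (Ps ! Suc j) = cbot E c1"
      using simple_path_eqI[OF simple_path_subpath[OF gj' b] simple_mid] men by simp
    then show ?thesis using d2 b by simp
  qed
qed

lemma mid_subpath_exists:
  assumes "i1 < j" "j \<le> i2"
  shows "\<exists>q. q + mmid \<le> length (snd (Ps ! j)) \<and> subpath q mmid (Ps ! j) = cbot E c1"
proof -
  have "Suc i1 \<le> j" using assms by simp
  then show ?thesis using assms(2)
  proof (induction j rule: dec_induct)
    case base
    have "cbot E c1 = subpath p1 mmid (Ps ! Suc i1)" using c_bot_subpath[OF i1] .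
    moreover have "p1 + mmid \<le> length (snd (Ps ! Suc i1))" using c_bot_bound[OF i1] .
    ultimately show ?case by auto
  next
    case (step j)
    then have jl: "j < length cs" "j < i2" "i1 < j" using i2 by auto
    obtain q where q: "q + mmid \<le> length (snd (Ps ! j))" "subpath q mmid (Ps ! j) = cbot E c1"
      using step by auto
    show ?case
    proof (cases "cs ! j")
      case None
      then show ?thesis using idle_stage[OF jl(1)] q by auto
    next
      case (Some c)
      then obtain p where "cell_step R E c p (Ps ! j) (Ps ! Suc j)" using cell_stage jl by blast
      then show ?thesis using mid_survives_step[OF jl(3) jl(2) Some _ q] by blast
    qed
  qed
qed

lemma mid_pos_spec:
  assumes "i1 < j" "j \<le> i2"
  shows "mid_pos j + mmid \<le> length (snd (Ps ! j)) \<and> subpath (mid_pos j) mmid (Ps ! j) = cbot E c1"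
proof -
  obtain q where q: "q + mmid \<le> length (snd (Ps ! j))" "subpath q mmid (Ps ! j) = cbot E c1"
    using mid_subpath_exists[OF assms] by blast
  have "j \<le> length cs" using assms i2 by simp
  then show ?thesis using mid_pos_eq q by simp
qed

lemma stage_nth_mid_pos_vert:
  assumes "i1 < j" "j \<le> i2" "r \<le> mmid"
  shows "fst (Ps ! j) ! (mid_pos j + r) = mv ! r"
proof -
  have jl: "j \<le> length cs" using assms i2 by simp
  note ps = mid_pos_spec[OF assms(1,2)]
  show ?thesis using subpath_nth(3)[OF length_stage[OF jl] conjunct1[OF ps] assms(3)] conjunct2[OF ps] by simp
qed

lemma stage_nth_mid_pos_edge:
  assumes "i1 < j" "j \<le> i2" "r < mmid"
  shows "snd (Ps ! j) ! (mid_pos j + r) = me ! r"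
proof -
  have jl: "j \<le> length cs" using assms i2 by simp
  note ps = mid_pos_spec[OF assms(1,2)]
  show ?thesis using subpath_nth(4)[OF length_stage[OF jl] conjunct1[OF ps] assms(3)] conjunct2[OF ps] by simp
qed

(* Stage j with the middle path replaced by the top path of c1; folding it yields stage j of the
   reduced diagram. *)
definition bypass :: "nat \<Rightarrow> dpath" where
  "bypass j = (if i1 < j \<and> j \<le> i2 then replace_subpath (mid_pos j) mmid (Ps ! j) (ctop E c1) else Ps ! j)"

lemma bypass_outside: "\<not> (i1 < j \<and> j \<le> i2) \<Longrightarrow>
  bypass j = Ps ! j" unfolding bypass_def by auto
lemma bypass_inside: "i1 < j \<Longrightarrow> j \<le> i2 \<Longrightarrow>
  bypass j = replace_subpath (mid_pos j) mmid (Ps ! j) (ctop E c1)" by (simp add: bypass_def)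

lemma simple_bypass:
  assumes j: "j \<le> length cs"
  shows "simple_path E (bypass j)"
proof (cases "i1 < j \<and> j \<le> i2")
  case False then show ?thesis using bypass_outside simple_stage j by simp
next
  case True
  note ps = mid_pos_spec[OF conjunct1[OF True] conjunct2[OF True]]
  have s0: "fst (ctop E c1) ! 0 = fst (Ps ! j) ! mid_pos j"
    using stage_nth_mid_pos_vert[of j 0] True dipole_ends by simp
  have sk: "fst (ctop E c1) ! length (snd (ctop E c1)) = fst (Ps ! j) ! (mid_pos j + mmid)"
    using stage_nth_mid_pos_vert[of j mmid] True dipole_ends by simp
  have d: "set (inner tv) \<inter> set (fst (Ps ! j)) = {}" using inner_tv_stage j True by fastforce
  have "te \<noteq> []" using lengths by auto
  then show ?thesis using bypass_inside True simple_path_replace_subpath[OF simple_stage[OF j] conjunct1[OF ps] simple_top _ s0 sk d] by simp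
qed

lemma stage_split_mid:
  assumes "i1 < j" "j \<le> i2"
  shows "fst (Ps ! j) = take (mid_pos j) (fst (Ps ! j)) @ mv @ drop (Suc (mid_pos j + mmid)) (fst (Ps ! j))"
    "snd (Ps ! j) = take (mid_pos j) (snd (Ps ! j)) @ me @ drop (mid_pos j + mmid) (snd (Ps ! j))"
proof -
  note ps = mid_pos_spec[OF assms]
  have "mv = take (Suc mmid) (drop (mid_pos j) (fst (Ps ! j)))"
    using ps by (simp add: subpath_def prod_eq_iff)
  then show "fst (Ps ! j) = take (mid_pos j) (fst (Ps ! j)) @ mv @ drop (Suc (mid_pos j + mmid)) (fst (Ps ! j))"
    by (metis append_take_drop_id drop_drop add_Suc_right add.commute)
  have "me = take mmid (drop (mid_pos j) (snd (Ps ! j)))"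
    using ps by (simp add: subpath_def prod_eq_iff)
  then show "snd (Ps ! j) = take (mid_pos j) (snd (Ps ! j)) @ me @ drop (mid_pos j + mmid) (snd (Ps ! j))"
    by (metis append_take_drop_id drop_drop add.commute)
qed

lemma set_bypass_verts:
  assumes "i1 < j" "j \<le> i2"
  shows "set (fst (bypass j)) = set (take (mid_pos j) (fst (Ps ! j))) \<union> set tv \<union> set (drop (Suc (mid_pos j + mmid)) (fst (Ps ! j)))"
  using bypass_inside[OF assms] by (auto simp: replace_subpath_def)

lemma set_bypass_edges:
  assumes "i1 < j" "j \<le> i2"
  shows "set (snd (bypass j)) = set (take (mid_pos j) (snd (Ps ! j))) \<union> set te \<union> set (drop (mid_pos j + mmid) (snd (Ps ! j)))"
  using bypass_inside[OF assms] by (auto simp: replace_subpath_def)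

lemma bypass_vert_cases: "x \<in> set (fst (bypass j)) \<Longrightarrow>
  x \<in> set (fst (Ps ! j)) \<or> (x \<in> set tv \<and> i1 < j \<and> j \<le> i2)"
proof (cases "i1 < j \<and> j \<le> i2")
  case False then show "x \<in> set (fst (bypass j)) \<Longrightarrow> ?thesis"
    using bypass_outside by simp
next
  case True
  then show "x \<in> set (fst (bypass j)) \<Longrightarrow> ?thesis" using set_bypass_verts[of j]
    by (auto dest: in_set_takeD in_set_dropD)
qed

lemma bypass_edge_cases: "e \<in> set (snd (bypass j)) \<Longrightarrow>
  e \<in> set (snd (Ps ! j)) \<or> (e \<in> set te \<and> i1 < j \<and> j \<le> i2)"
proof (cases "i1 < j \<and> j \<le> i2")
  case False then show "e \<in> set (snd (bypass j)) \<Longrightarrow> ?thesis"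
    using bypass_outside by simp
next
  case True
  then show "e \<in> set (snd (bypass j)) \<Longrightarrow> ?thesis" using set_bypass_edges[of j]
    by (auto dest: in_set_takeD in_set_dropD)
qed

lemma set_mv: "set mv = {tv ! 0, tv ! mlen} \<union> set (inner mv)"
proof -
  have "2 \<le> length mv" using lengths(2,4) by linarith
  moreover have "mv \<noteq> []" using lengths by auto
  then have "hd mv = mv ! 0" "last mv = mv ! mmid"
    using lengths by (simp_all add: hd_conv_nth last_conv_nth)
  ultimately show ?thesis using set_hd_last_inner[of mv] dipole_ends by simp
qed

lemma tv_ends_mem: "tv ! 0 \<in> set tv" "tv ! mlen \<in> set tv" using lengths by auto

lemma stage_vert_in_bypass:
  assumes j: "j \<le> length cs" and x: "x \<in> set (fst (Ps ! j))" "x \<notin> set (inner mv)"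
  shows "x \<in> set (fst (bypass j))"
proof (cases "i1 < j \<and> j \<le> i2")
  case False then show ?thesis using bypass_outside x by simp
next
  case True
  have "x \<in> set (take (mid_pos j) (fst (Ps ! j))) \<or> x \<in> set mv \<or> x \<in> set (drop (Suc (mid_pos j + mmid)) (fst (Ps ! j)))"
    using stage_split_mid(1)[of j] True x by (metis Un_iff set_append)
  then show ?thesis using set_bypass_verts[of j] True set_mv x tv_ends_mem by auto
qed

lemma stage_edge_in_bypass:
  assumes j: "j \<le> length cs" and x: "e \<in> set (snd (Ps ! j))" "e \<notin> set me"
  shows "e \<in> set (snd (bypass j))"
proof (cases "i1 < j \<and> j \<le> i2")
  case False then show ?thesis using bypass_outside x by simp
next
  case True
  have "e \<in> set (take (mid_pos j) (snd (Ps ! j))) \<or> e \<in> set me \<or> e \<in> set (drop (mid_pos j + mmid) (snd (Ps ! j)))"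
    using stage_split_mid(2)[of j] True x by (metis Un_iff set_append)
  then show ?thesis using set_bypass_edges[of j] True x by auto
qed

lemma bypass_no_inner_mv:
  assumes j: "j \<le> length cs" and x: "x \<in> set (fst (bypass j))"
  shows "x \<notin> set (inner mv)"
proof
  assume xm: "x \<in> set (inner mv)"
  show False
  proof (cases "i1 < j \<and> j \<le> i2")
    case False then show ?thesis using bypass_outside x inner_mv_stage[OF xm _ j] by simp
  next
    case True
    obtain r where r: "0 < r" "r < mmid" "x = mv ! r"
      using xm in_inner_iff_nth[OF lengths(4)] by blast
    note ps = mid_pos_spec[OF conjunct1[OF True] conjunct2[OF True]]
    let ?V = "fst (Ps ! j)" and ?q = "mid_pos j"
    have xv: "x = ?V ! (?q + r)" using stage_nth_mid_pos_vert[of j r] True r by simp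
    have lt: "?q + r < length ?V" using ps r length_stage[OF j] by simp
    have d: "distinct ?V" using distinct_stage_verts[OF j] .
    have "x \<notin> set (take ?q ?V)" using nth_in_take_iff[OF d lt] xv by simp
    moreover have "x \<notin> set (drop (Suc (?q + mmid)) ?V)"
      using nth_in_drop_iff[OF d lt] xv r by simp
    moreover have "x \<notin> set tv" using tv_not_inner_mv xm by blast
    ultimately show False using x set_bypass_verts[of j] True by blast
  qed
qed

lemma bypass_no_me:
  assumes j: "j \<le> length cs" and x: "e \<in> set (snd (bypass j))"
  shows "e \<notin> set me"
proof
  assume xm: "e \<in> set me"
  show False
  proof (cases "i1 < j \<and> j \<le> i2")
    case False then show ?thesis using bypass_outside x me_stage[OF xm _ j] by simp
  next
    case True
    obtain r where r: "r < mmid" "e = me ! r" using xm by (metis in_set_conv_nth)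
    note ps = mid_pos_spec[OF conjunct1[OF True] conjunct2[OF True]]
    let ?Es = "snd (Ps ! j)" and ?q = "mid_pos j"
    have xv: "e = ?Es ! (?q + r)" using stage_nth_mid_pos_edge[of j r] True r by simp
    have lt: "?q + r < length ?Es" using ps r by simp
    have d: "distinct ?Es" using distinct_stage_edges[OF j] .
    have "e \<notin> set (take ?q ?Es)" using nth_in_take_iff[OF d lt] xv by simp
    moreover have "e \<notin> set (drop (?q + mmid) ?Es)"
      using nth_in_drop_iff[OF d lt] xv r by simp
    moreover have "e \<notin> set te" using te_not_me xm by blast
    ultimately show False using x set_bypass_edges[of j] True by blast
  qed
qed

lemma bypass_no_inner_bv: "j \<le> i2 \<Longrightarrow>
  x \<in> set (fst (bypass j)) \<Longrightarrow> x \<notin> set (inner bv)"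
  using bypass_vert_cases inner_bv_stage tv_not_inner_bv by fastforce
lemma bypass_no_inner_tv: "i2 < j \<Longrightarrow> j \<le> length cs \<Longrightarrow>
  x \<in> set (fst (bypass j)) \<Longrightarrow> x \<notin> set (inner tv)"
  using bypass_outside inner_tv_stage i1_less_i2 by fastforce

(* The identifications made
  by remove_dipole, which glues the bottom path of c2 onto the top path of c1. *)
definition fold_vert :: "nat \<Rightarrow> nat" where
  "fold_vert = (\<lambda>x. if x \<in> set (inner bv) then tv ! (LEAST i. bv ! i = x) else x)"
definition fold_edge :: "nat \<Rightarrow> nat" where
  "fold_edge = (\<lambda>e. if e \<in> set be then te ! (LEAST i. be ! i = e) else e)"

abbreviation "E' \<equiv> remove_dipole E c1 c2"
abbreviation "fold_path \<equiv> map_dpath fold_vert fold_edge"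

lemma E'_verts: "verts E' = fold_vert ` (verts E - set (inner mv))"
  by (simp add: remove_dipole_def Let_def fold_vert_def)
lemma E'_edges: "edges E' = fold_edge ` (edges E - set me)"
  by (simp add: remove_dipole_def Let_def fold_edge_def)
lemma E'_esrc: "esrc E' e = fold_vert (esrc E e)"
  by (simp add: remove_dipole_def Let_def fold_vert_def)
lemma E'_etgt: "etgt E' e = fold_vert (etgt E e)"
  by (simp add: remove_dipole_def Let_def fold_vert_def)
lemma E'_elab: "elab E' = elab E"
  by (simp add: remove_dipole_def Let_def)
lemma E'_cells: "cells E' = cells E - {c1, c2}"
  by (simp add: remove_dipole_def Let_def)
lemma E'_ctop: "ctop E' c = fold_path (ctop E c)"
  by (simp add: remove_dipole_def Let_def fold_vert_def fold_edge_def)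
lemma E'_cbot: "cbot E' c = fold_path (cbot E c)"
  by (simp add: remove_dipole_def Let_def fold_vert_def fold_edge_def)
lemma E'_tpath: "tpath E' = fold_path (tpath E)"
  by (simp add: remove_dipole_def Let_def fold_vert_def fold_edge_def)
lemma E'_bpath: "bpath E' = fold_path (bpath E)"
  by (simp add: remove_dipole_def Let_def fold_vert_def fold_edge_def)

lemma fold_vert_bv: "0 < r \<Longrightarrow> r < mlen \<Longrightarrow> fold_vert (bv ! r) = tv ! r"
proof -
  assume r: "0 < r" "r < mlen"
  have "bv ! r \<in> set (inner bv)" using nth_in_inner[of r bv] r lengths(5) by simp
  moreover have "(LEAST i. bv ! i = bv ! r) = r"
    using Least_nth_distinct[OF distinct_bv] r lengths(5) by simp
  ultimately show ?thesis by (simp add: fold_vert_def)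
qed

lemma fold_vert_id: "x \<notin> set (inner bv) \<Longrightarrow> fold_vert x = x"
  by (simp add: fold_vert_def)

lemma fold_edge_be: "r < mlen \<Longrightarrow> fold_edge (be ! r) = te ! r"
proof -
  assume r: "r < mlen"
  have "be ! r \<in> set be" using r length_be by simp
  moreover have "(LEAST i. be ! i = be ! r) = r"
    using Least_nth_distinct[OF distinct_be] r length_be by simp
  ultimately show ?thesis by (simp add: fold_edge_def)
qed

lemma fold_edge_id: "e \<notin> set be \<Longrightarrow> fold_edge e = e"
  by (simp add: fold_edge_def)

lemma fold_vert_tv: "x \<in> set tv \<Longrightarrow> fold_vert x = x"
  using fold_vert_id tv_not_inner_bv by blast
lemma fold_edge_te: "e \<in> set te \<Longrightarrow> fold_edge e = e"
  using fold_edge_id te_not_be by blast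

lemma elab_fold_edge: "elab E (fold_edge e) = elab E e"
proof (cases "e \<in> set be")
  case True
  then obtain r where r: "r < mlen" "e = be ! r" using length_be by (metis in_set_conv_nth)
  have "elab E (te ! r) = elab E (be ! r)" using label_top_bot r length_be by (metis nth_map)
  then show ?thesis using fold_edge_be r by simp
next
  case False then show ?thesis using fold_edge_id by simp
qed

lemma fold_vert_bv_le: "r \<le> mlen \<Longrightarrow> fold_vert (bv ! r) = tv ! r"
proof -
  assume r: "r \<le> mlen"
  consider "r = 0" | "0 < r \<and> r < mlen" | "r = mlen" using r by linarith
  then show ?thesis
  proof cases
    case 1 then show ?thesis using dipole_ends fold_vert_tv tv_ends_mem by simp
  next
    case 2 then show ?thesis using fold_vert_bv by simp
  next
    case 3 then show ?thesis using dipole_ends fold_vert_tv tv_ends_mem by simp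
  qed
qed

lemma fold_top: "fold_path (ctop E c1) = ctop E c1"
proof -
  have "map fold_vert tv = tv" using fold_vert_tv by (simp add: map_idI)
  moreover have "map fold_edge te = te" using fold_edge_te by (simp add: map_idI)
  ultimately show ?thesis by (simp add: map_dpath_def)
qed

lemma fold_bot: "fold_path (cbot E c2) = ctop E c1"
proof -
  have "map fold_vert bv = tv"
  proof (rule nth_equalityI)
    show "length (map fold_vert bv) = length tv" using lengths by simp
    fix r assume "r < length (map fold_vert bv)"
    then have "r \<le> mlen" using lengths by simp
    then show "map fold_vert bv ! r = tv ! r" using fold_vert_bv_le lengths by simp
  qed
  moreover have "map fold_edge be = te"
  proof (rule nth_equalityI)
    show "length (map fold_edge be) = length te" using length_be by simp
    fix r assume "r < length (map fold_edge be)"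
    then show "map fold_edge be ! r = te ! r" using fold_edge_be length_be by simp
  qed
  ultimately show ?thesis by (simp add: map_dpath_def)
qed

lemma fold_edge_ends:
  assumes e: "e \<in> edges E"
  shows "fold_vert (esrc E (fold_edge e)) = fold_vert (esrc E e) \<and> fold_vert (etgt E (fold_edge e)) = fold_vert (etgt E e)"
proof (cases "e \<in> set be")
  case True
  then obtain r where r: "r < mlen" "e = be ! r" using length_be by (metis in_set_conv_nth)
  have "fold_edge e = te ! r" using fold_edge_be r by simp
  moreover have "esrc E (te ! r) = tv ! r" "etgt E (te ! r) = tv ! Suc r"
    using top_edge_ends r by auto
  moreover have "esrc E e = bv ! r" "etgt E e = bv ! Suc r" using bot_edge_ends r by auto
  moreover have "fold_vert (tv ! r) = tv ! r" "fold_vert (tv ! Suc r) = tv ! Suc r"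
    using fold_vert_tv r lengths by auto
  moreover have "fold_vert (bv ! r) = tv ! r" "fold_vert (bv ! Suc r) = tv ! Suc r"
    using fold_vert_bv_le r by auto
  ultimately show ?thesis by simp
next
  case False then show ?thesis using fold_edge_id by simp
qed

lemma simple_path_fold:
  assumes g: "simple_path E P" and nv: "set (fst P) \<inter> set (inner mv) = {}" and ne: "set (snd P) \<inter> set me = {}"
    and inj: "inj_on fold_vert (set (fst P))"
  shows "simple_path E' (fold_path P)"
  unfolding simple_path_def
proof (intro conjI allI impI)
  show "length (fst (fold_path P)) = Suc (length (snd (fold_path P)))"
    using g by (simp add: simple_path_def map_dpath_def)
  show "distinct (fst (fold_path P))"
    using g inj by (simp add: simple_path_def map_dpath_def distinct_map)
  show "set (fst (fold_path P)) \<subseteq> verts E'"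
    using g nv unfolding E'_verts simple_path_def map_dpath_def by auto
  show "set (snd (fold_path P)) \<subseteq> edges E'"
    using g ne unfolding E'_edges simple_path_def map_dpath_def by auto
  fix k assume k: "k < length (snd (fold_path P))"
  then have k': "k < length (snd P)" by (simp add: map_dpath_def)
  have c: "esrc E (snd P ! k) = fst P ! k" "etgt E (snd P ! k) = fst P ! Suc k"
    using g k' by (auto simp: simple_path_def)
  have ed: "snd P ! k \<in> edges E" using g k' by (auto simp: simple_path_def)
  have l: "length (fst P) = Suc (length (snd P))" using g by (simp add: simple_path_def)
  show "esrc E' (snd (fold_path P) ! k) = fst (fold_path P) ! k" using fold_edge_ends[OF ed] c k' l
    by (simp add: map_dpath_def E'_esrc)
  show "etgt E' (snd (fold_path P) ! k) = fst (fold_path P) ! Suc k"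
    using fold_edge_ends[OF ed] c k' l
    by (simp add: map_dpath_def E'_etgt)
qed

lemma inj_on_fold_vert: "inj_on fold_vert (- set (inner tv))"
proof (rule inj_onI)
  fix x y assume "x \<in> - set (inner tv)" "y \<in> - set (inner tv)" and xy: "fold_vert x = fold_vert y"
  then have x: "x \<notin> set (inner tv)" and y: "y \<notin> set (inner tv)" by auto
  have inner_bv: "\<exists>r. 0 < r \<and> r < mlen \<and> z = bv ! r \<and> fold_vert z = tv ! r \<and> tv ! r \<in> set (inner tv)"
    if z: "z \<in> set (inner bv)" for z
  proof -
    obtain r where r: "0 < r" "r < mlen" "z = bv ! r"
      using z in_inner_iff_nth[OF lengths(5)] by auto
    moreover have "tv ! r \<in> set (inner tv)" using nth_in_inner[of r tv] r lengths(3) by simp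
    ultimately show ?thesis using fold_vert_bv[OF r(1,2)] by blast
  qed
  show "x = y"
  proof (cases "x \<in> set (inner bv)"; cases "y \<in> set (inner bv)")
    assume "x \<in> set (inner bv)" "y \<in> set (inner bv)"
    then obtain r s where "0 < r" "r < mlen" "x = bv ! r" "fold_vert x = tv ! r"
      "0 < s" "s < mlen" "y = bv ! s" "fold_vert y = tv ! s"
      using inner_bv by meson
    moreover have "r < length tv" "s < length tv" using calculation lengths(3) by auto
    ultimately show "x = y" using xy nth_eq_iff_index_eq[OF distinct_tv] by simp
  next
    assume "x \<in> set (inner bv)" "y \<notin> set (inner bv)"
    then show "x = y" using xy inner_bv[of x] y fold_vert_id[of y] by auto
  next
    assume "x \<notin> set (inner bv)" "y \<in> set (inner bv)"
    then show "x = y" using xy inner_bv[of y] x fold_vert_id[of x] by auto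
  next
    assume "x \<notin> set (inner bv)" "y \<notin> set (inner bv)"
    then show "x = y" using xy fold_vert_id by simp
  qed
qed

lemma inj_on_fold_bypass:
  assumes j: "j \<le> length cs"
  shows "inj_on fold_vert (set (fst (bypass j)))"
proof (cases "j \<le> i2")
  case True
  then have "\<forall>x \<in> set (fst (bypass j)). fold_vert x = x"
    using bypass_no_inner_bv fold_vert_id by blast
  then show ?thesis by (metis inj_on_def)
next
  case False
  then have "set (fst (bypass j)) \<subseteq> - set (inner tv)"
    using bypass_no_inner_tv[of j] j by auto
  then show ?thesis using inj_on_fold_vert inj_on_subset by blast
qed

lemma simple_fold_bypass: "j \<le> length cs \<Longrightarrow>
  simple_path E' (fold_path (bypass j))"
  using simple_path_fold[OF simple_bypass _ _ inj_on_fold_bypass] bypass_no_inner_mv bypass_no_me by blast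

lemma bypass_cell_step_of_edges:
  assumes i: "i < length cs" and c: "cs ! i = Some c" and cp: "cell_step R E c p (Ps ! i) (Ps ! Suc i)"
    and b: "p' + tlen c \<le> length (snd (bypass i))"
    and top: "snd (ctop E c) = snd (subpath p' (tlen c) (bypass i))"
    and nxt: "snd (bypass (Suc i)) = snd (replace_subpath p' (tlen c) (bypass i) (cbot E c))"
    and disj: "set (inner (fst (cbot E c))) \<inter> set (fst (bypass i)) = {}"
  shows "ctop E c = subpath p' (tlen c) (bypass i) \<and> bypass (Suc i) = replace_subpath p' (tlen c) (bypass i) (cbot E c)"
proof -
  have gi: "simple_path E (bypass i)" using simple_bypass i by simp
  have gsi: "simple_path E (bypass (Suc i))" using simple_bypass i by simp
  have tne: "snd (ctop E c) \<noteq> []" using c_top_bounds[OF i c cp] by auto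
  have t: "ctop E c = subpath p' (tlen c) (bypass i)"
    using simple_path_eqI[OF c_simple_top[OF i c cp] simple_path_subpath[OF gi b] top tne] .
  have lW: "length (fst (bypass i)) = Suc (length (snd (bypass i)))"
    using gi by (simp add: simple_path_def)
  have s0: "fst (cbot E c) ! 0 = fst (bypass i) ! p'"
  proof -
    have "fst (cbot E c) ! 0 = fst (ctop E c) ! 0"
      using c_bot_first[OF i c cp] c_top_first[OF i c cp] by simp
    also have "\<dots> = fst (bypass i) ! p'" using t subpath_nth(3)[OF lW b, of 0] by simp
    finally show ?thesis .
  qed
  have sk: "fst (cbot E c) ! length (snd (cbot E c)) = fst (bypass i) ! (p' + tlen c)"
  proof -
    have "fst (cbot E c) ! length (snd (cbot E c)) = fst (ctop E c) ! tlen c"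
      using c_bot_last[OF i c cp] c_top_last[OF i c cp] by simp
    also have "\<dots> = fst (bypass i) ! (p' + tlen c)"
      using t subpath_nth(3)[OF lW b, of "tlen c"] by simp
    finally show ?thesis .
  qed
  have bne: "snd (cbot E c) \<noteq> []" using c_bot_length[OF i c cp] by auto
  have gs: "simple_path E (replace_subpath p' (tlen c) (bypass i) (cbot E c))"
    using simple_path_replace_subpath[OF gi b c_simple_bot[OF i c cp] bne s0 sk disj] .
  have "snd (bypass (Suc i)) \<noteq> []" using nxt bne by (simp add: replace_subpath_def)
  then have "bypass (Suc i) = replace_subpath p' (tlen c) (bypass i) (cbot E c)"
    using simple_path_eqI[OF gsi gs nxt] by simp
  then show ?thesis using t by simp
qed

lemma fresh_bypass:
  assumes i: "i < length cs" and c: "cs ! i = Some c"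
  shows "set (inner (fst (cbot E c))) \<inter> set (fst (bypass i)) = {}"
proof -
  have "y \<notin> set (fst (bypass i))" if y: "y \<in> set (inner (fst (cbot E c)))" for y
  proof
    assume "y \<in> set (fst (bypass i))"
    then have "y \<in> set (fst (Ps ! i)) \<or> (y \<in> set tv \<and> i1 < i)"
      using bypass_vert_cases by blast
    then show False
    proof
      assume "y \<in> set (fst (Ps ! i))" then show False using fresh_vert[OF i c y, of i] by simp
    next
      assume "y \<in> set tv \<and> i1 < i"
      then have "y \<in> set (fst (Ps ! i1))" "i1 \<le> i" using tv_in_stage by auto
      then show False using fresh_vert[OF i c y] by blast
    qed
  qed
  then show ?thesis by blast
qed

lemma snd_bypass_inside:
  "i1 < i \<Longrightarrow> i \<le> i2 \<Longrightarrow>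
    snd (bypass i) = take (mid_pos i) (snd (Ps ! i)) @ te @ drop (mid_pos i + mmid) (snd (Ps ! i))"
  using bypass_inside by (simp add: replace_subpath_def)

lemma bypass_cell_step_before_mid:
  assumes i: "i < length cs" "i1 < i" "i < i2" and c: "cs ! i = Some c"
    and cp: "cell_step R E c p (Ps ! i) (Ps ! Suc i)"
    and d: "p + tlen c \<le> mid_pos i" "mid_pos (Suc i) = mid_pos i - tlen c + blen c"
  shows "p + tlen c \<le> length (snd (bypass i)) \<and> ctop E c = subpath p (tlen c) (bypass i) \<and>
    bypass (Suc i) = replace_subpath p (tlen c) (bypass i) (cbot E c)"
proof -
  let ?n = "tlen c" and ?Es = "snd (Ps ! i)" and ?q = "mid_pos i"
  have q: "?q + mmid \<le> length ?Es" using mid_pos_spec i by simp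
  note e = cell_step_edges[OF i(1) c cp] and w = snd_bypass_inside[of i] snd_bypass_inside[of "Suc i"]
  have b: "p + ?n \<le> length (snd (bypass i))" using w i d q by simp
  have "snd (ctop E c) = snd (subpath p ?n (bypass i))"
    using e w i take_drop_replace_after[of p ?n ?q mmid ?Es te] d q by (simp add: subpath_def)
  moreover have "snd (bypass (Suc i)) = snd (replace_subpath p ?n (bypass i) (cbot E c))"
    using replace_replace_commute[of p ?n ?q mmid ?Es "snd (cbot E c)" te] e w i d q
    by (simp add: replace_subpath_def)
  ultimately show ?thesis
    using bypass_cell_step_of_edges[OF i(1) c cp b] fresh_bypass[OF i(1) c] b by blast
qed

lemma bypass_cell_step_after_mid:
  assumes i: "i < length cs" "i1 < i" "i < i2" and c: "cs ! i = Some c"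
    and cp: "cell_step R E c p (Ps ! i) (Ps ! Suc i)"
    and d: "mid_pos i + mmid \<le> p" "mid_pos (Suc i) = mid_pos i"
  shows "p - mmid + mlen + tlen c \<le> length (snd (bypass i)) \<and>
    ctop E c = subpath (p - mmid + mlen) (tlen c) (bypass i) \<and>
    bypass (Suc i) = replace_subpath (p - mmid + mlen) (tlen c) (bypass i) (cbot E c)"
proof -
  let ?n = "tlen c" and ?Es = "snd (Ps ! i)" and ?q = "mid_pos i" and ?p' = "p - mmid + mlen"
  have pn: "p + ?n \<le> length ?Es" using c_top_bounds[OF i(1) c cp] by simp
  note e = cell_step_edges[OF i(1) c cp] and w = snd_bypass_inside[of i] snd_bypass_inside[of "Suc i"]
  have b: "?p' + ?n \<le> length (snd (bypass i))" using w i d pn by simp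
  have "snd (ctop E c) = snd (subpath ?p' ?n (bypass i))"
    using e w i take_drop_replace_before[of ?q mmid p ?n ?Es te] d pn by (simp add: subpath_def)
  moreover have "snd (bypass (Suc i)) = snd (replace_subpath ?p' ?n (bypass i) (cbot E c))"
    using replace_replace_commute[of ?q mmid p ?n ?Es te "snd (cbot E c)", symmetric] e w i d pn
    by (simp add: replace_subpath_def)
  ultimately show ?thesis
    using bypass_cell_step_of_edges[OF i(1) c cp b] fresh_bypass[OF i(1) c] b by blast
qed

lemma bypass_cell_step:
  assumes i: "i < length cs" and c: "cs ! i = Some c" and ne: "i \<noteq> i1" "i \<noteq> i2"
    and cp: "cell_step R E c p (Ps ! i) (Ps ! Suc i)"
  shows "\<exists>p'. p' + tlen c \<le> length (snd (bypass i)) \<and>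
     ctop E c = subpath p' (tlen c) (bypass i) \<and> bypass (Suc i) = replace_subpath p' (tlen c) (bypass i) (cbot E c)"
proof (cases "i1 < i \<and> i < i2")
  case False
  then have "\<not> (i1 < i \<and> i \<le> i2)" "\<not> (i1 < Suc i \<and> Suc i \<le> i2)"
    using ne by auto
  then have "bypass i = Ps ! i" "bypass (Suc i) = Ps ! Suc i" using bypass_outside by auto
  then show ?thesis using c_top_bounds[OF i c cp] c_top[OF i c cp] c_next[OF i c cp]
    by (intro exI[of _ p]) simp
next
  case True
  have sil: "Suc i \<le> length cs" using i by simp
  have q: "mid_pos i + mmid \<le> length (snd (Ps ! i))" "subpath (mid_pos i) mmid (Ps ! i) = cbot E c1"
    using mid_pos_spec True by auto
  from mid_survives_step[OF conjunct1[OF True] conjunct2[OF True] c cp q] show ?thesis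
  proof
    assume "p + tlen c \<le> mid_pos i \<and> mid_pos i - tlen c + blen c + mmid \<le> length (snd (Ps ! Suc i)) \<and>
      subpath (mid_pos i - tlen c + blen c) mmid (Ps ! Suc i) = cbot E c1"
    then show ?thesis using bypass_cell_step_before_mid[OF i _ _ c cp] mid_pos_eq[OF sil] True
      by blast
  next
    assume "mid_pos i + mmid \<le> p \<and> mid_pos i + mmid \<le> length (snd (Ps ! Suc i)) \<and>
      subpath (mid_pos i) mmid (Ps ! Suc i) = cbot E c1"
    then show ?thesis using bypass_cell_step_after_mid[OF i _ _ c cp] mid_pos_eq[OF sil] True
      by blast
  qed
qed

definition red_cells :: "nat option list" where
  "red_cells = map (\<lambda>ox. if ox = Some c1 \<or> ox = Some c2 then None else ox) cs"
definition red_stages :: "dpath list" where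
  "red_stages = map (\<lambda>j. fold_path (bypass j)) [0..<Suc (length cs)]"

lemma length_red_cells: "length red_cells = length cs" by (simp add: red_cells_def)
lemma length_red_stages: "length red_stages = Suc (length cs)" by (simp add: red_stages_def)
lemma red_stages_nth: "j \<le> length cs \<Longrightarrow> red_stages ! j = fold_path (bypass j)"
  by (simp add: red_stages_def nth_map_upt del: upt_Suc)
lemma red_cells_nth: "i < length cs \<Longrightarrow>
  red_cells ! i = (if cs ! i = Some c1 \<or> cs ! i = Some c2 then None else cs ! i)"
  by (simp add: red_cells_def)

lemma red_cells_Some:
  assumes "i < length cs" "red_cells ! i = Some c"
  shows "cs ! i = Some c \<and> c \<noteq> c1 \<and> c \<noteq> c2 \<and> i \<noteq> i1 \<and> i \<noteq> i2"
  using assms red_cells_nth i1 i2 by (auto split: if_splits)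

lemma red_cells_None:
  assumes "i < length cs" "red_cells ! i = None"
  shows "cs ! i = None \<or> i = i1 \<or> i = i2"
  using assms red_cells_nth cell_index_unique[OF assms(1) i1(1) _ i1(2)] cell_index_unique[OF assms(1) i2(1) _ i2(2)]
  by (auto split: if_splits)

lemma bypass_0: "bypass 0 = Ps ! 0" using bypass_outside by simp
lemma bypass_last: "bypass (length cs) = Ps ! length cs" using bypass_outside i2 by simp

lemma bypass_Suc_i1: "bypass (Suc i1) = bypass i1"
proof -
  have wi1: "bypass i1 = Ps ! i1" using bypass_outside by simp
  have ps: "mid_pos (Suc i1) = p1"
    using mid_pos_eq[of "Suc i1" p1] c_bot_subpath[OF i1] c_bot_bound[OF i1] i1 by simp
  have w: "bypass (Suc i1) = replace_subpath p1 mmid (Ps ! Suc i1) (ctop E c1)"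
    using bypass_inside[of "Suc i1"] ps i1_less_i2 by simp
  let ?Es = "snd (Ps ! i1)"
  have nx: "snd (Ps ! Suc i1) = take p1 ?Es @ me @ drop (p1 + mlen) ?Es"
    using c_next[OF i1] by (simp add: replace_subpath_def)
  have tp: "te = take mlen (drop p1 ?Es)" using c_top[OF i1] by (metis snd_conv subpath_def)
  have b: "p1 + mlen \<le> length ?Es" using c_top_bounds[OF i1] by simp
  have "snd (bypass (Suc i1)) = take p1 (snd (Ps ! Suc i1)) @ te @ drop (p1 + mmid) (snd (Ps ! Suc i1))"
    using w by (simp add: replace_subpath_def)
  also have "\<dots> = ?Es" using replace_undo[OF b, of me mmid] nx tp by simp
  finally have e: "snd (bypass (Suc i1)) = snd (bypass i1)" using wi1 by simp
  have ne: "snd (bypass (Suc i1)) \<noteq> []" using e wi1 b lengths by auto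
  have g1: "simple_path E (bypass (Suc i1))" using simple_bypass i1 i1_less_i2 i2 by simp
  have g2: "simple_path E (bypass i1)" using simple_bypass i1 by simp
  show ?thesis using simple_path_eqI[OF g1 g2 e ne] .
qed

lemma fold_bypass_Suc_i2: "fold_path (bypass (Suc i2)) = fold_path (bypass i2)"
proof -
  have ws: "bypass (Suc i2) = Ps ! Suc i2" using bypass_outside by simp
  have ps: "mid_pos i2 = p2"
    using mid_pos_eq[of i2 p2] c_top[OF i2] c_top_bounds[OF i2] ctop_c2 i2 by simp
  have w: "bypass i2 = replace_subpath p2 mmid (Ps ! i2) (ctop E c1)"
    using bypass_inside[of i2] ps i1_less_i2 by simp
  have nx: "Ps ! Suc i2 = replace_subpath p2 mmid (Ps ! i2) (cbot E c2)"
    using c_next[OF i2] ctop_c2 by simp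
  show ?thesis using ws w nx map_dpath_replace_subpath fold_top fold_bot by metis
qed

lemma verts_upto_red: "verts_upto red_stages i = (\<Union>l\<in>{..i}. fold_vert ` set (fst (bypass l)))" if "i \<le> length cs"
  using that red_stages_nth unfolding verts_upto_def by (auto simp: map_dpath_def)
lemma edges_upto_red: "edges_upto red_stages i = (\<Union>l\<in>{..i}. fold_edge ` set (snd (bypass l)))" if "i \<le> length cs"
  using that red_stages_nth unfolding edges_upto_def by (auto simp: map_dpath_def)

lemma born_not_inner_bv:
  assumes i: "i < length cs" "cs ! i = Some c" "i \<noteq> i2" and y: "y \<in> set (inner (fst (cbot E c)))"
  shows "y \<notin> set (inner bv)"
proof
  assume yb: "y \<in> set (inner bv)"
  obtain p where cp: "cell_step R E c p (Ps ! i) (Ps ! Suc i)" using cell_stage i by blast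
  have "y \<in> set (fst (Ps ! Suc i))"
    using c_bot_in_next[OF i(1,2) cp] set_inner_subset[of "fst (cbot E c)"] y by blast
  moreover have "y \<in> set (fst (Ps ! Suc i2))"
    using c_bot_in_next[OF i2] set_inner_subset[of bv] yb by blast
  ultimately have both: "y \<in> set (fst (Ps ! Suc i))" "y \<in> set (fst (Ps ! Suc i2))" by auto
  consider (lt) "i < i2" | (gt) "i2 < i" using i(3) by linarith
  then show False
  proof cases
    case lt
    then have "Suc i \<le> i2" by simp
    then show False using fresh_vert[OF i2(1,2) yb, of "Suc i"] \<open>y \<in> set (fst (Ps ! Suc i))\<close> by simp
  next
    case gt
    then have "Suc i2 \<le> i" by simp
    then show False using fresh_vert[OF i(1,2) y, of "Suc i2"] \<open>y \<in> set (fst (Ps ! Suc i2))\<close> by simp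
  qed
qed

lemma born_not_be:
  assumes i: "i < length cs" "cs ! i = Some c" "i \<noteq> i2" and y: "y \<in> set (snd (cbot E c))"
  shows "y \<notin> set be"
proof
  assume yb: "y \<in> set be"
  obtain p where cp: "cell_step R E c p (Ps ! i) (Ps ! Suc i)" using cell_stage i by blast
  have "y \<in> set (snd (Ps ! Suc i))" using c_bot_in_next[OF i(1,2) cp] y by blast
  moreover have "y \<in> set (snd (Ps ! Suc i2))" using c_bot_in_next[OF i2] yb by blast
  ultimately have both: "y \<in> set (snd (Ps ! Suc i))" "y \<in> set (snd (Ps ! Suc i2))" by auto
  consider (lt) "i < i2" | (gt) "i2 < i" using i(3) by linarith
  then show False
  proof cases
    case lt
    then have "Suc i \<le> i2" by simp
    then show False using fresh_edge[OF i2(1,2) yb, of "Suc i"] \<open>y \<in> set (snd (Ps ! Suc i))\<close> by simp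
  next
    case gt
    then have "Suc i2 \<le> i" by simp
    then show False using fresh_edge[OF i(1,2) y, of "Suc i2"] \<open>y \<in> set (snd (Ps ! Suc i2))\<close> by simp
  qed
qed

lemma fresh_vert_red:
  assumes i: "i < length cs" "cs ! i = Some c" "i \<noteq> i2"
  shows "set (inner (fst (cbot E' c))) \<inter> verts_upto red_stages i = {}"
proof -
  have "fold_vert y \<notin> verts_upto red_stages i" if y: "y \<in> set (inner (fst (cbot E c)))" for y
  proof
    assume "fold_vert y \<in> verts_upto red_stages i"
    then obtain l z where l: "l \<le> i" "z \<in> set (fst (bypass l))" "fold_vert z = fold_vert y" using verts_upto_red i by auto
    have fy: "fold_vert y = y" using fold_vert_id born_not_inner_bv[OF i y] by simp
    show False
    proof (cases "z \<in> set (inner bv)")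
      case True
      then obtain r where r: "0 < r" "r < mlen" "z = bv ! r"
        using in_inner_iff_nth[OF lengths(5)] by blast
      have "z \<in> set (fst (Ps ! l))"
        using bypass_vert_cases[OF l(2)] tv_not_inner_bv True by blast
      then have "i2 < l" using inner_bv_stage True by blast
      have "y = tv ! r" using l(3) fy r fold_vert_bv by simp
      then have "y \<in> set (fst (Ps ! i1))" using tv_in_stage r lengths by auto
      moreover have "i1 \<le> i" using \<open>i2 < l\<close> l(1) i1_less_i2 by simp
      ultimately show False using fresh_vert[OF i(1,2) y] by blast
    next
      case False
      then have zy: "z = y" using l(3) fy fold_vert_id by simp
      then have "y \<in> set (fst (Ps ! l)) \<or> (y \<in> set tv \<and> i1 < l)"
        using bypass_vert_cases[OF l(2)] by blast
      then show False
      proof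
        assume "y \<in> set (fst (Ps ! l))" then show False
          using fresh_vert[OF i(1,2) y l(1)] by simp
      next
        assume "y \<in> set tv \<and> i1 < l"
        then have "y \<in> set (fst (Ps ! i1))" "i1 \<le> i" using tv_in_stage l(1) by auto
        then show False using fresh_vert[OF i(1,2) y] by blast
      qed
    qed
  qed
  moreover have "fst (cbot E' c) = map fold_vert (fst (cbot E c))"
    by (simp add: E'_cbot map_dpath_def)
  ultimately show ?thesis by (auto simp: inner_map)
qed

lemma fresh_edge_red:
  assumes i: "i < length cs" "cs ! i = Some c" "i \<noteq> i2"
  shows "set (snd (cbot E' c)) \<inter> edges_upto red_stages i = {}"
proof -
  have "fold_edge y \<notin> edges_upto red_stages i" if y: "y \<in> set (snd (cbot E c))" for y
  proof
    assume "fold_edge y \<in> edges_upto red_stages i"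
    then obtain l z where l: "l \<le> i" "z \<in> set (snd (bypass l))" "fold_edge z = fold_edge y" using edges_upto_red i by auto
    have fy: "fold_edge y = y" using fold_edge_id born_not_be[OF i y] by simp
    show False
    proof (cases "z \<in> set be")
      case True
      then obtain r where r: "r < mlen" "z = be ! r" using length_be by (metis in_set_conv_nth)
      have "z \<in> set (snd (Ps ! l))" using bypass_edge_cases[OF l(2)] te_not_be True by blast
      then have "i2 < l" using be_stage True by blast
      have "y = te ! r" using l(3) fy r fold_edge_be by simp
      then have "y \<in> set (snd (Ps ! i1))" using te_in_stage r by auto
      moreover have "i1 \<le> i" using \<open>i2 < l\<close> l(1) i1_less_i2 by simp
      ultimately show False using fresh_edge[OF i(1,2) y] by blast
    next
      case False
      then have zy: "z = y" using l(3) fy fold_edge_id by simp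
      then have "y \<in> set (snd (Ps ! l)) \<or> (y \<in> set te \<and> i1 < l)"
        using bypass_edge_cases[OF l(2)] by blast
      then show False
      proof
        assume "y \<in> set (snd (Ps ! l))" then show False
          using fresh_edge[OF i(1,2) y l(1)] by simp
      next
        assume "y \<in> set te \<and> i1 < l"
        then have "y \<in> set (snd (Ps ! i1))" "i1 \<le> i" using te_in_stage l(1) by auto
        then show False using fresh_edge[OF i(1,2) y] by blast
      qed
    qed
  qed
  moreover have "snd (cbot E' c) = map fold_edge (snd (cbot E c))"
    by (simp add: E'_cbot map_dpath_def)
  ultimately show ?thesis by auto
qed

lemma cell_step_bypass:
  assumes i: "i < length cs" and c: "cs ! i = Some c" and ne: "i \<noteq> i1" "i \<noteq> i2"
  shows "\<exists>p. cell_step R E c p (bypass i) (bypass (Suc i))"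
proof -
  obtain p where cp: "cell_step R E c p (Ps ! i) (Ps ! Suc i)" using cell_stage i c by blast
  obtain p' where p': "p' + tlen c \<le> length (snd (bypass i))" "ctop E c = subpath p' (tlen c) (bypass i)"
    "bypass (Suc i) = replace_subpath p' (tlen c) (bypass i) (cbot E c)"
      using bypass_cell_step[OF i c ne cp] by blast
  have lW: "length (fst (bypass i)) = Suc (length (snd (bypass i)))"
    using simple_bypass i by (simp add: simple_path_def)
  have kk: "0 < blen c" "length (fst (cbot E c)) = Suc (blen c)"
    using c_bot_length[OF i c cp] by auto
  then have ne: "fst (cbot E c) \<noteq> []" by auto
  have "hd (fst (cbot E c)) = fst (bypass i) ! p'"
    using c_bot_first[OF i c cp] c_top_first[OF i c cp] p'(2) subpath_nth(3)[OF lW p'(1), of 0] ne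
    by (simp add: hd_conv_nth)
  moreover have "last (fst (cbot E c)) = fst (bypass i) ! (p' + tlen c)"
    using c_bot_last[OF i c cp] c_top_last[OF i c cp] p'(2) subpath_nth(3)[OF lW p'(1), of "tlen c"] ne kk
    by (simp add: last_conv_nth)
  ultimately have "cell_step R E c p' (bypass i) (bypass (Suc i))"
    using p' kk c_top_bounds[OF i c cp] c_rel[OF i c cp] by (auto simp: cell_step_def)
  then show ?thesis by blast
qed

lemma cell_step_red:
  assumes i: "i < length cs" and c: "cs ! i = Some c" and ne: "i \<noteq> i1" "i \<noteq> i2"
  shows "\<exists>p. cell_step R E' c p (fold_path (bypass i)) (fold_path (bypass (Suc i)))"
proof -
  obtain p where step: "cell_step R E c p (bypass i) (bypass (Suc i))"
    using cell_step_bypass[OF assms] by blast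
  have "length (fst (bypass i)) = Suc (length (snd (bypass i)))"
    using simple_bypass i by (simp add: simple_path_def)
  then have "cell_step R E' c p (fold_path (bypass i)) (fold_path (bypass (Suc i)))"
    using cell_step_map_dpath[OF step _ E'_ctop E'_cbot] E'_elab elab_fold_edge by simp
  then show ?thesis by blast
qed

lemma Union_bypass_verts: "(\<Union>l\<in>{..length cs}. set (fst (bypass l))) = verts E - set (inner mv)"
proof
  show "(\<Union>l\<in>{..length cs}. set (fst (bypass l))) \<subseteq> verts E - set (inner mv)"
  proof
    fix z assume "z \<in> (\<Union>l\<in>{..length cs}. set (fst (bypass l)))"
    then obtain l where l: "l \<le> length cs" "z \<in> set (fst (bypass l))" by auto
    have "z \<notin> set (inner mv)" using bypass_no_inner_mv l by blast
    moreover have "z \<in> verts E" using bypass_vert_cases[OF l(2)] tv_in_stage i1 verts_iff l(1)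
      by (meson le_less_linear less_imp_le_nat not_less_eq_eq subsetD)
    ultimately show "z \<in> verts E - set (inner mv)" by simp
  qed
  show "verts E - set (inner mv) \<subseteq> (\<Union>l\<in>{..length cs}. set (fst (bypass l)))"
    using verts_iff stage_vert_in_bypass by fastforce
qed

lemma Union_bypass_edges: "(\<Union>l\<in>{..length cs}. set (snd (bypass l))) = edges E - set me"
proof
  show "(\<Union>l\<in>{..length cs}. set (snd (bypass l))) \<subseteq> edges E - set me"
  proof
    fix z assume "z \<in> (\<Union>l\<in>{..length cs}. set (snd (bypass l)))"
    then obtain l where l: "l \<le> length cs" "z \<in> set (snd (bypass l))" by auto
    have "z \<notin> set me" using bypass_no_me l by blast
    moreover have "z \<in> edges E" using bypass_edge_cases[OF l(2)] te_in_stage i1 edges_iff l(1)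
      by (meson le_less_linear less_imp_le_nat not_less_eq_eq subsetD)
    ultimately show "z \<in> edges E - set me" by simp
  qed
  show "edges E - set me \<subseteq> (\<Union>l\<in>{..length cs}. set (snd (bypass l)))"
    using edges_iff stage_edge_in_bypass by fastforce
qed

lemma fold_bypass_idle:
  assumes i: "i < length cs" "red_cells ! i = None"
  shows "fold_path (bypass (Suc i)) = fold_path (bypass i)"
proof -
  consider "cs ! i = None" | "i = i1" | "i = i2" using red_cells_None[OF i] by auto
  then show ?thesis
  proof cases
    case 1
    then have "i \<noteq> i1" "i \<noteq> i2" using i1 i2 by auto
    then have "(i1 < i \<and> i \<le> i2) = (i1 < Suc i \<and> Suc i \<le> i2)" by auto
    moreover have "Ps ! Suc i = Ps ! i" using idle_stage[OF i(1) 1] .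
    ultimately show ?thesis unfolding bypass_def mid_pos_def by simp
  next
    case 2 then show ?thesis using bypass_Suc_i1 by simp
  next
    case 3 then show ?thesis using fold_bypass_Suc_i2 by simp
  qed
qed

lemma stacking_remove_dipole: "stacking R E' red_cells red_stages"
  unfolding stacking_def
proof (intro conjI allI impI)
  show "length red_stages = Suc (length red_cells)" using length_red_stages length_red_cells by simp
  show "red_stages ! 0 = tpath E'" using red_stages_nth[of 0] bypass_0 stage_0 E'_tpath by simp
  show "red_stages ! length red_cells = bpath E'"
    using red_stages_nth[of "length cs"] bypass_last stage_last E'_bpath length_red_cells by simp
  fix j assume "j \<le> length red_cells"
  then show "simple_path E' (red_stages ! j)"
    using red_stages_nth simple_fold_bypass length_red_cells by simp
next
  show "cells E' = {c. Some c \<in> set red_cells}"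
  proof -
    have "Some c \<in> set red_cells \<longleftrightarrow> Some c \<in> set cs \<and> c \<noteq> c1 \<and> c \<noteq> c2" for c
      unfolding red_cells_def by (auto split: if_splits)
    then show ?thesis using E'_cells cells_iff by (auto simp: in_set_conv_nth)
  qed
next
  fix i j c assume "i < length red_cells" "j < length red_cells" "red_cells ! i = Some c" "red_cells ! j = Some c"
  then show "i = j" using red_cells_Some cell_index_unique length_red_cells by metis
next
  fix i assume i: "i < length red_cells" "red_cells ! i = None"
  then have i': "i < length cs" using length_red_cells by simp
  have "red_stages ! Suc i = fold_path (bypass (Suc i))" "red_stages ! i = fold_path (bypass i)" using red_stages_nth i' by auto
  moreover have "fold_path (bypass (Suc i)) = fold_path (bypass i)"
    using fold_bypass_idle[OF i' i(2)] .
  ultimately show "red_stages ! Suc i = red_stages ! i" by simp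
next
  fix i c assume i: "i < length red_cells" "red_cells ! i = Some c"
  then have i': "i < length cs" using length_red_cells by simp
  note cs = red_cells_Some[OF i' i(2)]
  have "red_stages ! Suc i = fold_path (bypass (Suc i))" "red_stages ! i = fold_path (bypass i)" using red_stages_nth i' by auto
  then show "(\<exists>p. cell_step R E' c p (red_stages ! i) (red_stages ! Suc i))"
    using cell_step_red[OF i'] cs by simp
  show "set (inner (fst (cbot E' c))) \<inter> verts_upto red_stages i = {}"
    using fresh_vert_red[OF i'] cs by simp
  show "set (snd (cbot E' c)) \<inter> edges_upto red_stages i = {}"
    using fresh_edge_red[OF i'] cs by simp
next
  have "verts_upto red_stages (length cs) = fold_vert ` (\<Union>l\<in>{..length cs}. set (fst (bypass l)))"
    using verts_upto_red[of "length cs"] by (simp add: image_UN)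
  then show "verts E' = verts_upto red_stages (length red_cells)"
    using Union_bypass_verts E'_verts length_red_cells by simp
  have "edges_upto red_stages (length cs) = fold_edge ` (\<Union>l\<in>{..length cs}. set (snd (bypass l)))"
    using edges_upto_red[of "length cs"] by (simp add: image_UN)
  then show "edges E' = edges_upto red_stages (length red_cells)"
    using Union_bypass_edges E'_edges length_red_cells by simp
qed

lemma walk_enter_mv:
  assumes "walk E (mv ! 0) b (me ! 0 # es)" "set es \<subseteq> edges E" "b \<notin> set (inner mv)"
  shows "\<exists>es'. me ! 0 # es = me @ es' \<and> walk E (mv ! mmid) b es'"
proof -
  have "me \<noteq> []" using lengths by auto
  moreover have "\<forall>e\<in>edges E. \<forall>r. 0 < r \<longrightarrow> r < mmid \<longrightarrow> esrc E e = mv ! r \<longrightarrow> e = me ! r"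
    using me_unique_out by blast
  moreover have "\<forall>r<mmid. esrc E (me ! r) = mv ! r \<and> etgt E (me ! r) = mv ! Suc r" using mid_edge_ends by blast
  ultimately show ?thesis using walk_enter_path[OF lengths(4) _ _ _ assms(3,1,2)] by blast
qed

lemma walk_from_inner_mv:
  assumes "0 < r" "r \<le> mmid" "walk E (mv ! r) b es" "set es \<subseteq> edges E" "b \<notin> set (inner mv)"
  shows "\<exists>es'. es = drop r me @ es' \<and> walk E (mv ! mmid) b es'"
proof -
  have "\<forall>e\<in>edges E. \<forall>r. 0 < r \<longrightarrow> r < mmid \<longrightarrow> esrc E e = mv ! r \<longrightarrow> e = me ! r"
    using me_unique_out by blast
  moreover have "\<forall>r<mmid. esrc E (me ! r) = mv ! r \<and> etgt E (me ! r) = mv ! Suc r" using mid_edge_ends by blast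
  ultimately show ?thesis using walk_from_inner[OF lengths(4) _ _ assms(5) assms(1-4)] by blast
qed

lemma fold_edge_not_me:
  assumes "e \<in> edges E" "e \<notin> set me"
  shows "fold_edge e \<in> edges E'" "esrc E' (fold_edge e) = fold_vert (esrc E e)"
    "etgt E' (fold_edge e) = fold_vert (etgt E e)" "elab E' (fold_edge e) = elab E e"
    "etgt E e \<notin> set (inner mv)"
proof -
  show "fold_edge e \<in> edges E'" using assms unfolding E'_edges by blast
  show "esrc E' (fold_edge e) = fold_vert (esrc E e)" "etgt E' (fold_edge e) = fold_vert (etgt E e)"
    using fold_edge_ends[OF assms(1)] by (simp_all add: E'_esrc E'_etgt)
  show "elab E' (fold_edge e) = elab E e" by (simp add: E'_elab elab_fold_edge)
  show "etgt E e \<notin> set (inner mv)"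
  proof
    assume "etgt E e \<in> set (inner mv)"
    then obtain r where "0 < r" "r < mmid" "etgt E e = mv ! r"
      using in_inner_iff_nth[OF lengths(4)] by blast
    then show False using me_unique_in assms by fastforce
  qed
qed

lemma walk_te_red: "walk E' (tv ! 0) (tv ! mlen) te"
proof -
  have "\<forall>k<mlen. esrc E' (te ! k) = tv ! k \<and> etgt E' (te ! k) = tv ! Suc k"
    using top_edge_ends fold_vert_tv lengths by (simp add: E'_esrc E'_etgt)
  then show ?thesis using walk_of_nth[of tv te E'] lengths by simp
qed

lemma te_edges_red: "set te \<subseteq> edges E'"
proof
  fix e assume e: "e \<in> set te"
  then have "e \<in> edges E - set me" using te_in_stage te_not_me edges_iff i1 by fastforce
  moreover have "fold_edge e = e" using fold_edge_te e by simp
  ultimately show "e \<in> edges E'" unfolding E'_edges by (metis imageI)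
qed

lemma fold_walk:
  assumes "walk E a b es" "set es \<subseteq> edges E" "a \<notin> set (inner mv)" "b \<notin> set (inner mv)"
  shows "\<exists>es'. walk E' (fold_vert a) (fold_vert b) es' \<and> set es' \<subseteq> edges E' \<and> pres_eq R (label E es) (label E' es')"
  using assms
proof (induction "length es" arbitrary: a es rule: less_induct)
  case less
  show ?case
  proof (cases es)
    case Nil then show ?thesis using less.prems by (intro exI[of _ "[]"]) (auto simp: label_def)
  next
    case (Cons e rest)
    have e: "e \<in> edges E" "esrc E e = a" "walk E (etgt E e) b rest" "set rest \<subseteq> edges E"
      using less.prems Cons by auto
    show ?thesis
    proof (cases "e \<in> set me")
      case False
      note fe = fold_edge_not_me[OF e(1) False]
      obtain rest' where r: "walk E' (fold_vert (etgt E e)) (fold_vert b) rest'" "set rest' \<subseteq> edges E'"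
        "pres_eq R (label E rest) (label E' rest')"
        using less.hyps[of rest "etgt E e"] less.prems Cons e fe(5) by auto
      have "walk E' (fold_vert a) (fold_vert b) (fold_edge e # rest')" using r(1) fe e(2) by simp
      moreover have "pres_eq R (label E es) (label E' (fold_edge e # rest'))"
        using r(3) Cons fe(4) pres_eq_Cons by (simp add: label_def)
      ultimately show ?thesis using fe(1) r(2) by (intro exI[of _ "fold_edge e # rest'"]) auto
    next
      case True
      then obtain r where r: "r < mmid" "e = me ! r" by (metis in_set_conv_nth)
      have a: "a = mv ! r" using e(2) mid_edge_ends r by simp
      then have "r = 0" using less.prems(3) nth_in_inner[of r mv] lengths r by (cases "r = 0") auto
      then obtain es'' where es'': "es = me @ es''" "walk E (mv ! mmid) b es''"
        using walk_enter_mv[of b rest] less.prems Cons r a by auto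
      have lt: "length es'' < length es" using es'' lengths by simp
      have "mv ! mmid \<notin> set (inner mv)"
        using tv_not_inner_mv dipole_ends tv_ends_mem by metis
      moreover have "set es'' \<subseteq> edges E" using less.prems(2) es'' by simp
      ultimately obtain es3 where e3: "walk E' (fold_vert (mv ! mmid)) (fold_vert b) es3" "set es3 \<subseteq> edges E'"
        "pres_eq R (label E es'') (label E' es3)"
        using less.hyps[OF lt, of "mv ! mmid"] es''(2) less.prems(4) by blast
      have "fold_vert a = tv ! 0" "fold_vert (mv ! mmid) = tv ! mlen"
        using a \<open>r = 0\<close> dipole_ends fold_vert_tv tv_ends_mem by simp_all
      then have w: "walk E' (fold_vert a) (fold_vert b) (te @ es3)"
        using walk_te_red e3(1) walk_append by fastforce
      have "pres_eq R (label E me) (label E te)"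
        using pres_eq_sym[OF sym_rel_pres_eq[OF c_rel[OF i1]]] .
      then have "pres_eq R (label E es) (label E' (te @ es3))"
        using es'' e3(3) pres_eq_append by (simp add: label_def E'_elab)
      then show ?thesis using w e3(2) te_edges_red by (intro exI[of _ "te @ es3"]) auto
    qed
  qed
qed

lemma top_vert_not_inner_mv: "L < length (fst (tpath E)) \<Longrightarrow>
  fst (tpath E) ! L \<notin> set (inner mv)"
  using inner_mv_stage[of _ 0] stage_0 by (metis bot_nat_0.extremum nth_mem not_less0)

lemma bot_vert_not_inner_mv: "L < length (fst (bpath E)) \<Longrightarrow>
  fst (bpath E) ! L \<notin> set (inner mv)"
proof
  assume a: "L < length (fst (bpath E))" "fst (bpath E) ! L \<in> set (inner mv)"
  then have "fst (bpath E) ! L \<in> set (fst (Ps ! length cs))" using stage_last by simp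
  then show False using inner_mv_stage[OF a(2)] i2 by fastforce
qed

lemma junction_walks_fold:
  assumes L: "L < length (fst (tpath E))" "L < length (fst (bpath E))" and P': "junction_agree R E' L"
    and a: "a \<in> verts E" "a \<notin> set (inner mv)"
    and w: "walk E a (fst (tpath E) ! L) es1" "set es1 \<subseteq> edges E"
      "walk E a (fst (bpath E) ! L) es2" "set es2 \<subseteq> edges E"
  shows "pres_eq R (label E es1) (label E es2)"
proof -
  let ?o1 = "fst (tpath E) ! L" and ?o2 = "fst (bpath E) ! L"
  have t': "fst (tpath E') ! L = fold_vert ?o1" and b': "fst (bpath E') ! L = fold_vert ?o2"
    using L by (simp_all add: E'_tpath E'_bpath map_dpath_def)
  obtain f1 where f1: "walk E' (fold_vert a) (fold_vert ?o1) f1" "set f1 \<subseteq> edges E'"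
    "pres_eq R (label E es1) (label E' f1)"
    using fold_walk[OF w(1,2) a(2)] top_vert_not_inner_mv L by blast
  obtain f2 where f2: "walk E' (fold_vert a) (fold_vert ?o2) f2" "set f2 \<subseteq> edges E'"
    "pres_eq R (label E es2) (label E' f2)"
    using fold_walk[OF w(3,4) a(2)] bot_vert_not_inner_mv L by blast
  have "fold_vert a \<in> verts E'" using a unfolding E'_verts by blast
  then have "pres_eq R (label E' f1) (label E' f2)"
    using P' f1 f2 t' b' unfolding junction_agree_def is_pos_path_walk by metis
  then show ?thesis using f1 f2 pres_eq_trans pres_eq_sym by metis
qed

lemma junction_agree_remove_dipole:
  assumes L: "L < length (fst (tpath E))" "L < length (fst (bpath E))" and P': "junction_agree R E' L"
  shows "junction_agree R E L"
  unfolding junction_agree_def is_pos_path_walk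
proof (intro allI impI)
  let ?o1 = "fst (tpath E) ! L" and ?o2 = "fst (bpath E) ! L"
  fix a es1 es2
  assume a1: "a \<in> verts E \<and> set es1 \<subseteq> edges E \<and> walk E a ?o1 es1"
    and a2: "a \<in> verts E \<and> set es2 \<subseteq> edges E \<and> walk E a ?o2 es2"
  show "pres_eq R (label E es1) (label E es2)"
  proof (cases "a \<in> set (inner mv)")
    case False then show ?thesis using junction_walks_fold[OF L P'] a1 a2 by blast
  next
    case True
    then obtain r where r: "0 < r" "r < mmid" "a = mv ! r"
      using in_inner_iff_nth[OF lengths(4)] by blast
    have n: "?o1 \<notin> set (inner mv)" "?o2 \<notin> set (inner mv)"
      using top_vert_not_inner_mv bot_vert_not_inner_mv L by simp_all
    obtain g1 where g1: "es1 = drop r me @ g1" "walk E (mv ! mmid) ?o1 g1"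
      using walk_from_inner_mv[of r ?o1 es1] r a1 n by auto
    obtain g2 where g2: "es2 = drop r me @ g2" "walk E (mv ! mmid) ?o2 g2"
      using walk_from_inner_mv[of r ?o2 es2] r a2 n by auto
    have "mv ! mmid \<in> verts E"
      using simple_mid lengths unfolding simple_path_def by (metis lessI nth_mem subsetD)
    moreover have "mv ! mmid \<notin> set (inner mv)"
      using tv_not_inner_mv dipole_ends tv_ends_mem by metis
    ultimately have "pres_eq R (label E g1) (label E g2)"
      using junction_walks_fold[OF L P' _ _ g1(2) _ g2(2)] a1 a2 g1 g2 by auto
    then show ?thesis using g1 g2 pres_eq_append[OF pres_eq_refl] by (simp add: label_def)
  qed
qed

end

section \<open>Built diagrams admit stackings\<close>

(* apply_step k names its new vertices and edges prod_encode (Suc k, j), so bounding the first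
   component of all names by k makes those of step k fresh. *)
definition build_inv :: "('a list \<times> 'a list) set \<Rightarrow> nat \<Rightarrow> 'a dgm \<Rightarrow> 'a list \<Rightarrow> dpath list \<Rightarrow> bool" where
  "build_inv R k D w Ps \<longleftrightarrow> stacking R D (map Some [0..<k]) Ps \<and> map (elab D) (snd (bpath D)) = w \<and>
     (\<forall>x\<in>verts D. fst (prod_decode x) \<le> k) \<and> (\<forall>e\<in>edges D. fst (prod_decode e) \<le> k)"

lemma build_inv_init: "build_inv R 0 (init_dgm w) w [tpath (init_dgm w)]"
proof -
  let ?vs = "map (\<lambda>j. prod_encode (0, j)) [0..<Suc (length w)]"
  let ?es = "map (\<lambda>j. prod_encode (0, j)) [0..<length w]"
  have tp: "tpath (init_dgm w) = (?vs, ?es)" "bpath (init_dgm w) = (?vs, ?es)"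
    "verts (init_dgm w) = set ?vs" "edges (init_dgm w) = set ?es" "cells (init_dgm w) = {}"
    by (simp_all add: init_dgm_def Let_def del: upt_Suc)
  have g: "simple_path (init_dgm w) (?vs, ?es)"
    unfolding simple_path_def
  proof (intro conjI allI impI)
    show "distinct (fst (?vs, ?es))" by (simp add: distinct_map inj_on_def del: upt_Suc)
    fix k assume "k < length (snd (?vs, ?es))"
    then show "esrc (init_dgm w) (snd (?vs, ?es) ! k) = fst (?vs, ?es) ! k"
      "etgt (init_dgm w) (snd (?vs, ?es) ! k) = fst (?vs, ?es) ! Suc k"
      by (simp_all add: init_dgm_def Let_def nth_append del: upt_Suc)
  qed (simp_all add: tp del: upt_Suc)
  have "stacking R (init_dgm w) (map Some [0..<0]) [tpath (init_dgm w)]"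
    unfolding stacking_def using g tp by (simp add: verts_upto_def edges_upto_def del: upt_Suc)
  moreover have "map (elab (init_dgm w)) (snd (bpath (init_dgm w))) = w"
    by (simp add: init_dgm_def Let_def comp_def map_nth del: upt_Suc)
  ultimately show ?thesis unfolding build_inv_def using tp by (auto simp del: upt_Suc)
qed

locale build_step = stacked R D "map Some [0..<k]" Ps
  for R :: "('a list \<times> 'a list) set" and D :: "'a dgm" and k Ps +
  fixes w :: "'a list" and p :: nat and x y :: "'a list"
  assumes word: "map (elab D) (snd (bpath D)) = w"
    and names: "\<forall>v\<in>verts D. fst (prod_decode v) \<le> k" "\<forall>e\<in>edges D. fst (prod_decode e) \<le> k"
    and rel: "(x, y) \<in> R \<or> (y, x) \<in> R" and xy: "x \<noteq> []" "y \<noteq> []"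
    and pl: "p + length x \<le> length w" and tx: "take (length x) (drop p w) = x"
begin

abbreviation "D' \<equiv> apply_step k (p, x, y) D"
abbreviation "bv \<equiv> fst (bpath D)"
abbreviation "be \<equiv> snd (bpath D)"
abbreviation "mid \<equiv> map (\<lambda>j. prod_encode (Suc k, j)) [1..<length y]"
abbreviation "nv \<equiv> [bv ! p] @ mid @ [bv ! (p + length x)]"
abbreviation "ne \<equiv> map (\<lambda>j. prod_encode (Suc k, j)) [0..<length y]"
abbreviation "is_new e \<equiv> fst (prod_decode e) = Suc k \<and> snd (prod_decode e) < length y"

lemma D'_simps:
  "verts D' = verts D \<union> set nv" "edges D' = edges D \<union> set ne"
  "esrc D' e = (if is_new e then nv ! snd (prod_decode e) else esrc D e)"
  "etgt D' e = (if is_new e then nv ! Suc (snd (prod_decode e)) else etgt D e)"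
  "elab D' e = (if is_new e then y ! snd (prod_decode e) else elab D e)"
  "cells D' = insert k (cells D)"
  "ctop D' = (ctop D)(k := subpath p (length x) (bpath D))" "cbot D' = (cbot D)(k := (nv, ne))"
  "tpath D' = tpath D" "bpath D' = replace_subpath p (length x) (bpath D) (nv, ne)"
  by (simp_all add: apply_step_def Let_def subpath_def replace_subpath_def)

lemma simple_bpath: "simple_path D (bpath D)"
  using simple_stage[of k] stage_last by simp

lemma bpath_facts: "length be = length w" "length bv = Suc (length w)" "distinct bv" "set bv \<subseteq> verts D"
  using simple_bpath word[symmetric] by (auto simp: simple_path_def)

lemma old_edge:
  assumes "e \<in> edges D"
  shows "esrc D' e = esrc D e" "etgt D' e = etgt D e" "elab D' e = elab D e"
  using names(2) assms by (fastforce simp: D'_simps)+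

lemma old_vert_not_mid: "v \<in> verts D \<Longrightarrow> v \<notin> set mid"
  using names(1) by fastforce

lemma label_old: "set es \<subseteq> edges D \<Longrightarrow> label D' es = label D es"
  using old_edge by (auto simp: label_def)

lemma simple_path_D': "simple_path D P \<Longrightarrow> simple_path D' P"
  using old_edge unfolding simple_path_def D'_simps by (auto simp: subset_iff)

lemma simple_new_bot: "simple_path D' (nv, ne)"
  unfolding simple_path_def
proof (intro conjI allI impI)
  have pv: "p < length bv" "p + length x < length bv" using pl bpath_facts by auto
  then have "bv ! p \<noteq> bv ! (p + length x)"
    using nth_eq_iff_index_eq[OF bpath_facts(3) pv] xy by simp
  moreover have "bv ! p \<notin> set mid" "bv ! (p + length x) \<notin> set mid"
    using old_vert_not_mid bpath_facts(4) pv nth_mem by blast+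
  moreover have "distinct mid" by (simp add: distinct_map inj_on_def)
  ultimately show "distinct (fst (nv, ne))" by simp
  fix j assume j: "j < length (snd (nv, ne))"
  then show "esrc D' (snd (nv, ne) ! j) = fst (nv, ne) ! j"
    "etgt D' (snd (nv, ne) ! j) = fst (nv, ne) ! Suc j"
    by (simp_all add: D'_simps)
qed (use xy in \<open>auto simp: D'_simps\<close>)

lemma simple_bpath_D': "simple_path D' (bpath D')"
proof -
  have "fst (nv, ne) ! length (snd (nv, ne)) = bv ! (p + length x)"
    using xy by (simp add: nth_append)
  moreover have "set (inner (fst (nv, ne))) \<inter> set bv = {}"
    using old_vert_not_mid bpath_facts(4) by (auto simp: inner_append_singletons)
  moreover have "p + length x \<le> length be" using pl bpath_facts by simp
  ultimately show ?thesis
    using simple_path_replace_subpath[OF simple_path_D'[OF simple_bpath] _ simple_new_bot] xy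
      by (simp add: D'_simps)
qed

lemma label_new_top: "label D' (snd (subpath p (length x) (bpath D))) = x"
proof -
  have "set (take (length x) (drop p be)) \<subseteq> edges D" using simple_bpath
    by (auto simp: simple_path_def dest: in_set_takeD in_set_dropD)
  then have "label D' (take (length x) (drop p be)) = take (length x) (drop p w)"
    using label_old by (simp add: word[symmetric] label_def take_map drop_map)
  then show ?thesis using tx by (simp add: subpath_def)
qed

lemma label_new_bot: "label D' ne = y"
proof -
  have "map (\<lambda>j. elab D' (prod_encode (Suc k, j))) [0..<length y] = map (\<lambda>j. y ! j) [0..<length y]"
    by (rule map_cong) (auto simp: D'_simps)
  then show ?thesis by (simp add: label_def comp_def map_nth)
qed

lemma new_cell_step: "cell_step R D' k p (bpath D) (bpath D')"
proof -
  have lt: "length (snd (subpath p (length x) (bpath D))) = length x"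
    using pl bpath_facts by (simp add: subpath_def)
  show ?thesis
    unfolding cell_step_def D'_simps(7,8) fun_upd_same lt
    using pl bpath_facts xy label_new_top label_new_bot rel
    by (auto simp: D'_simps(10) sym_rel_def nth_append)
qed

lemma old_cell_step:
  assumes "i < k" "cell_step R D i q (Ps ! i) (Ps ! Suc i)"
  shows "cell_step R D' i q (Ps ! i) (Ps ! Suc i)"
proof -
  have "set (snd (ctop D i)) \<subseteq> edges D" "set (snd (cbot D i)) \<subseteq> edges D"
    using c_simple_top[of i i q] c_simple_bot[of i i q] assms by (auto simp: simple_path_def)
  then show ?thesis using assms label_old by (simp add: cell_step_def D'_simps)
qed

abbreviation "Ps' \<equiv> Ps @ [bpath D']"

lemma stages_D':
  "length Ps' = Suc (Suc k)" "j \<le> k \<Longrightarrow> Ps' ! j = Ps ! j" "Ps' ! Suc k = bpath D'"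
  "j \<le> k \<Longrightarrow> verts_upto Ps' j = verts_upto Ps j" "j \<le> k \<Longrightarrow>
    edges_upto Ps' j = edges_upto Ps j"
  using length_stages by (auto simp: nth_append verts_upto_def edges_upto_def)

lemma verts_edges_D':
  "verts D' = verts_upto Ps' (Suc k)" "edges D' = edges_upto Ps' (Suc k)"
proof -
  have "set (fst (bpath D')) \<subseteq> verts D \<union> set nv" "set nv \<subseteq> set (fst (bpath D'))"
    using bpath_facts(4) by (auto simp: D'_simps replace_subpath_def dest: in_set_takeD in_set_dropD)
  then show "verts D' = verts_upto Ps' (Suc k)"
    using verts_upto_Suc[of Ps' k] stages_D' verts_eq by (auto simp: D'_simps)
  have "set be \<subseteq> edges D" using simple_bpath by (simp add: simple_path_def)
  then have "set (snd (bpath D')) \<subseteq> edges D \<union> set ne" "set ne \<subseteq> set (snd (bpath D'))"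
    by (auto simp: D'_simps replace_subpath_def dest: in_set_takeD in_set_dropD)
  then show "edges D' = edges_upto Ps' (Suc k)"
    using edges_upto_Suc[of Ps' k] stages_D' edges_eq by (auto simp: D'_simps)
qed

lemma stacking_D': "stacking R D' (map Some [0..<Suc k]) Ps'"
  unfolding stacking_def
proof (intro conjI allI impI)
  show "Ps' ! 0 = tpath D'" using stages_D'(2)[of 0] stage_0 by (simp add: D'_simps)
  fix j assume "j \<le> length (map Some [0..<Suc k])"
  then show "simple_path D' (Ps' ! j)"
    using stages_D' simple_bpath_D' simple_path_D' simple_stage by (cases "j = Suc k") auto
next
  show "cells D' = {c. Some c \<in> set (map Some [0..<Suc k])}"
    using cells_iff by (auto simp: D'_simps less_Suc_eq)
next
  fix i c assume "i < length (map Some [0..<Suc k])" "map Some [0..<Suc k] ! i = Some c"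
  then have ci: "c = i" "i \<le> k" by (auto simp del: upt_Suc)
  show "\<exists>q. cell_step R D' c q (Ps' ! i) (Ps' ! Suc i)"
  proof (cases "i = k")
    case True
    then show ?thesis using ci new_cell_step stages_D' stage_last by auto
  next
    case False
    then have "i < k" using ci by simp
    then obtain q where "cell_step R D i q (Ps ! i) (Ps ! Suc i)" using cell_stage[of i i] by auto
    then show ?thesis using old_cell_step \<open>i < k\<close> ci stages_D' by auto
  qed
  show "set (inner (fst (cbot D' c))) \<inter> verts_upto Ps' i = {}"
    using ci fresh_verts_upto[of i i] stages_D'(4)[of i] verts_eq old_vert_not_mid
    by (cases "i = k") (auto simp: D'_simps inner_append_singletons)
  show "set (snd (cbot D' c)) \<inter> edges_upto Ps' i = {}"
    using ci fresh_edges_upto[of i i] stages_D'(5)[of i] edges_eq names(2)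
    by (cases "i = k") (fastforce simp: D'_simps)+
qed (use stages_D' verts_edges_D' in \<open>simp_all del: upt_Suc\<close>)

lemma word_D': "map (elab D') (snd (bpath D')) = take p w @ y @ drop (p + length x) w"
proof -
  have "set be \<subseteq> edges D" using simple_bpath by (simp add: simple_path_def)
  then have "map (elab D') be = w" using word old_edge by (auto intro!: map_cong)
  then show ?thesis using label_new_bot
    by (simp add: D'_simps replace_subpath_def label_def take_map[symmetric] drop_map[symmetric])
qed

lemma names_D': "\<forall>v\<in>verts D'. fst (prod_decode v) \<le> Suc k" "\<forall>e\<in>edges D'. fst (prod_decode e) \<le> Suc k"
proof -
  have "bv ! p \<in> verts D" "bv ! (p + length x) \<in> verts D"
    using bpath_facts pl nth_mem by auto
  then show "\<forall>v\<in>verts D'. fst (prod_decode v) \<le> Suc k" "\<forall>e\<in>edges D'. fst (prod_decode e) \<le> Suc k"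
    using names by (auto simp: D'_simps)
qed

end

lemma build_inv_step:
  assumes inv: "build_inv R k D w Ps" and r: "(x, y) \<in> R \<or> (y, x) \<in> R" and xy: "x \<noteq> []" "y \<noteq> []"
    and pl: "p + length x \<le> length w" and tx: "take (length x) (drop p w) = x"
  shows "build_inv R (Suc k) (apply_step k (p, x, y) D) (take p w @ y @ drop (p + length x) w)
          (Ps @ [bpath (apply_step k (p, x, y) D)])"
proof -
  interpret build_step R D k Ps w p x y
    using assms by unfold_locales (auto simp: build_inv_def)
  show ?thesis unfolding build_inv_def using stacking_D' word_D' names_D' by simp
qed

lemma build_inv_build_aux:
  assumes nonempty_rel: "\<forall>(x, y) \<in> R. x \<noteq> [] \<and> y \<noteq> []"
  shows "build_inv R k D w Ps \<Longrightarrow> valid_steps R w ss \<Longrightarrow>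
     \<exists>Ps'. build_inv R (k + length ss) (build_aux k D ss) (final_word w ss) Ps'"
proof (induction ss arbitrary: k D w Ps)
  case Nil then show ?case by auto
next
  case (Cons s ss)
  obtain p a b where s: "s = (p, a, b)" by (cases s) auto
  have v: "(a, b) \<in> R \<or> (b, a) \<in> R" "p + length a \<le> length w" "take (length a) (drop p w) = a"
    "valid_steps R (take p w @ b @ drop (p + length a) w) ss"
    using Cons.prems s by auto
  have ne: "a \<noteq> []" "b \<noteq> []" using v(1) nonempty_rel by auto
  have "build_inv R (Suc k) (apply_step k (p, a, b) D) (take p w @ b @ drop (p + length a) w)
          (Ps @ [bpath (apply_step k (p, a, b) D)])"
    using build_inv_step[OF Cons.prems(1) v(1) ne v(2,3)] .
  then obtain Ps' where "build_inv R (Suc k + length ss) (build_aux (Suc k) (apply_step k (p, a, b) D) ss)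
        (final_word (take p w @ b @ drop (p + length a) w) ss) Ps'"
    using Cons.IH v(4) by blast
  then show ?case using s by auto
qed

lemma stacking_build:
  assumes nonempty_rel: "\<forall>(x, y) \<in> R. x \<noteq> [] \<and> y \<noteq> []" and v: "valid_steps R w ss"
  shows "\<exists>cs Ps. stacking R (build w ss) cs Ps \<and> map (elab (build w ss)) (snd (bpath (build w ss))) = final_word w ss"
proof -
  obtain Ps where "build_inv R (0 + length ss) (build_aux 0 (init_dgm w) ss) (final_word w ss) Ps"
    using build_inv_build_aux[OF nonempty_rel build_inv_init v] by blast
  then show ?thesis unfolding build_inv_def build_def by blast
qed

section \<open>The junction of a sum\<close>

lemma bpath_apply_step:
  assumes y: "y \<noteq> []" and pl: "p + length x < length (fst (bpath D))"
  shows "length (fst (bpath (apply_step k (p, x, y) D))) = length (fst (bpath D)) - length x + length y"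
    "L \<le> p \<Longrightarrow> fst (bpath (apply_step k (p, x, y) D)) ! L = fst (bpath D) ! L"
    "p + length x \<le> L' \<Longrightarrow> L' < length (fst (bpath D)) \<Longrightarrow>
       fst (bpath (apply_step k (p, x, y) D)) ! (L' - length x + length y) = fst (bpath D) ! L'"
proof -
  let ?V = "fst (bpath D)"
  define nv where "nv = [?V ! p] @ map (\<lambda>j. prod_encode (Suc k, j)) [1..<length y] @ [?V ! (p + length x)]"
  have V': "fst (bpath (apply_step k (p, x, y) D)) = take p ?V @ nv @ drop (Suc (p + length x)) ?V"
    by (simp add: apply_step_def Let_def nv_def)
  have lnv: "length nv = Suc (length y)" using y by (simp add: nv_def)
  have nv0: "nv ! 0 = ?V ! p" by (simp add: nv_def)
  have nvy: "nv ! length y = ?V ! (p + length x)" using y by (simp add: nv_def nth_append)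
  have ltp: "length (take p ?V) = p" using pl by simp
  show "length (fst (bpath (apply_step k (p, x, y) D))) = length ?V - length x + length y"
    using V' lnv pl by simp
  show "L \<le> p \<Longrightarrow> fst (bpath (apply_step k (p, x, y) D)) ! L = ?V ! L"
    using V' ltp nv0 lnv by (cases "L < p") (auto simp: nth_append)
  assume L: "p + length x \<le> L'" "L' < length ?V"
  let ?i = "L' - length x + length y"
  have ip: "\<not> ?i < p" using L by simp
  show "fst (bpath (apply_step k (p, x, y) D)) ! ?i = ?V ! L'"
  proof (cases "L' = p + length x")
    case True
    then have "?i - p = length y" by simp
    then show ?thesis using V' ltp ip lnv True nvy by (simp add: nth_append)
  next
    case False
    then have gt: "L' > p + length x" using L by simp
    then have "\<not> (?i - p < length nv)" using lnv by simp
    then have "fst (bpath (apply_step k (p, x, y) D)) ! ?i = drop (Suc (p + length x)) ?V ! (?i - p - length nv)"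
      using V' ltp ip by (simp add: nth_append)
    also have "\<dots> = ?V ! (Suc (p + length x) + (?i - p - length nv))"
      using L gt lnv by (simp add: nth_drop)
    also have "Suc (p + length x) + (?i - p - length nv) = L'" using gt lnv by simp
    finally show ?thesis .
  qed
qed

lemma bpath_build_aux_prefix:
  assumes nonempty_rel: "\<forall>(x, y) \<in> R. x \<noteq> [] \<and> y \<noteq> []"
  shows "valid_steps R w1 ss \<Longrightarrow> length (fst (bpath D)) = length w1 + m + 1 \<Longrightarrow>
    fst (bpath (build_aux k D ss)) ! length (final_word w1 ss) = fst (bpath D) ! length w1 \<and>
    length (fst (bpath (build_aux k D ss))) = length (final_word w1 ss) + m + 1"
proof (induction ss arbitrary: k D w1)
  case Nil then show ?case by simp
next
  case (Cons s ss)
  obtain p a b where s: "s = (p, a, b)" by (cases s) auto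
  have v: "(a, b) \<in> R \<or> (b, a) \<in> R" "p + length a \<le> length w1"
    "valid_steps R (take p w1 @ b @ drop (p + length a) w1) ss" using Cons.prems s by auto
  have ne: "b \<noteq> []" using v(1) nonempty_rel by auto
  let ?D' = "apply_step k (p, a, b) D" and ?w' = "take p w1 @ b @ drop (p + length a) w1"
  have pl: "p + length a < length (fst (bpath D))" using v(2) Cons.prems(2) by simp
  have lw': "length ?w' = length w1 - length a + length b" using v(2) by simp
  have l': "length (fst (bpath ?D')) = length ?w' + m + 1"
    using bpath_apply_step(1)[OF ne pl] Cons.prems(2) lw' v(2) by simp
  have j': "fst (bpath ?D') ! length ?w' = fst (bpath D) ! length w1"
    using bpath_apply_step(3)[OF ne pl, of "length w1"] lw' v(2) Cons.prems(2) by simp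
  show ?case using Cons.IH[OF v(3) l', of "Suc k"] j' s by simp
qed

lemma bpath_build_aux_shifted:
  assumes nonempty_rel: "\<forall>(x, y) \<in> R. x \<noteq> [] \<and> y \<noteq> []"
  shows "valid_steps R w2 ss \<Longrightarrow> length (fst (bpath D)) = L + length w2 + 1 \<Longrightarrow>
    fst (bpath (build_aux k D (map (\<lambda>(p, a, b). (p + L, a, b)) ss))) ! L = fst (bpath D) ! L \<and>
    length (fst (bpath (build_aux k D (map (\<lambda>(p, a, b). (p + L, a, b)) ss)))) = L + length (final_word w2 ss) + 1"
proof (induction ss arbitrary: k D w2)
  case Nil then show ?case by simp
next
  case (Cons s ss)
  obtain p a b where s: "s = (p, a, b)" by (cases s) auto
  have v: "(a, b) \<in> R \<or> (b, a) \<in> R" "p + length a \<le> length w2"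
    "valid_steps R (take p w2 @ b @ drop (p + length a) w2) ss" using Cons.prems s by auto
  have ne: "b \<noteq> []" using v(1) nonempty_rel by auto
  let ?D' = "apply_step k (p + L, a, b) D" and ?w' = "take p w2 @ b @ drop (p + length a) w2"
  have pl: "p + L + length a < length (fst (bpath D))" using v(2) Cons.prems(2) by simp
  have lw': "length ?w' = length w2 - length a + length b" using v(2) by simp
  have l': "length (fst (bpath ?D')) = L + length ?w' + 1"
    using bpath_apply_step(1)[OF ne pl] Cons.prems(2) lw' v(2) by simp
  have j': "fst (bpath ?D') ! L = fst (bpath D) ! L"
    using bpath_apply_step(2)[OF ne pl, of L] by simp
  show ?case using Cons.IH[OF v(3) l', of "Suc k"] j' s by simp
qed

lemma build_aux_append: "build_aux k D (xs @ ys) = build_aux (k + length xs) (build_aux k D xs) ys"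
  by (induction xs arbitrary: k D) auto

lemma tpath_build_aux: "tpath (build_aux k D ss) = tpath D"
  by (induction ss arbitrary: k D) (auto simp: apply_step_def Let_def split: prod.splits)

lemma sum_junction:
  assumes nonempty_rel: "\<forall>(x, y) \<in> R. x \<noteq> [] \<and> y \<noteq> []"
    and d1: "is_diagram R u ss1 u" and d2: "is_diagram R v ss2 v"
  shows "fst (tpath (build (u @ v) (sum_steps u ss1 ss2))) ! length u =
         fst (bpath (build (u @ v) (sum_steps u ss1 ss2))) ! length u \<and>
         length u < length (fst (tpath (build (u @ v) (sum_steps u ss1 ss2)))) \<and>
         length u < length (fst (bpath (build (u @ v) (sum_steps u ss1 ss2))))"
proof -
  have v1: "valid_steps R u ss1" "final_word u ss1 = u" using d1 by (auto simp: is_diagram_def)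
  have v2: "valid_steps R v ss2" "final_word v ss2 = v" using d2 by (auto simp: is_diagram_def)
  let ?I = "init_dgm (u @ v)"
  let ?D1 = "build_aux 0 ?I ss1"
  have lI: "length (fst (bpath ?I)) = length u + length v + 1"
    by (simp add: init_dgm_def Let_def del: upt_Suc)
  have tI: "length (fst (tpath ?I)) = length u + length v + 1"
    by (simp add: init_dgm_def Let_def del: upt_Suc)
  have bt: "fst (bpath ?I) = fst (tpath ?I)" by (simp add: init_dgm_def Let_def)
  obtain h1: "fst (bpath ?D1) ! length u = fst (bpath ?I) ! length u"
    and h2: "length (fst (bpath ?D1)) = length u + length v + 1"
    using bpath_build_aux_prefix[OF nonempty_rel v1(1), of ?I "length v" 0] lI v1(2) by auto
  have ss: "sum_steps u ss1 ss2 = ss1 @ map (\<lambda>(p, a, b). (p + length u, a, b)) ss2"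
    using v1(2) by (simp add: sum_steps_def)
  have S: "build (u @ v) (sum_steps u ss1 ss2) = build_aux (length ss1) ?D1 (map (\<lambda>(p, a, b). (p + length u, a, b)) ss2)"
    unfolding build_def ss build_aux_append by simp
  obtain h3: "fst (bpath (build (u @ v) (sum_steps u ss1 ss2))) ! length u = fst (bpath ?D1) ! length u"
    and h4: "length (fst (bpath (build (u @ v) (sum_steps u ss1 ss2)))) = length u + length v + 1"
    using bpath_build_aux_shifted[OF nonempty_rel v2(1), of ?D1 "length u" "length ss1"] h2 v2(2) S by auto
  have t: "tpath (build (u @ v) (sum_steps u ss1 ss2)) = tpath ?I"
    by (simp add: build_def tpath_build_aux)
  show ?thesis using h1 h3 h4 t bt tI by simp
qed

section \<open>Dipole reductions and isomorphisms\<close>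

lemma remove_dipole_boundary:
  assumes "dipole_red E E'"
  shows "\<exists>f g. tpath E' = map_dpath f g (tpath E) \<and> bpath E' = map_dpath f g (bpath E)"
proof -
  obtain c1 c2 where "E' = remove_dipole E c1 c2" using assms unfolding dipole_red_def by blast
  then show ?thesis unfolding remove_dipole_def Let_def by (simp only: dgm.select_convs) blast
qed

lemma dipole_reductions_boundary:
  assumes "dipole_red\<^sup>*\<^sup>* E E1"
  shows "length (fst (tpath E1)) = length (fst (tpath E))" "length (fst (bpath E1)) = length (fst (bpath E))"
    "L < length (fst (tpath E)) \<Longrightarrow> L < length (fst (bpath E)) \<Longrightarrow>
      fst (tpath E) ! L = fst (bpath E) ! L \<Longrightarrow>
     fst (tpath E1) ! L = fst (bpath E1) ! L"
  using assms
proof (induction rule: converse_rtranclp_induct)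
  case (step E E')
  obtain f g where "tpath E' = map_dpath f g (tpath E)" "bpath E' = map_dpath f g (bpath E)"
    using remove_dipole_boundary[OF step.hyps(1)] by blast
  then show "length (fst (tpath E1)) = length (fst (tpath E))" "length (fst (bpath E1)) = length (fst (bpath E))"
    "L < length (fst (tpath E)) \<Longrightarrow> L < length (fst (bpath E)) \<Longrightarrow>
      fst (tpath E) ! L = fst (bpath E) ! L \<Longrightarrow>
     fst (tpath E1) ! L = fst (bpath E1) ! L"
    using step.IH by (auto simp: map_dpath_def)
qed simp_all

lemma stacked_dipoleI:
  assumes st: "stacking R E cs Ps" and dp: "is_dipole E c1 c2"
  obtains i1 i2 p1 p2 where "stacked_dipole R E cs Ps c1 c2 i1 i2 p1 p2"
proof -
  interpret stacked R E cs Ps using st by unfold_locales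
  have "c1 \<in> cells E" "c2 \<in> cells E" using dp by (auto simp: is_dipole_def)
  then obtain i1 i2 where i: "i1 < length cs" "cs ! i1 = Some c1" "i2 < length cs" "cs ! i2 = Some c2"
    using cells_iff by blast
  obtain p1 p2 where "cell_step R E c1 p1 (Ps ! i1) (Ps ! Suc i1)" "cell_step R E c2 p2 (Ps ! i2) (Ps ! Suc i2)"
    using cell_stage i by meson
  then show ?thesis using that st i dp
    by (simp add: stacked_dipole_def stacked_dipole_axioms_def stacked_def)
qed

lemma dipole_reductions_stacking:
  "dipole_red\<^sup>*\<^sup>* E E1 \<Longrightarrow> stacking R E cs Ps \<Longrightarrow>
    \<exists>cs1 Ps1. stacking R E1 cs1 Ps1"
proof (induction arbitrary: cs Ps rule: converse_rtranclp_induct)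
  case (step E E')
  obtain c1 c2 where d: "is_dipole E c1 c2" "E' = remove_dipole E c1 c2"
    using step.hyps(1) by (auto simp: dipole_red_def)
  obtain i1 i2 p1 p2 where "stacked_dipole R E cs Ps c1 c2 i1 i2 p1 p2"
    using stacked_dipoleI[OF step.prems d(1)] .
  then show ?case using stacked_dipole.stacking_remove_dipole d(2) step.IH by blast
qed blast

lemma dipole_reductions_junction_agree:
  "dipole_red\<^sup>*\<^sup>* E E1 \<Longrightarrow> stacking R E cs Ps \<Longrightarrow>
    L < length (fst (tpath E)) \<Longrightarrow>
    L < length (fst (bpath E)) \<Longrightarrow> junction_agree R E1 L \<Longrightarrow> junction_agree R E L"
proof (induction arbitrary: cs Ps rule: converse_rtranclp_induct)
  case (step E E')
  obtain c1 c2 where d: "is_dipole E c1 c2" "E' = remove_dipole E c1 c2"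
    using step.hyps(1) by (auto simp: dipole_red_def)
  obtain i1 i2 p1 p2 where dip: "stacked_dipole R E cs Ps c1 c2 i1 i2 p1 p2"
    using stacked_dipoleI[OF step.prems(1) d(1)] .
  have "L < length (fst (tpath E'))" "L < length (fst (bpath E'))"
    using dipole_reductions_boundary(1,2)[OF r_into_rtranclp[of dipole_red, OF step.hyps(1)]] step.prems by auto
  then have "junction_agree R E' L"
    using step.IH stacked_dipole.stacking_remove_dipole[OF dip] d(2) step.prems(4) by blast
  then show ?case using stacked_dipole.junction_agree_remove_dipole[OF dip] d(2) step.prems(2,3)
    by blast
qed

lemma dgm_iso_junction:
  assumes iso: "dgm_iso D1 D2" and st: "stacking R D1 cs Ps"
    and L: "L < length (fst (tpath D1))" "L < length (fst (bpath D1))"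
    and eq: "fst (tpath D2) ! L = fst (bpath D2) ! L"
  shows "fst (tpath D1) ! L = fst (bpath D1) ! L"
proof -
  interpret stacked R D1 cs Ps using st by unfold_locales
  obtain fV fE fC where f: "bij_betw fV (verts D1) (verts D2)"
    "tpath D2 = map_dpath fV fE (tpath D1)" "bpath D2 = map_dpath fV fE (bpath D1)"
    using iso unfolding dgm_iso_def by blast
  have "fst (tpath D1) ! L \<in> verts D1" "fst (bpath D1) ! L \<in> verts D1"
    using simple_stage[of 0] simple_stage[of "length cs"] stage_0 stage_last L
    by (auto simp: simple_path_def)
  moreover have "fV (fst (tpath D1) ! L) = fV (fst (bpath D1) ! L)"
    using eq f(2,3) L by (simp add: map_dpath_def)
  ultimately show ?thesis using bij_betw_imp_inj_on[OF f(1)] by (meson inj_onD)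
qed

lemma (in stacked) junction_agree_if_eq:
  assumes "\<forall>(x, y) \<in> R. x \<noteq> [] \<and> y \<noteq> []" and "fst (tpath E) ! L = fst (bpath E) ! L"
  shows "junction_agree R E L"
  using parallel_paths_pres_eq[OF assms(1)] assms(2) unfolding junction_agree_def by metis

lemma mu_eq_if_junction_agree:
  assumes "junction_agree R D L" "vle D x0 (fst (tpath D) ! L)" "vle D x0 (fst (bpath D) ! L)"
  shows "mu R D x0 (fst (tpath D) ! L) = mu R D x0 (fst (bpath D) ! L)"
proof -
  let ?o1 = "fst (tpath D) ! L" and ?o2 = "fst (bpath D) ! L"
  have "is_pos_path D x0 ?o1 (SOME es. is_pos_path D x0 ?o1 es)"
    "is_pos_path D x0 ?o2 (SOME es. is_pos_path D x0 ?o2 es)"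
    using assms(2,3) unfolding vle_def by (meson someI_ex)+
  then show ?thesis using assms(1) pres_class_eq
    unfolding junction_agree_def mu_def label_def by blast
qed

lemma build_stacking_boundary:
  assumes nonempty_rel: "\<forall>(x, y) \<in> R. x \<noteq> [] \<and> y \<noteq> []" and diag: "is_diagram R w ss w'"
  obtains cs Ps where "stacking R (build w ss) cs Ps"
    "length (fst (tpath (build w ss))) = Suc (length w)" "length (fst (bpath (build w ss))) = Suc (length w')"
proof -
  have v: "valid_steps R w ss" "final_word w ss = w'" using diag by (auto simp: is_diagram_def)
  obtain cs Ps where st: "stacking R (build w ss) cs Ps"
    and word: "map (elab (build w ss)) (snd (bpath (build w ss))) = w'"
    using stacking_build[OF nonempty_rel v(1)] v(2) by auto
  interpret stacked R "build w ss" cs Ps using st by unfold_locales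
  have "simple_path (build w ss) (bpath (build w ss))"
    using simple_stage[of "length cs"] stage_last by simp
  then have "length (fst (bpath (build w ss))) = Suc (length w')"
    using word by (auto simp: simple_path_def dest: arg_cong[of _ _ length])
  moreover have "length (fst (tpath (build w ss))) = Suc (length w)"
    by (simp add: build_def tpath_build_aux init_dgm_def Let_def del: upt_Suc)
  ultimately show ?thesis using that st by blast
qed

theorem lemma3:
  fixes R :: "('a list \<times> 'a list) set" and u v :: "'a list"
    and ss :: "'a dstep list" and x0 :: nat
  assumes semigroup_pres: "\<forall>(x, y) \<in> R. x \<noteq> [] \<and> y \<noteq> []"
    and diag: "is_diagram R (u @ v) ss (u @ v)"
    and vert: "x0 \<in> verts (build (u @ v) ss)"
    and le1: "vle (build (u @ v) ss) x0 (fst (tpath (build (u @ v) ss)) ! length u)"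
    and le2: "vle (build (u @ v) ss) x0 (fst (bpath (build (u @ v) ss)) ! length u)"
    and split: "\<exists>ss1 ss2. is_diagram R u ss1 u \<and> is_diagram R v ss2 v \<and>
                  dgm_equiv (build (u @ v) ss) (build (u @ v) (sum_steps u ss1 ss2))"
  shows "mu R (build (u @ v) ss) x0 (fst (tpath (build (u @ v) ss)) ! length u)
       = mu R (build (u @ v) ss) x0 (fst (bpath (build (u @ v) ss)) ! length u)"
proof -
  let ?D = "build (u @ v) ss" and ?L = "length u"
  obtain ss1 ss2 where d1: "is_diagram R u ss1 u" and d2: "is_diagram R v ss2 v"
    and "dgm_equiv ?D (build (u @ v) (sum_steps u ss1 ss2))"
    using split by blast
  then obtain D1 D2 where red1: "dipole_red\<^sup>*\<^sup>* ?D D1"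
    and red2: "dipole_red\<^sup>*\<^sup>* (build (u @ v) (sum_steps u ss1 ss2)) D2" and iso: "dgm_iso D1 D2"
    unfolding dgm_equiv_def by blast
  obtain cs Ps where st: "stacking R ?D cs Ps"
    and L: "?L < length (fst (tpath ?D))" "?L < length (fst (bpath ?D))"
    using build_stacking_boundary[OF semigroup_pres diag]
      by (metis length_append less_Suc_eq_le le_add1)
  obtain cs1 Ps1 where st1: "stacking R D1 cs1 Ps1"
    using dipole_reductions_stacking[OF red1 st] by blast
  have "fst (tpath D2) ! ?L = fst (bpath D2) ! ?L"
    using sum_junction[OF semigroup_pres d1 d2] dipole_reductions_boundary(3)[OF red2] by blast
  then have "fst (tpath D1) ! ?L = fst (bpath D1) ! ?L"
    using dgm_iso_junction[OF iso st1] L dipole_reductions_boundary(1,2)[OF red1] by simp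
  then have "junction_agree R D1 ?L"
    using stacked.junction_agree_if_eq[OF stacked.intro[OF st1] semigroup_pres] by blast
  then have "junction_agree R ?D ?L"
    using dipole_reductions_junction_agree[OF red1 st L] by blast
  then show ?thesis using mu_eq_if_junction_agree le1 le2 by blast
qed

end
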